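(* Let $T=\mathbb C/\Lambda$ with $\Lambda=\mathbb Z+\mathbb Z\tau$, let $N\ge3$, let $\alpha\in T$ be a point of exact order $N$, and define $P_j$ as in the context. Let $\mathbb T=T\setminus\{0,\alpha,\dots,(N-1)\alpha\}$. Then $\mathcal O_{\mathbb T}=\mathbb C[P_1,P_2,\dots,P_{N-1}]$. Furthermore, for every integer $j\not\equiv0\pmod N$, $\mathbb C[\wp_{\Lambda_{(\alpha)}}]=\mathbb C[P_{-j}P_j]$; that is, $P_{-j}P_j$ generates the algebra of even meromorphic functions on the torus $\mathbb C/\Lambda_{(\alpha)}$ that are holomorphic away from $0$.
   Context: $\mathcal O_{\mathbb T}$ is the $\mathbb C$-algebra of meromorphic functions on $T$ that are holomorphic on $\mathbb T$. For a lattice $L$, $\wp_L(z)=z^{-2}+\sum_{0\ne\omega\in L}((z-\omega)^{-2}-\omega^{-2})$; $\wp=\wp_\Lambda$. If $\alpha'\in\mathbb C$ is a lift of $\alpha$, then $\Lambda_{(\alpha)}=\mathbb Z+\mathbb Z\alpha'+\mathbb Z\tau$. Put $\omega_N=e^{2\pi i/N}$ and $\tilde\wp=\wp-\wp(\alpha)$. Let $r$ be the translation $z\mapsto z+\alpha$, acting on functions by $(r^kf)(z)=f(z-k\alpha)$, and for $j\in\mathbb Z$ let $P_j=\sum_{k=0}^{N-1}\dfrac{r^k\wp'}{\omega_N^{kj}\,r^k\tilde\wp}$ (indices of $P_j$ taken modulo $N$). *)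

theory Defs
  imports "HOL-Complex_Analysis.Complex_Analysis"
begin

definition lattice :: "complex \<Rightarrow> complex set" where
  "lattice \<tau> = {of_int m + of_int n * \<tau> | m n. True}"

definition lattice_alpha :: "complex \<Rightarrow> complex \<Rightarrow> complex set" where
  "lattice_alpha \<tau> \<alpha> = {of_int m + of_int n * \<alpha> + of_int k * \<tau> | m n k. True}"

text \<open>Weierstrass wp function of a lattice L (the infinite sum is absolutely convergent
  off L; values on L are irrelevant, being poles).\<close>
definition wp :: "complex set \<Rightarrow> complex \<Rightarrow> complex" where
  "wp L z = 1 / z ^ 2 + (\<Sum>\<^sub>\<infinity>\<omega>\<in>L - {0}. 1 / (z - \<omega>) ^ 2 - 1 / \<omega> ^ 2)"

definition root_unity :: "nat \<Rightarrow> complex" where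
  "root_unity N = exp (2 * of_real pi * \<i> / of_nat N)"

definition P :: "complex \<Rightarrow> complex \<Rightarrow> nat \<Rightarrow> int \<Rightarrow> complex \<Rightarrow> complex" where
  "P \<tau> \<alpha> N j z = (\<Sum>k<N. deriv (wp (lattice \<tau>)) (z - of_nat k * \<alpha>) /
      (root_unity N powi (int k * j) *
       (wp (lattice \<tau>) (z - of_nat k * \<alpha>) - wp (lattice \<tau>) \<alpha>)))"

text \<open>Exact order N of the point alpha (given by a lift) in C / Lambda.\<close>
definition exact_order :: "complex \<Rightarrow> complex \<Rightarrow> nat \<Rightarrow> bool" where
  "exact_order \<tau> \<alpha> N \<longleftrightarrow> 0 < N \<and> of_nat N * \<alpha> \<in> lattice \<tau> \<and>
     (\<forall>k::nat. 0 < k \<and> k < N \<longrightarrow> of_nat k * \<alpha> \<notin> lattice \<tau>)"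

text \<open>Preimage in C of the punctured torus T minus {0, alpha, ..., (N-1) alpha}.\<close>
definition punctured :: "complex \<Rightarrow> complex \<Rightarrow> nat \<Rightarrow> complex set" where
  "punctured \<tau> \<alpha> N = UNIV - {z. \<exists>k<N. z - of_nat k * \<alpha> \<in> lattice \<tau>}"

text \<open>O_T: meromorphic functions on the torus (Lambda-periodic meromorphic functions on C)
  that are holomorphic on the punctured torus.  Functions are regarded on the open set U.\<close>
definition O_T :: "complex \<Rightarrow> complex \<Rightarrow> nat \<Rightarrow> (complex \<Rightarrow> complex) set" where
  "O_T \<tau> \<alpha> N = {f. f meromorphic_on UNIV \<and> f holomorphic_on punctured \<tau> \<alpha> N \<and>
      (\<forall>z \<in> punctured \<tau> \<alpha> N. \<forall>\<omega> \<in> lattice \<tau>. f (z + \<omega>) = f z)}"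

inductive_set gen_alg :: "(complex \<Rightarrow> complex) set \<Rightarrow> (complex \<Rightarrow> complex) set"
  for G where
  const: "(\<lambda>_. c) \<in> gen_alg G"
| gen: "g \<in> G \<Longrightarrow> g \<in> gen_alg G"
| add: "f \<in> gen_alg G \<Longrightarrow> g \<in> gen_alg G \<Longrightarrow> (\<lambda>z. f z + g z) \<in> gen_alg G"
| mult: "f \<in> gen_alg G \<Longrightarrow> g \<in> gen_alg G \<Longrightarrow> (\<lambda>z. f z * g z) \<in> gen_alg G"

definition eq_on_sets :: "complex set \<Rightarrow> (complex \<Rightarrow> complex) set \<Rightarrow> (complex \<Rightarrow> complex) set \<Rightarrow> bool" where
  "eq_on_sets U A B \<longleftrightarrow> (\<forall>f\<in>A. \<exists>g\<in>B. \<forall>z\<in>U. f z = g z) \<and> (\<forall>g\<in>B. \<exists>f\<in>A. \<forall>z\<in>U. f z = g z)"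

end

(*
  Let \<wp>\<^sup>~ = \<wp> - \<wp>(\<alpha>). Integrating over a period parallelogram shows that the residues of an
  elliptic function sum to zero; applied to \<wp>'/\<wp>\<^sup>~ this shows that \<wp>\<^sup>~ has exactly the two simple
  zeros \<plusminus>\<alpha> modulo \<Lambda>. Hence P_j = \<Sum>_k \<omega>^(-kj) (\<wp>'/\<wp>\<^sup>~)(z - k\<alpha>) has at most simple poles,
  at the points m\<alpha>, with residue \<omega>^(-mj) (\<omega>^j + \<omega>^(-j) - 2), which is nonzero unless N divides j.

  For the first claim, let f be in O_T with poles of order at most n at the m\<alpha>. The principal
  parts of order n are matched by a linear combination of the products P_i P_i' P_1^(n-2) (n \<ge> 2),
  respectively of P_1, ..., P_(N-1) (n = 1, where the residues of f sum to zero); the coefficients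
  come from inverting a discrete Fourier transform over the N-th roots of unity. Subtracting lowers
  the pole order, and an elliptic function without poles is constant by Liouville's theorem.

  For the second claim, P_(-j) P_j and c \<Sum>_k \<wp>(z - k\<alpha>) = c (\<wp>_{\<Lambda>_(\<alpha>)} + const), with
  c = (\<omega>^j + \<omega>^(-j) - 2)^2 \<noteq> 0, are both invariant under z \<mapsto> z + \<alpha> and have the same double
  poles. Their difference has at most simple poles with equal residues at the N points m\<alpha>;
  as these sum to zero, it has no poles and is constant.
*)
theory Submission
  imports Defs
begin

lemma summable_int_powr: "(\<lambda>m::int. (1 + \<bar>real_of_int m\<bar>) powr (-3/2)) summable_on UNIV"
proof -
  let ?a = "\<lambda>m::int. (1 + \<bar>real_of_int m\<bar>) powr (-3/2)"
  have s0: "summable (\<lambda>n. real n powr (-3/2))"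
    by (subst summable_real_powr_iff) simp
  have s1: "summable (\<lambda>n. real (Suc n) powr (-3/2))"
    using s0 by (subst summable_Suc_iff)
  have s2: "summable (\<lambda>n. real (Suc (Suc n)) powr (-3/2))"
    using s1 by (subst summable_Suc_iff[where f = "\<lambda>n. real (Suc n) powr (-3/2)"])
  have A: "?a summable_on range int"
  proof -
    have "(?a \<circ> int) summable_on UNIV"
      using s1 by (subst summable_on_UNIV_nonneg_real_iff) (auto simp: o_def add.commute)
    then show ?thesis by (subst summable_on_reindex) auto
  qed
  have B: "?a summable_on range (\<lambda>n. - int n - 1)"
  proof -
    have "(?a \<circ> (\<lambda>n. - int n - 1)) summable_on UNIV"
    proof (subst summable_on_UNIV_nonneg_real_iff)
      show "summable (?a \<circ> (\<lambda>n. - int n - 1))"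
        using s2 by (simp add: o_def)
    qed auto
    then show ?thesis by (subst summable_on_reindex) (auto simp: inj_on_def)
  qed
  have U: "(UNIV :: int set) = range int \<union> range (\<lambda>n. - int n - 1)"
  proof -
    { fix m :: int
      have "m \<in> range int \<union> range (\<lambda>n. - int n - 1)"
      proof (cases "m \<ge> 0")
        case True then show ?thesis by (auto intro: image_eqI[of _ _ "nat m"])
      next
        case False then show ?thesis by (auto intro!: image_eqI[of _ _ "nat (- m - 1)"])
      qed }
    then show ?thesis by auto
  qed
  have "?a summable_on (range int \<union> range (\<lambda>n. - int n - 1))"
    by (rule summable_on_Un_disjoint[OF A B]) auto
  then show ?thesis using U by simp
qed

lemma norm_inverse_square_diff_le:
  fixes a b \<omega> :: complex
  assumes a: "norm a \<le> R" and b: "norm b \<le> R" and w: "2*R \<le> norm \<omega>" and R: "R > 0"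
  shows "norm (1/(a-\<omega>)^2 - 1/(b-\<omega>)^2) \<le> 96 * R / norm \<omega> ^ 3"
proof -
  have da: "norm \<omega> / 2 \<le> norm (a - \<omega>)"
    using a w norm_triangle_ineq2[of \<omega> a] by (simp add: norm_minus_commute)
  have db: "norm \<omega> / 2 \<le> norm (b - \<omega>)"
    using b w norm_triangle_ineq2[of \<omega> b] by (simp add: norm_minus_commute)
  have wpos: "norm \<omega> > 0" using w R by linarith
  have an: "a - \<omega> \<noteq> 0" using da wpos by auto
  have bn: "b - \<omega> \<noteq> 0" using db wpos by auto
  have eq0: "1/(a-\<omega>)^2 - 1/(b-\<omega>)^2 = ((b-\<omega>)^2 - (a-\<omega>)^2) / ((a-\<omega>)^2 * (b-\<omega>)^2)"
    using an bn by (simp add: divide_simps)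
  have eq1: "(b-\<omega>)^2 - (a-\<omega>)^2 = (b - a) * (b + a - 2*\<omega>)"
    by (simp add: power2_eq_square algebra_simps)
  have eq: "1/(a-\<omega>)^2 - 1/(b-\<omega>)^2 = ((b - a) * (b + a - 2*\<omega>)) / ((a-\<omega>)^2 * (b-\<omega>)^2)"
    using eq0 unfolding eq1 .
  have n1: "norm (b - a) \<le> 2 * R" using a b norm_triangle_ineq4[of b a] by linarith
  have n2: "norm (b + a - 2*\<omega>) \<le> 3 * norm \<omega>"
  proof -
    have "norm (b + a - 2*\<omega>) \<le> norm (b + a) + norm (2*\<omega>)" by (rule norm_triangle_ineq4)
    moreover have "norm (b + a) \<le> norm b + norm a" by (rule norm_triangle_ineq)
    ultimately have "norm (b + a - 2*\<omega>) \<le> norm b + norm a + norm (2*\<omega>)" by linarith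
    then show ?thesis using a b w by (simp add: norm_mult)
  qed
  have den: "(norm \<omega> / 2)^2 * (norm \<omega> / 2)^2 \<le> norm (a-\<omega>)^2 * norm (b-\<omega>)^2"
    using da db wpos by (intro mult_mono power_mono) auto
  have "norm (1/(a-\<omega>)^2 - 1/(b-\<omega>)^2) = norm (b - a) * norm (b + a - 2*\<omega>) / (norm (a-\<omega>)^2 * norm (b-\<omega>)^2)"
    unfolding eq by (simp add: norm_mult norm_divide norm_power)
  also have "\<dots> \<le> (2 * R) * (3 * norm \<omega>) / ((norm \<omega> / 2)^2 * (norm \<omega> / 2)^2)"
    using n1 n2 den wpos R da db by (intro frac_le mult_mono) auto
  also have "\<dots> = 96 * R / norm \<omega> ^ 3" using wpos by (simp add: field_simps power2_eq_square power3_eq_cube)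
  finally show ?thesis .
qed

lemma norm_inverse_cube_le:
  fixes z \<omega> :: complex
  assumes a: "norm z \<le> R" and w: "2*R \<le> norm \<omega>" and R: "R > 0"
  shows "norm (1/(z-\<omega>)^3) \<le> 8 / norm \<omega> ^ 3"
proof -
  have da: "norm \<omega> / 2 \<le> norm (z - \<omega>)"
    using a w norm_triangle_ineq2[of \<omega> z] by (simp add: norm_minus_commute)
  have wpos: "norm \<omega> > 0" using w R by linarith
  have "norm (1/(z-\<omega>)^3) = 1 / norm (z-\<omega>)^3" by (simp add: norm_divide norm_power)
  also have "\<dots> \<le> 1 / (norm \<omega> / 2)^3"
    using da wpos by (intro divide_left_mono power_mono mult_pos_pos zero_less_power) auto
  also have "\<dots> = 8 / norm \<omega> ^ 3" by (simp add: power_divide)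
  finally show ?thesis .
qed

lemma has_field_derivative_inverse_square:
  fixes w \<omega> c :: complex
  assumes "w - \<omega> \<noteq> 0"
  shows "((\<lambda>z. 1/(z-\<omega>)^2 - c) has_field_derivative -2/(w-\<omega>)^3) (at w)"
proof -
  have inv: "-(2*d * inverse ((d^2)^Suc (Suc 0))) = -2/d^3" if "d \<noteq> 0" for d :: complex
    using that by (simp add: field_simps power2_eq_square power3_eq_cube)
  have "((\<lambda>z. (z-\<omega>)^2) has_field_derivative 2*(w-\<omega>)) (at w)"
    by (auto intro!: derivative_eq_intros)
  from DERIV_inverse_fun[OF this] assms
  have "((\<lambda>z. inverse ((z-\<omega>)^2)) has_field_derivative -2/(w-\<omega>)^3) (at w)"
    unfolding inv[OF assms] by simp
  from DERIV_diff[OF this DERIV_const[of c]] show ?thesis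
    by (simp add: inverse_eq_divide)
qed

lemma half_not_in_Ints: "(1/2::real) \<notin> \<int>"
proof
  assume "(1/2::real) \<in> \<int>"
  then obtain k where k: "(1/2::real) = of_int k" by (auto elim!: Ints_cases)
  then have "(of_int (2*k) :: real) = of_int 1" by simp
  then have "2*k = 1" by (simp only: of_int_eq_iff)
  then show False by presburger
qed

lemma infsum_diff:
  fixes f g :: "'a \<Rightarrow> complex"
  assumes "f summable_on A" "g summable_on A"
  shows "infsum (\<lambda>x. f x - g x) A = infsum f A - infsum g A"
proof -
  have "(\<lambda>x. - g x) summable_on A" using assms(2) by (simp add: summable_on_uminus)
  then have "infsum (\<lambda>x. f x + - g x) A = infsum f A + infsum (\<lambda>x. - g x) A"
    by (rule infsum_add[OF assms(1)])
  then show ?thesis by (simp add: infsum_uminus)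
qed

lemma sum_lessThan_shift_periodic:
  fixes \<phi> :: "nat \<Rightarrow> 'a::ab_group_add"
  assumes "\<phi> N = \<phi> 0"
  shows "(\<Sum>k<N. \<phi> (Suc k)) = (\<Sum>k<N. \<phi> k)"
proof -
  have "(\<Sum>k<Suc N. \<phi> k) = \<phi> 0 + (\<Sum>k<N. \<phi> (Suc k))" by (rule sum.lessThan_Suc_shift)
  moreover have "(\<Sum>k<Suc N. \<phi> k) = (\<Sum>k<N. \<phi> k) + \<phi> N" by simp
  ultimately show ?thesis using assms by (simp add: algebra_simps)
qed

lemma pred_succ_mod_distinct:
  fixes m N :: nat
  assumes N: "N \<ge> 3" and m: "m < N"
  shows "m \<noteq> (m + N - 1) mod N" "m \<noteq> (m + 1) mod N" "(m + N - 1) mod N \<noteq> (m + 1) mod N"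
proof -
  have pred: "(m + N - 1) mod N = (if m = 0 then N - 1 else m - 1)"
  proof (cases "m = 0")
    case False
    then have e: "m + N - 1 = (m - 1) + N" by simp
    have "(m + N - 1) mod N = (m - 1) mod N" unfolding e by (rule mod_add_self2)
    then show ?thesis using False m by simp
  qed (use N in simp)
  have succ: "(m + 1) mod N = (if m + 1 = N then 0 else m + 1)"
    using m by (auto simp: mod_if)
  show "m \<noteq> (m + N - 1) mod N" "m \<noteq> (m + 1) mod N" "(m + N - 1) mod N \<noteq> (m + 1) mod N"
    unfolding pred succ using N m by auto
qed

lemma sum_of_two_nonzero_residues:
  fixes N :: nat and t :: int
  assumes N: "N \<ge> 3"
  shows "\<exists>i1 i2. 1 \<le> i1 \<and> i1 \<le> int N - 1 \<and> 1 \<le> i2 \<and> i2 \<le> int N - 1 \<and>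
           (i1 + i2) mod int N = t mod int N"
proof (cases "t mod int N = 1")
  case True
  have "(int N - 1 + 2) mod int N = 1 mod int N" by (simp add: algebra_simps)
  then show ?thesis using N True by (intro exI[of _ "int N - 1"] exI[of _ 2]) auto
next
  case False
  define u where "u = t mod int N"
  have u: "0 \<le> u" "u < int N" "u \<noteq> 1" using N False by (auto simp: u_def)
  have "(u - 1) mod int N \<noteq> 0"
  proof
    assume "(u - 1) mod int N = 0"
    then have "int N dvd (u - 1)" by (simp add: dvd_eq_mod_eq_0)
    moreover have "u - 1 \<noteq> 0" "\<bar>u - 1\<bar> < int N" using u N by auto
    ultimately show False using zdvd_imp_le[of "int N" "\<bar>u - 1\<bar>"] by auto
  qed
  moreover have "0 \<le> (u - 1) mod int N" "(u - 1) mod int N < int N" using N by auto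
  moreover have "(1 + (u - 1) mod int N) mod int N = t mod int N"
    by (simp add: u_def mod_add_right_eq)
  ultimately have "1 \<le> (1::int) \<and> 1 \<le> int N - 1 \<and> 1 \<le> (u - 1) mod int N \<and>
      (u - 1) mod int N \<le> int N - 1 \<and> (1 + (u - 1) mod int N) mod int N = t mod int N"
    using N by (intro conjI) linarith+
  then show ?thesis by blast
qed

lemma sum_eq_two_weights:
  fixes n :: "'a \<Rightarrow> nat"
  assumes T: "finite T" "a \<in> T" "b \<in> T" "a \<noteq> b" and pos: "\<And>x. x \<in> T \<Longrightarrow> n x \<ge> 1"
    and s: "(\<Sum>x\<in>T. n x) = 2"
  shows "T = {a, b}" "n a = 1" "n b = 1"
proof -
  have split: "(\<Sum>x\<in>T. n x) = n a + n b + (\<Sum>x\<in>T - {a, b}. n x)"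
  proof -
    have "(\<Sum>x\<in>T. n x) = (\<Sum>x\<in>{a,b}. n x) + (\<Sum>x\<in>T - {a, b}. n x)"
      using T by (subst sum.subset_diff[of "{a,b}" T]) auto
    then show ?thesis using T by simp
  qed
  have "n a \<ge> 1" "n b \<ge> 1" using pos T by auto
  then have z: "(\<Sum>x\<in>T - {a, b}. n x) = 0" and "n a = 1" "n b = 1" using s split by linarith+
  then show "n a = 1" "n b = 1" by auto
  have "T - {a, b} = {}"
  proof (rule ccontr)
    assume "T - {a, b} \<noteq> {}"
    then obtain x where x: "x \<in> T - {a, b}" by auto
    have "n x = 0" using z x T(1) by (simp add: sum_eq_0_iff)
    moreover have "n x \<ge> 1" using pos x by auto
    ultimately show False by simp
  qed
  then show "T = {a, b}" using T by auto
qed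

lemma countable_real_avoid: "countable (A :: real set) \<Longrightarrow> \<exists>x. x \<notin> A"
  using uncountable_UNIV_real by (metis UNIV_eq_I countable_subset subset_UNIV)

section \<open>Contour integrals and residues\<close>

lemma contour_integral_linepath_translate: "contour_integral (linepath (a + c) (b + c)) f = contour_integral (linepath a b) (\<lambda>z. f (z + c))"
proof -
  have l: "\<And>x. linepath (a + c) (b + c) x = linepath a b x + c"
    by (simp add: linepath_def scaleR_add_right algebra_simps)
  show ?thesis unfolding contour_integral_integral vector_derivative_linepath_at l by simp
qed

lemma in_closed_segment_horizontal:
  fixes u :: complex and s c t :: real
  assumes "s \<le> c" "c \<le> t"
  shows "u + of_real c \<in> closed_segment (u + of_real s) (u + of_real t)"
proof (cases "s = t")
  case True then show ?thesis using assms by simp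
next
  case False
  then have st: "s < t" using assms by simp
  define \<theta> where "\<theta> = (c - s) / (t - s)"
  have th: "0 \<le> \<theta>" "\<theta> \<le> 1" using assms st by (auto simp: \<theta>_def field_simps)
  have "(1 - \<theta>) *\<^sub>R (u + of_real s) + \<theta> *\<^sub>R (u + of_real t) = u + of_real (s + \<theta> * (t - s))"
    by (simp add: scaleR_conv_of_real algebra_simps)
  also have "s + \<theta> * (t - s) = c" using st by (simp add: \<theta>_def)
  finally have eq: "u + of_real c = (1 - \<theta>) *\<^sub>R (u + of_real s) + \<theta> *\<^sub>R (u + of_real t)" by simp
  show ?thesis unfolding closed_segment_def by (rule CollectI, rule exI[of _ \<theta>]) (use th eq in auto)
qed

lemma contour_integral_horizontal_period:
  fixes f :: "complex \<Rightarrow> complex" and u :: complex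
  assumes cont: "continuous_on {z. Im z = Im u} f"
    and per: "\<And>z. Im z = Im u \<Longrightarrow> f (z + 1) = f z"
  shows "contour_integral (linepath (u + of_real s) (u + of_real s + 1)) f = contour_integral (linepath u (u + 1)) f"
proof -
  define J where "J = (\<lambda>s t. contour_integral (linepath (u + of_real s) (u + of_real t)) f)"
  have segsub: "closed_segment (u + of_real s) (u + of_real t) \<subseteq> {z. Im z = Im u}" for s t
    by (subst closed_segment_same_Im) auto
  have split: "J s t = J s c + J c t" if "s \<le> c" "c \<le> t" for s c t
    unfolding J_def
    by (rule contour_integral_split_linepath[OF continuous_on_subset[OF cont segsub] in_closed_segment_horizontal[OF that]])
  have trans: "J (s + 1) (t + 1) = J s t" for s t
  proof -
    have "J (s + 1) (t + 1) = contour_integral (linepath ((u + of_real s) + 1) ((u + of_real t) + 1)) f"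
      by (simp add: J_def add.assoc)
    also have "\<dots> = contour_integral (linepath (u + of_real s) (u + of_real t)) (\<lambda>z. f (z + 1))"
      by (rule contour_integral_linepath_translate)
    also have "\<dots> = J s t" unfolding J_def
      by (rule contour_integral_cong) (use segsub per in auto)
    finally show ?thesis .
  qed
  have int: "J (of_int k) (of_int k + 1) = J 0 1" for k :: int
  proof (induction k rule: int_induct[where k = 0])
    case base then show ?case by simp
  next
    case (step1 i) then show ?case using trans[of "of_int i" "of_int i + 1"] by (simp add: add.commute)
  next
    case (step2 i) then show ?case using trans[of "of_int i - 1" "of_int i"] by simp
  qed
  define n where "n = ceiling s"
  have n: "s \<le> of_int n" "of_int n \<le> s + 1" "of_int n - 1 \<le> s" unfolding n_def by linarith+
  have "J s (s + 1) = J s (of_int n) + J (of_int n) (s + 1)" using n by (intro split) auto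
  also have "J (of_int n) (s + 1) = J (of_int n - 1) s" using trans[of "of_int n - 1" s] by simp
  also have "J s (of_int n) + J (of_int n - 1) s = J (of_int n - 1) (of_int n)"
    using split[of "of_int n - 1" s "of_int n"] n by simp
  also have "\<dots> = J (of_int (n - 1)) (of_int (n - 1) + 1)" by simp
  also have "\<dots> = J 0 1" by (rule int)
  finally show ?thesis by (simp add: J_def add.assoc)
qed

lemma contour_integral_rectpath:
  fixes f :: "complex \<Rightarrow> complex"
  assumes "continuous_on (path_image (rectpath a c)) f"
  defines "b \<equiv> Complex (Re c) (Im a)" and "d \<equiv> Complex (Re a) (Im c)"
  shows "contour_integral (rectpath a c) f = contour_integral (linepath a b) f +
           contour_integral (linepath b c) f + contour_integral (linepath c d) f +
           contour_integral (linepath d a) f"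
proof -
  have rp: "rectpath a c = linepath a b +++ linepath b c +++ linepath c d +++ linepath d a"
    by (simp add: rectpath_def Let_def b_def d_def)
  have "continuous_on (closed_segment a b \<union> closed_segment b c \<union> closed_segment c d \<union> closed_segment d a) f"
    using assms(1) unfolding rp by (simp add: path_image_join Un_assoc)
  then have "f contour_integrable_on linepath a b" "f contour_integrable_on linepath b c"
    "f contour_integrable_on linepath c d" "f contour_integrable_on linepath d a"
    by (auto intro!: contour_integrable_continuous_linepath elim: continuous_on_subset)
  then show ?thesis unfolding rp by (simp add: contour_integrable_joinI add.assoc)
qed

lemma contour_integral_linepath_translate_cancel:
  fixes f :: "complex \<Rightarrow> complex"
  assumes "\<And>z. z \<in> closed_segment a b \<Longrightarrow> f (z + c) = f z"
  shows "contour_integral (linepath (a + c) (b + c)) f + contour_integral (linepath b a) f = 0"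
proof -
  have "contour_integral (linepath (a + c) (b + c)) f = contour_integral (linepath a b) (\<lambda>z. f (z + c))"
    by (rule contour_integral_linepath_translate)
  also have "\<dots> = contour_integral (linepath a b) f"
    by (rule contour_integral_cong) (use assms in auto)
  also have "\<dots> = - contour_integral (linepath b a) f"
    using contour_integral_reversepath[of "linepath b a" f] by simp
  finally show ?thesis by simp
qed

lemma rectpath_residue_theorem:
  fixes f :: "complex \<Rightarrow> complex"
  assumes B: "closed B" "countable B" and h: "f holomorphic_on - B"
    and le: "Re a \<le> Re b" "Im a \<le> Im b" and fin: "finite (B \<inter> box a b)"
    and avoid: "path_image (rectpath a b) \<subseteq> - B"
  shows "contour_integral (rectpath a b) f = 2 * pi * \<i> * (\<Sum>p\<in>B \<inter> box a b. residue f p)"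
proof -
  define S where "S = - (B - box a b)"
  have "open S" unfolding S_def Diff_eq by (intro open_Compl closed_Int closed_Compl open_box B)
  have "connected (UNIV - (B - box a b))"
    using B by (intro connected_open_diff_countable) (auto intro: countable_subset)
  then have "connected S" by (simp add: S_def Compl_eq_Diff_UNIV)
  have "winding_number (rectpath a b) z = 0" if "z \<notin> S" for z
  proof -
    have "z \<in> B" "z \<notin> box a b" using that by (auto simp: S_def)
    then have "z \<notin> cbox a b" using avoid path_image_rectpath_cbox_minus_box[OF le] by auto
    then show ?thesis by (rule winding_number_rectpath_outside[OF le])
  qed
  moreover have "S - (B \<inter> box a b) = - B" by (auto simp: S_def)
  ultimately have "contour_integral (rectpath a b) f =
      2 * pi * \<i> * (\<Sum>p\<in>B \<inter> box a b. winding_number (rectpath a b) p * residue f p)"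
    using \<open>open S\<close> \<open>connected S\<close> fin h avoid
    by (intro Residue_theorem[OF _ _ _ _ valid_path_rectpath]) auto
  also have "(\<Sum>p\<in>B \<inter> box a b. winding_number (rectpath a b) p * residue f p)
      = (\<Sum>p\<in>B \<inter> box a b. residue f p)"
    by (intro sum.cong refl) (simp add: winding_number_rectpath)
  finally show ?thesis .
qed

lemma removable_singularities_extend:
  fixes f :: "complex \<Rightarrow> complex"
  assumes B: "\<And>z. \<not> z islimpt B" and h: "f holomorphic_on - B"
    and lim: "\<And>b. b \<in> B \<Longrightarrow> \<exists>c. (f \<longlongrightarrow> c) (at b)"
  obtains g where "g holomorphic_on UNIV" "\<And>z. z \<notin> B \<Longrightarrow> g z = f z"
proof -
  define g where "g = (\<lambda>z. if z \<in> B then Lim (at z) f else f z)"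
  have opB: "open (- B)" using B by (simp add: closed_limpt open_Compl)
  have evB: "\<forall>\<^sub>F w in at z. w \<notin> B" for z using B islimpt_iff_eventually by blast
  have contg: "isCont g z" for z
  proof (cases "z \<in> B")
    case True
    then obtain c where c: "(f \<longlongrightarrow> c) (at z)" using lim by blast
    then have "g z = c" using True by (simp add: g_def tendsto_Lim)
    moreover have "\<forall>\<^sub>F w in at z. f w = g w" using evB[of z] by eventually_elim (simp add: g_def)
    ultimately show ?thesis unfolding isCont_def using c by (auto intro: Lim_transform_eventually)
  next
    case False
    have "isCont f z" using h opB False
      by (meson ComplI continuous_on_eq_continuous_at holomorphic_on_imp_continuous_on)
    moreover have "eventually (\<lambda>w. f w = g w) (nhds z)"
      using opB False by (intro eventually_nhds_in_open[THEN eventually_mono]) (auto simp: g_def)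
    ultimately show ?thesis using isCont_cong by blast
  qed
  have "g field_differentiable (at z)" for z
  proof -
    obtain r where r: "r > 0" "\<forall>w\<in>ball z r. w \<noteq> z \<longrightarrow> w \<notin> B"
      using evB[of z] unfolding eventually_at by (auto simp: dist_commute)
    have "g holomorphic_on ball z r"
    proof (rule no_isolated_singularity[where K = "{z}"])
      show "continuous_on (ball z r) g" using contg by (intro continuous_at_imp_continuous_on) auto
      have "f holomorphic_on ball z r - {z}" by (rule holomorphic_on_subset[OF h]) (use r in auto)
      then show "g holomorphic_on ball z r - {z}"
        by (rule holomorphic_transform) (use r in \<open>auto simp: g_def\<close>)
    qed auto
    then show ?thesis using r by (intro holomorphic_on_imp_differentiable_at) auto
  qed
  then have "g holomorphic_on UNIV" by (simp add: holomorphic_on_def)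
  then show ?thesis using that by (simp add: g_def)
qed

lemma tendsto_simple_pole_translate:
  fixes f :: "complex \<Rightarrow> complex"
  assumes "((\<lambda>w. (w - p) * f w) \<longlongrightarrow> c) (at p)"
  shows "((\<lambda>z. (z - (p + d)) * f (z - d)) \<longlongrightarrow> c) (at (p + d))"
proof -
  have "((\<lambda>x. (x + d - (p + d)) * f (x + d - d)) \<longlongrightarrow> c) (at p)" using assms by simp
  then have "((\<lambda>z. (z - (p + d)) * f (z - d)) \<longlongrightarrow> c) (filtermap (\<lambda>x. x - (-d)) (at p))"
    by (simp add: filterlim_filtermap)
  then show ?thesis unfolding filtermap_at_shift by simp
qed

lemma tendsto_log_deriv_zero:
  fixes f h Df :: "complex \<Rightarrow> complex"
  assumes r: "r > 0" and n: "n > 0" and hh: "h holomorphic_on ball q r"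
    and hnz: "\<And>w. w \<in> ball q r \<Longrightarrow> h w \<noteq> 0"
    and fe: "\<And>w. w \<in> ball q r \<Longrightarrow> f w = (w - q)^n * h w"
    and Df: "\<And>w. w \<in> ball q r - {q} \<Longrightarrow> (f has_field_derivative Df w) (at w)"
  shows "((\<lambda>w. (w - q) * (Df w / f w)) \<longlongrightarrow> of_nat n) (at q)"
proof -
  define h' where "h' = deriv h"
  have hd: "(h has_field_derivative h' w) (at w)" if wb: "w \<in> ball q r" for w
    using holomorphic_derivI[OF hh open_ball wb, where T=UNIV] unfolding h'_def by simp
  have h'h: "h' holomorphic_on ball q r" unfolding h'_def by (intro holomorphic_deriv hh) auto
  have eq: "(w - q) * (Df w / f w) = of_nat n + (w - q) * (h' w / h w)" if w: "w \<in> ball q r - {q}" for w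
  proof -
    have wb: "w \<in> ball q r" and wq: "w - q \<noteq> 0" using w by auto
    have d1: "((\<lambda>w. (w - q)^n * h w) has_field_derivative
        (of_nat n * (w - q)^(n - 1) * 1) * h w + (w - q)^n * h' w) (at w)"
      by (rule DERIV_cong[OF DERIV_mult[OF DERIV_power[OF DERIV_diff[OF DERIV_ident DERIV_const]] hd[OF wb]]])
         (simp add: algebra_simps)
    have d2: "(f has_field_derivative (of_nat n * (w - q)^(n - 1) * 1) * h w + (w - q)^n * h' w) (at w)"
      by (rule has_field_derivative_transform_within_open[OF d1 open_ball wb]) (use fe in auto)
    have DfE: "Df w = of_nat n * (w - q)^(n - 1) * h w + (w - q)^n * h' w"
      using DERIV_unique[OF Df[OF w] d2] by simp
    have pw: "(w - q) * (w - q)^(n - 1) = (w - q)^n" using n by (cases n) auto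
    have "(w - q) * (Df w / f w) = ((w - q) * Df w) / ((w - q)^n * h w)" using fe[OF wb] by simp
    also have "(w - q) * Df w = of_nat n * (w - q)^n * h w + (w - q) * ((w - q)^n * h' w)"
      unfolding DfE by (simp add: algebra_simps pw[symmetric])
    also have "(of_nat n * (w - q)^n * h w + (w - q) * ((w - q)^n * h' w)) / ((w - q)^n * h w)
        = of_nat n + (w - q) * (h' w / h w)"
      using wq hnz[OF wb] by (simp add: field_simps)
    finally show ?thesis .
  qed
  have qb: "q \<in> ball q r" using r by simp
  have ch: "isCont h q" using hh qb by (meson continuous_on_eq_continuous_at holomorphic_on_imp_continuous_on open_ball)
  have ch': "isCont h' q" using h'h qb by (meson continuous_on_eq_continuous_at holomorphic_on_imp_continuous_on open_ball)
  have "((\<lambda>w. of_nat n + (w - q) * (h' w / h w)) \<longlongrightarrow> of_nat n + (q - q) * (h' q / h q)) (at q)"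
    using ch ch' hnz[OF qb] by (intro tendsto_intros) (auto simp: isCont_def)
  then have "((\<lambda>w. of_nat n + (w - q) * (h' w / h w)) \<longlongrightarrow> of_nat n) (at q)" by simp
  moreover have "\<forall>\<^sub>F w in at q. of_nat n + (w - q) * (h' w / h w) = (w - q) * (Df w / f w)"
    using eventually_at_ball'[OF r, of q UNIV] by eventually_elim (use eq in auto)
  ultimately show ?thesis by (rule Lim_transform_eventually)
qed

definition pole_le :: "(complex \<Rightarrow> complex) \<Rightarrow> complex \<Rightarrow> nat \<Rightarrow> complex \<Rightarrow> bool" where
  "pole_le f b n c \<longleftrightarrow> ((\<lambda>w. (w - b)^n * f w) \<longlongrightarrow> c) (at b)"

lemma pole_le_cong: "(\<forall>\<^sub>F w in at b. f w = g w) \<Longrightarrow> pole_le f b n c \<Longrightarrow> pole_le g b n c"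
  unfolding pole_le_def by (rule Lim_transform_eventually) (auto elim: eventually_mono)

lemma pole_le_const: "pole_le (\<lambda>_. a) b 0 a"
  by (simp add: pole_le_def)

lemma pole_le_Suc: "pole_le f b n c \<Longrightarrow> pole_le f b (Suc n) 0"
proof -
  assume "pole_le f b n c"
  then have "((\<lambda>w. (w - b) * ((w - b)^n * f w)) \<longlongrightarrow> (b - b) * c) (at b)"
    unfolding pole_le_def by (intro tendsto_intros) auto
  then show ?thesis by (simp add: pole_le_def mult_ac)
qed

lemma pole_le_mono: "pole_le f b n c \<Longrightarrow> n \<le> k \<Longrightarrow> \<exists>c'. pole_le f b k c'"
proof (induction k)
  case 0 then show ?case by auto
next
  case (Suc k)
  show ?case
  proof (cases "n = Suc k")
    case True then show ?thesis using Suc by auto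
  next
    case False
    then obtain c' where "pole_le f b k c'" using Suc by auto
    then show ?thesis using pole_le_Suc by blast
  qed
qed

lemma pole_le_add: "pole_le f b n c \<Longrightarrow> pole_le g b n d \<Longrightarrow> pole_le (\<lambda>z. f z + g z) b n (c + d)"
  unfolding pole_le_def by (drule (1) tendsto_add) (simp add: distrib_left)

lemma pole_le_diff: "pole_le f b n c \<Longrightarrow> pole_le g b n d \<Longrightarrow> pole_le (\<lambda>z. f z - g z) b n (c - d)"
  unfolding pole_le_def by (drule (1) tendsto_diff) (simp add: right_diff_distrib)

lemma pole_le_mult: "pole_le f b n c \<Longrightarrow> pole_le g b m d \<Longrightarrow> pole_le (\<lambda>z. f z * g z) b (n + m) (c * d)"
  unfolding pole_le_def by (drule (1) tendsto_mult) (simp add: power_add mult_ac)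

lemma pole_le_cmult: "pole_le f b n c \<Longrightarrow> pole_le (\<lambda>z. a * f z) b n (a * c)"
  unfolding pole_le_def by (drule tendsto_mult[OF tendsto_const, of _ _ _ a]) (simp add: mult_ac)

lemma pole_le_sum: "finite T \<Longrightarrow> (\<And>t. t \<in> T \<Longrightarrow> pole_le (f t) b n (c t)) \<Longrightarrow>
    pole_le (\<lambda>z. \<Sum>t\<in>T. f t z) b n (\<Sum>t\<in>T. c t)"
  unfolding pole_le_def by (drule tendsto_sum[of T]) (auto simp: sum_distrib_left)

lemma pole_le_power: "pole_le f b n c \<Longrightarrow> pole_le (\<lambda>z. f z ^ k) b (n * k) (c ^ k)"
proof (induction k)
  case 0 then show ?case by (simp add: pole_le_def)
next
  case (Suc k)
  have "pole_le (\<lambda>z. f z * f z ^ k) b (n + n * k) (c * c ^ k)" by (rule pole_le_mult[OF Suc.prems Suc.IH[OF Suc.prems]])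
  then show ?case by simp
qed

lemma pole_le_lower:
  assumes r: "r > 0" and h: "f holomorphic_on ball b r - {b}" and o: "pole_le f b (Suc n) 0"
  shows "\<exists>c. pole_le f b n c"
proof -
  define G where "G = (\<lambda>w. if w = b then 0 else (w - b)^Suc n * f w)"
  have lim: "(G \<longlongrightarrow> 0) (at b)"
  proof -
    have "((\<lambda>w. (w - b)^Suc n * f w) \<longlongrightarrow> 0) (at b)" using o by (simp add: pole_le_def)
    moreover have "\<forall>\<^sub>F w in at b. (w - b)^Suc n * f w = G w" by (simp add: G_def eventually_at_filter)
    ultimately show ?thesis by (rule Lim_transform_eventually)
  qed
  have hG: "G holomorphic_on ball b r - {b}"
  proof -
    have "(\<lambda>w. (w - b)^Suc n * f w) holomorphic_on ball b r - {b}" by (intro holomorphic_intros h)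
    then show ?thesis by (rule holomorphic_transform) (auto simp: G_def)
  qed
  have cG: "continuous_on (ball b r) G"
  proof -
    have "isCont G w" if w: "w \<in> ball b r" for w
    proof (cases "w = b")
      case True then show ?thesis using lim by (simp add: isCont_def G_def)
    next
      case False
      then have "w \<in> ball b r - {b}" using w by auto
      moreover have "open (ball b r - {b})" by auto
      ultimately show ?thesis using hG
        by (meson continuous_on_eq_continuous_at holomorphic_on_imp_continuous_on)
    qed
    then show ?thesis by (intro continuous_at_imp_continuous_on) auto
  qed
  have "G holomorphic_on ball b r" by (rule no_isolated_singularity[OF cG hG]) auto
  then have "(G has_field_derivative deriv G b) (at b)"
    using r by (intro holomorphic_derivI) auto
  then have "((\<lambda>w. (G w - G b) / (w - b)) \<longlongrightarrow> deriv G b) (at b)"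
    by (simp add: has_field_derivative_iff)
  moreover have "\<forall>\<^sub>F w in at b. (G w - G b) / (w - b) = (w - b)^n * f w"
    by (auto simp: G_def eventually_at_filter)
  ultimately have "pole_le f b n (deriv G b)" unfolding pole_le_def by (rule Lim_transform_eventually)
  then show ?thesis by blast
qed

lemma pole_le_imp_not_essential:
  assumes r: "r > 0" and h: "f holomorphic_on ball b r - {b}" and o: "pole_le f b n c"
  shows "isolated_singularity_at f b \<and> not_essential f b"
proof
  show iso: "isolated_singularity_at f b"
    by (rule isolated_singularity_at_holomorphic[OF h]) (use r in auto)
  have ne1: "not_essential (\<lambda>w. (w - b)^n * f w) b"
    using o unfolding pole_le_def not_essential_def by blast
  have iso1: "isolated_singularity_at (\<lambda>w. (w - b)^n * f w) b"
    by (rule isolated_singularity_at_holomorphic[of _ "ball b r"]) (use r h in \<open>auto intro!: holomorphic_intros\<close>)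
  have iso2: "isolated_singularity_at (\<lambda>w. (w - b)^n) b"
    by (rule isolated_singularity_at_holomorphic[of _ "ball b r"]) (use r in \<open>auto intro!: holomorphic_intros\<close>)
  have ne2: "not_essential (\<lambda>w. (w - b)^n) b"
    by (rule not_essential_holomorphic[of _ UNIV]) (auto intro!: holomorphic_intros)
  have "not_essential (\<lambda>w. ((w - b)^n * f w) / (w - b)^n) b"
    by (rule not_essential_divide[OF ne1 ne2 iso1 iso2])
  moreover have ev: "\<forall>\<^sub>F w in at b. ((w - b)^n * f w) / (w - b)^n = f w"
    by (auto simp: eventually_at_filter)
  ultimately show "not_essential f b" using not_essential_cong[OF ev refl] by blast
qed

lemma not_essential_imp_pole_le:
  assumes r: "r > 0" and h: "f holomorphic_on ball b r - {b}" and ne: "not_essential f b"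
  shows "\<exists>n c. pole_le f b n c"
proof (cases "is_pole f b")
  case False
  then obtain x where "(f \<longlongrightarrow> x) (at b)" using ne by (auto simp: not_essential_def)
  then have "pole_le f b 0 x" by (simp add: pole_le_def)
  then show ?thesis by blast
next
  case True
  define n where "n = zorder f b"
  define g where "g = zor_poly f b"
  obtain r' where r': "r' > 0" "cball b r' \<subseteq> ball b r" "g holomorphic_on cball b r'"
      "\<forall>w\<in>cball b r' - {b}. f w = g w / (w - b) ^ nat (- n) \<and> g w \<noteq> 0"
    using zorder_exist_pole[OF h _ _ True] r unfolding n_def g_def by auto
  have "isCont g b"
  proof -
    have "g holomorphic_on ball b r'" using r'(3) by (rule holomorphic_on_subset) auto
    then show ?thesis using r'(1)
      by (meson centre_in_ball continuous_on_eq_continuous_at holomorphic_on_imp_continuous_on open_ball)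
  qed
  then have "(g \<longlongrightarrow> g b) (at b)" by (simp add: isCont_def)
  moreover have "\<forall>\<^sub>F w in at b. g w = (w - b) ^ nat (- n) * f w"
    using eventually_at_ball'[OF r'(1), of b UNIV]
    by eventually_elim (use r'(4) in \<open>auto simp: field_simps\<close>)
  ultimately have "pole_le f b (nat (- n)) (g b)" unfolding pole_le_def by (rule Lim_transform_eventually)
  then show ?thesis by blast
qed

lemma pole_le_translate:
  assumes ev: "\<forall>\<^sub>F x in at q. f (x + d) = f x" and o: "pole_le f q n c"
  shows "pole_le f (q + d) n c"
proof -
  have e2: "\<forall>\<^sub>F x in at q. (x - q)^n * f x = (x + d - (q + d))^n * f (x + d)"
    using ev by eventually_elim simp
  have "((\<lambda>x. (x + d - (q + d))^n * f (x + d)) \<longlongrightarrow> c) (at q)"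
    using o unfolding pole_le_def by (rule Lim_transform_eventually[OF _ e2])
  then have "((\<lambda>w. (w - (q + d))^n * f w) \<longlongrightarrow> c) (filtermap (\<lambda>x. x - (-d)) (at q))"
    by (simp add: filterlim_filtermap)
  then show ?thesis unfolding filtermap_at_shift pole_le_def by simp
qed

lemma gen_alg_affine_transfer:
  assumes f: "f \<in> gen_alg {g}" and eq: "\<And>z. z \<in> U \<Longrightarrow> g z = a * h z + b"
  shows "\<exists>f'\<in>gen_alg {h}. \<forall>z\<in>U. f z = f' z"
  using f
proof (induction rule: gen_alg.induct)
  case (const c)
  then show ?case by (intro bexI[of _ "\<lambda>_. c"] gen_alg.const) auto
next
  case (gen g')
  then have g': "g' = g" by simp
  have "(\<lambda>z. (\<lambda>_. a) z * h z + (\<lambda>_. b) z) \<in> gen_alg {h}"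
    by (intro gen_alg.add gen_alg.mult gen_alg.const gen_alg.gen) auto
  then show ?case using eq g' by (intro bexI[of _ "\<lambda>z. a * h z + b"]) auto
next
  case (add f g)
  then obtain f' g' where "f' \<in> gen_alg {h}" "\<forall>z\<in>U. f z = f' z" "g' \<in> gen_alg {h}" "\<forall>z\<in>U. g z = g' z" by blast
  then show ?case by (intro bexI[of _ "\<lambda>z. f' z + g' z"] gen_alg.add) auto
next
  case (mult f g)
  then obtain f' g' where "f' \<in> gen_alg {h}" "\<forall>z\<in>U. f z = f' z" "g' \<in> gen_alg {h}" "\<forall>z\<in>U. g z = g' z" by blast
  then show ?case by (intro bexI[of _ "\<lambda>z. f' z * g' z"] gen_alg.mult) auto
qed

lemma eq_on_sets_gen_alg_affine:
  assumes a: "a \<noteq> 0" and g: "\<And>z. z \<in> U \<Longrightarrow> g z = a * h z + b"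
  shows "eq_on_sets U (gen_alg {h}) (gen_alg {g})"
  unfolding eq_on_sets_def
proof (intro conjI ballI)
  fix f assume "f \<in> gen_alg {h}"
  moreover have "h z = (1 / a) * g z + (- b / a)" if "z \<in> U" for z
    using a g[OF that] by (simp add: field_simps)
  ultimately show "\<exists>f'\<in>gen_alg {g}. \<forall>z\<in>U. f z = f' z" by (rule gen_alg_affine_transfer)
next
  fix f assume "f \<in> gen_alg {g}"
  then have "\<exists>f'\<in>gen_alg {h}. \<forall>z\<in>U. f z = f' z"
    by (rule gen_alg_affine_transfer) (rule g)
  then obtain f' where "f' \<in> gen_alg {h}" "\<forall>z\<in>U. f z = f' z" by blast
  then show "\<exists>f'\<in>gen_alg {h}. \<forall>z\<in>U. f' z = f z" by auto
qed

section \<open>The period lattice\<close>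

locale complex_lattice =
  fixes \<tau> :: complex
  assumes Im_tau_pos: "Im \<tau> > 0"
begin

abbreviation "\<Lambda> \<equiv> lattice \<tau>"

lemma in_lattice_iff: "z \<in> \<Lambda> \<longleftrightarrow> (\<exists>m n::int. z = of_int m + of_int n * \<tau>)"
  by (auto simp: lattice_def)

lemma zero_in_lattice [simp]: "0 \<in> \<Lambda>"
  unfolding in_lattice_iff by (rule exI[of _ 0], rule exI[of _ 0]) simp

lemma one_in_lattice [simp]: "1 \<in> \<Lambda>"
  unfolding in_lattice_iff by (rule exI[of _ 1], rule exI[of _ 0]) simp

lemma tau_in_lattice [simp]: "\<tau> \<in> \<Lambda>"
  unfolding in_lattice_iff by (rule exI[of _ 0], rule exI[of _ 1]) simp

lemma lattice_add: "a \<in> \<Lambda> \<Longrightarrow> b \<in> \<Lambda> \<Longrightarrow> a + b \<in> \<Lambda>"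
  unfolding in_lattice_iff
proof (elim exE)
  fix m n m' n' :: int
  assume "a = of_int m + of_int n * \<tau>" "b = of_int m' + of_int n' * \<tau>"
  then show "\<exists>m n::int. a + b = of_int m + of_int n * \<tau>"
    by (intro exI[of _ "m+m'"] exI[of _ "n+n'"]) (simp add: algebra_simps)
qed

lemma lattice_uminus: "a \<in> \<Lambda> \<Longrightarrow> - a \<in> \<Lambda>"
  unfolding in_lattice_iff
proof (elim exE)
  fix m n :: int
  assume "a = of_int m + of_int n * \<tau>"
  then show "\<exists>m n::int. - a = of_int m + of_int n * \<tau>"
    by (intro exI[of _ "-m"] exI[of _ "-n"]) (simp add: algebra_simps)
qed

lemma lattice_uminus_iff [simp]: "- a \<in> \<Lambda> \<longleftrightarrow> a \<in> \<Lambda>"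
  using lattice_uminus[of a] lattice_uminus[of "-a"] by auto

lemma lattice_diff: "a \<in> \<Lambda> \<Longrightarrow> b \<in> \<Lambda> \<Longrightarrow> a - b \<in> \<Lambda>"
  using lattice_add[of a "-b"] lattice_uminus[of b] by simp

lemma lattice_add_iff: "b \<in> \<Lambda> \<Longrightarrow> a + b \<in> \<Lambda> \<longleftrightarrow> a \<in> \<Lambda>"
  using lattice_add[of a b] lattice_diff[of "a+b" b] by auto

lemma lattice_of_int_mult: "a \<in> \<Lambda> \<Longrightarrow> of_int k * a \<in> \<Lambda>"
  unfolding in_lattice_iff
proof (elim exE)
  fix m n :: int
  assume "a = of_int m + of_int n * \<tau>"
  then show "\<exists>m n::int. of_int k * a = of_int m + of_int n * \<tau>"
    by (intro exI[of _ "k*m"] exI[of _ "k*n"]) (simp add: algebra_simps)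
qed

lemma lattice_of_nat_mult: "a \<in> \<Lambda> \<Longrightarrow> of_nat k * a \<in> \<Lambda>"
  using lattice_of_int_mult[of a "int k"] by simp

lemma of_int_in_lattice [simp]: "of_int k \<in> \<Lambda>"
  using lattice_of_int_mult[OF one_in_lattice, of k] by simp

lemma of_nat_in_lattice [simp]: "of_nat k \<in> \<Lambda>"
  using of_int_in_lattice[of "int k"] by simp

lemma countable_lattice: "countable \<Lambda>"
proof -
  have "\<Lambda> = (\<lambda>(m,n). of_int m + of_int n * \<tau>) ` (UNIV :: (int \<times> int) set)"
    by (auto simp: lattice_def)
  then show ?thesis by simp
qed

definition coord2 :: "complex \<Rightarrow> real" where "coord2 z = Im z / Im \<tau>"
definition coord1 :: "complex \<Rightarrow> real" where "coord1 z = Re z - coord2 z * Re \<tau>"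

lemma coords_decomp: "z = of_real (coord1 z) + of_real (coord2 z) * \<tau>"
  using Im_tau_pos by (simp add: complex_eq_iff coord1_def coord2_def)

lemma coords_unique:
  assumes "of_real x + of_real y * \<tau> = of_real x' + of_real y' * \<tau>"
  shows "x = x'" "y = y'"
proof -
  from arg_cong[OF assms, of Im] have "y * Im \<tau> = y' * Im \<tau>" by simp
  then show "y = y'" using Im_tau_pos by simp
  with arg_cong[OF assms, of Re] show "x = x'" by simp
qed

lemma coord2_lin: "coord2 (of_real x + of_real y * \<tau>) = y"
  using Im_tau_pos by (simp add: coord2_def)
lemma coord1_lin: "coord1 (of_real x + of_real y * \<tau>) = x"
  using Im_tau_pos by (simp add: coord1_def coord2_def)

lemma coord1_diff: "coord1 (a - b) = coord1 a - coord1 b" and coord2_diff: "coord2 (a - b) = coord2 a - coord2 b"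
  by (simp_all add: coord1_def coord2_def algebra_simps diff_divide_distrib)

lemma in_lattice_iff_coords: "z \<in> \<Lambda> \<longleftrightarrow> coord1 z \<in> \<int> \<and> coord2 z \<in> \<int>"
proof
  assume "z \<in> \<Lambda>"
  then obtain m n :: int where z: "z = of_int m + of_int n * \<tau>" by (auto simp: in_lattice_iff)
  have "z = of_real (of_int m) + of_real (of_int n) * \<tau>" using z by simp
  then show "coord1 z \<in> \<int> \<and> coord2 z \<in> \<int>" using coord1_lin coord2_lin by (metis Ints_of_int)
next
  assume "coord1 z \<in> \<int> \<and> coord2 z \<in> \<int>"
  then obtain m n where "coord1 z = of_int m" "coord2 z = of_int n" by (auto elim!: Ints_cases)
  then have "z = of_int m + of_int n * \<tau>" using coords_decomp[of z] by simp
  then show "z \<in> \<Lambda>" by (auto simp: in_lattice_iff)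
qed

definition coord_const :: real where "coord_const = 1 + (1 + \<bar>Re \<tau>\<bar>) / Im \<tau>"

lemma coord_const_pos: "coord_const > 0" using Im_tau_pos by (simp add: coord_const_def add_pos_nonneg)

lemma coords_le_norm: "\<bar>coord1 z\<bar> + \<bar>coord2 z\<bar> \<le> coord_const * norm z"
proof -
  have cyb: "\<bar>coord2 z\<bar> \<le> norm z / Im \<tau>"
    using Im_tau_pos abs_Im_le_cmod[of z] by (simp add: coord2_def abs_div divide_right_mono)
  have "\<bar>coord1 z\<bar> \<le> \<bar>Re z\<bar> + \<bar>coord2 z\<bar> * \<bar>Re \<tau>\<bar>"
    unfolding coord1_def by (metis abs_mult abs_triangle_ineq4)
  also have "\<dots> \<le> norm z + norm z / Im \<tau> * \<bar>Re \<tau>\<bar>"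
    by (intro add_mono mult_right_mono cyb abs_Re_le_cmod) auto
  finally have "\<bar>coord1 z\<bar> + \<bar>coord2 z\<bar> \<le> norm z + norm z / Im \<tau> * \<bar>Re \<tau>\<bar> + norm z / Im \<tau>"
    using cyb by linarith
  also have "\<dots> = coord_const * norm z" using Im_tau_pos by (simp add: coord_const_def field_simps)
  finally show ?thesis .
qed

lemma finite_lattice_norm_le: "finite {\<omega>\<in>\<Lambda>. norm \<omega> \<le> R}"
proof -
  define M where "M = ceiling (coord_const * R)"
  have "{\<omega>\<in>\<Lambda>. norm \<omega> \<le> R} \<subseteq> (\<lambda>(m,n). of_int m + of_int n * \<tau>) ` ({-M..M} \<times> {-M..M})"
  proof
    fix \<omega> assume "\<omega> \<in> {\<omega>\<in>\<Lambda>. norm \<omega> \<le> R}"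
    then have w: "\<omega> \<in> \<Lambda>" "norm \<omega> \<le> R" by auto
    then obtain m n where mn: "coord1 \<omega> = of_int m" "coord2 \<omega> = of_int n"
      by (auto simp: in_lattice_iff_coords elim!: Ints_cases)
    have "\<bar>coord1 \<omega>\<bar> + \<bar>coord2 \<omega>\<bar> \<le> coord_const * R"
      using coords_le_norm[of \<omega>] w(2) coord_const_pos by (meson mult_left_mono less_imp_le order_trans)
    then have "\<bar>m\<bar> \<le> M" "\<bar>n\<bar> \<le> M" using mn unfolding M_def by linarith+
    moreover have "\<omega> = of_int m + of_int n * \<tau>" using coords_decomp[of \<omega>] mn by simp
    ultimately show "\<omega> \<in> (\<lambda>(m,n). of_int m + of_int n * \<tau>) ` ({-M..M} \<times> {-M..M})"
      by (intro image_eqI[of _ _ "(m,n)"]) auto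
  qed
  then show ?thesis by (rule finite_subset) auto
qed

lemma inj_lattice_param: "inj (\<lambda>(m::int, n::int). of_int m + of_int n * \<tau>)"
proof (rule injI, clarify)
  fix m n m' n' :: int
  assume "of_int m + of_int n * \<tau> = of_int m' + of_int n' * \<tau>"
  then have "of_real (of_int m) + of_real (of_int n) * \<tau> = of_real (of_int m') + of_real (of_int n') * \<tau>"
    by simp
  from coords_unique[OF this] show "m = m' \<and> n = n'" by simp
qed

lemma lattice_eq_range: "\<Lambda> = (\<lambda>(m::int, n::int). of_int m + of_int n * \<tau>) ` UNIV"
  by (auto simp: lattice_def)

lemma inverse_norm_cube_lattice_le:
  fixes m n :: int
  assumes "(m, n) \<noteq> (0, 0)"
  shows "1 / norm (of_int m + of_int n * \<tau>) ^ 3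
           \<le> 27 * coord_const^3 * ((1 + \<bar>real_of_int m\<bar>) powr (-3/2) * (1 + \<bar>real_of_int n\<bar>) powr (-3/2))"
proof -
  define \<omega> where "\<omega> = of_int m + of_int n * (\<tau> :: complex)"
  define A where "A = 1 + \<bar>real_of_int m\<bar>"
  define B where "B = 1 + \<bar>real_of_int n\<bar>"
  have A1: "A \<ge> 1" and B1: "B \<ge> 1" by (auto simp: A_def B_def)
  have "coord1 \<omega> = m" "coord2 \<omega> = n"
    using coord1_lin[of m n] coord2_lin[of m n] by (simp_all add: \<omega>_def)
  moreover have "1 \<le> \<bar>real_of_int m\<bar> + \<bar>real_of_int n\<bar>" using assms by auto
  ultimately have "(A + B) / 3 \<le> coord_const * norm \<omega>"
    using coords_le_norm[of \<omega>] by (simp add: A_def B_def)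
  then have nb: "(A + B) / (3 * coord_const) \<le> norm \<omega>"
    using coord_const_pos by (simp add: field_simps)
  have pos: "0 < (A + B) / (3 * coord_const)" using A1 B1 coord_const_pos by simp
  have "A * B \<le> (A + B)^2" using A1 B1 by (simp add: power2_eq_square algebra_simps)
  then have "(A * B) powr (3/2) \<le> ((A + B) powr 2) powr (3/2)"
    using A1 B1 by (intro powr_mono2) (auto simp: powr_numeral)
  also have "\<dots> = (A + B) powr (2 * (3/2))" by (rule powr_powr)
  also have "\<dots> = (A + B) ^ 3" using A1 B1 by (simp add: powr_numeral)
  finally have AB: "(A * B) powr (3/2) \<le> (A + B) ^ 3" .
  have "1 / norm \<omega> ^ 3 \<le> 1 / ((A + B) / (3 * coord_const)) ^ 3"
    using nb pos by (intro divide_left_mono power_mono mult_pos_pos zero_less_power) auto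
  also have "\<dots> = 27 * coord_const^3 / (A + B)^3" by (simp add: power_divide)
  also have "\<dots> \<le> 27 * coord_const^3 / (A * B) powr (3/2)"
    using A1 B1 coord_const_pos AB by (intro divide_left_mono) auto
  also have "\<dots> = 27 * coord_const^3 * (inverse (A powr (3/2)) * inverse (B powr (3/2)))"
    using A1 B1 by (simp only: powr_mult divide_inverse inverse_mult_distrib)
  finally show ?thesis by (simp add: \<omega>_def A_def B_def powr_minus)
qed

lemma summable_lattice_inverse_norm_cube: "(\<lambda>\<omega>. 1 / norm \<omega> ^ 3) summable_on (\<Lambda> - {0})"
proof -
  define h where "h = (\<lambda>(m::int, n::int). of_int m + of_int n * \<tau>)"
  define a where "a = (\<lambda>m::int. (1 + \<bar>real_of_int m\<bar>) powr (-3/2))"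
  have a_sum: "a summable_on UNIV" unfolding a_def by (rule summable_int_powr)
  have prod: "(\<lambda>(m,n). a m * a n) summable_on (UNIV \<times> UNIV)"
  proof (rule summable_on_SigmaI[where g = "\<lambda>m. a m * infsum a UNIV"])
    fix m :: int
    show "((\<lambda>n. case (m, n) of (m, n) \<Rightarrow> a m * a n) has_sum a m * infsum a UNIV) UNIV"
      using has_sum_cmult_right[OF has_sum_infsum[OF a_sum], of "a m"] by simp
  next
    show "(\<lambda>m. a m * infsum a UNIV) summable_on UNIV"
      by (rule summable_on_cmult_left[OF a_sum])
  qed (simp add: a_def)
  have img: "\<Lambda> - {0} = h ` (UNIV - {(0,0)})"
  proof -
    have "h (0,0) = 0" by (simp add: h_def)
    then show ?thesis using inj_lattice_param unfolding lattice_eq_range h_def[symmetric]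
      by (metis image_set_diff image_empty image_insert)
  qed
  have "(\<lambda>p. 1 / norm (h p) ^ 3) summable_on (UNIV - {(0,0)})"
  proof (rule summable_on_comparison_test)
    show "(\<lambda>p. 27 * coord_const ^ 3 * (case p of (m, n) \<Rightarrow> a m * a n)) summable_on (UNIV - {(0,0)})"
      using summable_on_cmult_right[OF prod, of "27 * coord_const^3"]
      by (rule summable_on_subset) auto
    fix p :: "int \<times> int" assume "p \<in> UNIV - {(0,0)}"
    then show "1 / norm (h p) ^ 3 \<le> 27 * coord_const ^ 3 * (case p of (m, n) \<Rightarrow> a m * a n)"
      using inverse_norm_cube_lattice_le[of "fst p" "snd p"] by (cases p) (simp add: h_def a_def)
  qed simp
  then show ?thesis unfolding img
    by (subst summable_on_reindex) (use inj_lattice_param in \<open>auto simp: h_def inj_on_def o_def\<close>)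
qed

lemma not_islimpt_lattice: "\<not> z islimpt \<Lambda>"
proof
  assume "z islimpt \<Lambda>"
  then have "infinite (\<Lambda> \<inter> cball z 1)" by (auto simp: islimpt_eq_infinite_cball)
  moreover have "\<Lambda> \<inter> cball z 1 \<subseteq> {\<omega>\<in>\<Lambda>. norm \<omega> \<le> norm z + 1}"
    using norm_triangle_ineq2[of _ z] by (auto simp: dist_norm norm_minus_commute)
       (smt (verit, best) norm_triangle_ineq2 norm_minus_commute)
  ultimately show False using finite_lattice_norm_le finite_subset by blast
qed

lemma closed_lattice_subset: "S \<subseteq> \<Lambda> \<Longrightarrow> closed S"
  unfolding closed_limpt using not_islimpt_lattice islimpt_subset by blast

lemma eventually_notin_lattice: "\<forall>\<^sub>F w in at z. w \<notin> \<Lambda>"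
  using not_islimpt_lattice islimpt_iff_eventually by blast

lemma summable_lattice_cubic_decay:
  fixes f :: "complex \<Rightarrow> 'a::banach"
  assumes R: "R > 0" and b: "\<And>\<omega>. \<omega> \<in> \<Lambda> \<Longrightarrow> R \<le> norm \<omega> \<Longrightarrow> norm (f \<omega>) \<le> C / norm \<omega> ^ 3"
  shows "f summable_on \<Lambda>"
proof -
  have fin: "finite (\<Lambda> \<inter> {\<omega>. norm \<omega> < R})"
    by (rule finite_subset[OF _ finite_lattice_norm_le[of R]]) auto
  have "(\<lambda>\<omega>. norm (f \<omega>)) summable_on (\<Lambda> \<inter> {\<omega>. R \<le> norm \<omega>})"
  proof (rule Infinite_Sum.abs_summable_on_comparison_test')
    show "(\<lambda>\<omega>. C * (1 / norm \<omega> ^ 3)) summable_on (\<Lambda> \<inter> {\<omega>. R \<le> norm \<omega>})"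
      using R by (intro summable_on_subset[OF summable_on_cmult_right[OF summable_lattice_inverse_norm_cube, of C]]) auto
  qed (use b in auto)
  then have s2: "f summable_on (\<Lambda> \<inter> {\<omega>. R \<le> norm \<omega>})" by (rule Infinite_Sum.abs_summable_summable)
  have "f summable_on ((\<Lambda> \<inter> {\<omega>. norm \<omega> < R}) \<union> (\<Lambda> \<inter> {\<omega>. R \<le> norm \<omega>}))"
    by (rule summable_on_Un_disjoint[OF summable_on_finite[OF fin] s2]) auto
  moreover have "(\<Lambda> \<inter> {\<omega>. norm \<omega> < R}) \<union> (\<Lambda> \<inter> {\<omega>. R \<le> norm \<omega>}) = \<Lambda>" by auto
  ultimately show ?thesis by simp
qed

lemma summable_lattice_inverse_square_diff: "(\<lambda>\<omega>. 1/(a-\<omega>)^2 - 1/(b-\<omega>)^2) summable_on \<Lambda>"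
proof -
  define R where "R = norm a + norm b + 1"
  have R: "R > 0" "norm a \<le> R" "norm b \<le> R" unfolding R_def using norm_ge_zero[of a] norm_ge_zero[of b] by linarith+
  show ?thesis
    by (rule summable_lattice_cubic_decay[of "2*R" _ "96*R"]) (use R norm_inverse_square_diff_le in auto)
qed

lemma summable_wp_terms: "(\<lambda>\<omega>. 1/(z-\<omega>)^2 - 1/\<omega>^2) summable_on \<Lambda>"
  using summable_lattice_inverse_square_diff[of z 0] by simp

lemma summable_lattice_inverse_cube: "(\<lambda>\<omega>. 1/(z-\<omega>)^3) summable_on \<Lambda>"
proof -
  define R where "R = norm z + 1"
  have R: "R > 0" "norm z \<le> R" unfolding R_def using norm_ge_zero[of z] by linarith+
  show ?thesis
    by (rule summable_lattice_cubic_decay[of "2*R" _ "8"]) (use R norm_inverse_cube_le in auto)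
qed

lemma summable_wp'_terms: "(\<lambda>\<omega>. -2/(z-\<omega>)^3) summable_on S" if "S \<subseteq> \<Lambda>"
proof -
  have "(\<lambda>\<omega>. -2 * (1/(z-\<omega>)^3)) summable_on \<Lambda>"
    by (rule summable_on_cmult_right[OF summable_lattice_inverse_cube])
  then show ?thesis using that by (simp add: summable_on_subset)
qed

lemma uniform_limit_wp_sum:
  assumes S: "S \<subseteq> \<Lambda>" and z0: "z0 \<notin> S"
  obtains r where "r > 0" "\<And>z \<omega>. z \<in> cball z0 r \<Longrightarrow> \<omega> \<in> S \<Longrightarrow> r \<le> norm (z - \<omega>)"
    "uniform_limit (cball z0 r) (\<lambda>X z. \<Sum>\<omega>\<in>X. 1/(z-\<omega>)^2 - 1/\<omega>^2)
       (\<lambda>z. \<Sum>\<^sub>\<infinity>\<omega>\<in>S. 1/(z-\<omega>)^2 - 1/\<omega>^2) (finite_subsets_at_top S)"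
proof -
  have "open (- S)" using closed_lattice_subset[OF S] by auto
  then obtain e where e: "e > 0" "ball z0 e \<subseteq> - S" using z0 by (meson ComplI open_contains_ball)
  define r where "r = e / 2"
  have r: "r > 0" using e by (simp add: r_def)
  have far: "r \<le> norm (z - \<omega>)" if "z \<in> cball z0 r" "\<omega> \<in> S" for z \<omega>
  proof -
    have "\<omega> \<notin> ball z0 e" using e that(2) by auto
    then have "e \<le> norm (\<omega> - z0)" by (simp add: dist_norm norm_minus_commute)
    moreover have "norm (z - z0) \<le> r" using that(1) by (simp add: dist_norm norm_minus_commute)
    ultimately show ?thesis using norm_triangle_ineq2[of "\<omega> - z0" "z - z0"] unfolding r_def
      by (simp add: norm_minus_commute)
  qed
  define R where "R = norm z0 + r + 1"
  have R: "R > 0" using r norm_ge_zero[of z0] unfolding R_def by linarith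
  have zR: "norm z \<le> R" if "z \<in> cball z0 r" for z
    using that norm_triangle_ineq2[of z z0] by (simp add: R_def dist_norm norm_minus_commute)
  \<comment> \<open>Weierstrass majorant: the cubic decay bound far out, a crude bound on the finitely many near points.\<close>
  define M :: "complex \<Rightarrow> real"
    where "M = (\<lambda>\<omega>. if 2*R \<le> norm \<omega> then 96*R/norm \<omega>^3 else 1/r^2 + 1/norm \<omega>^2)"
  have Mb: "norm (1/(z-\<omega>)^2 - 1/\<omega>^2) \<le> M \<omega>" if "\<omega> \<in> S" "z \<in> cball z0 r" for \<omega> z
  proof (cases "2*R \<le> norm \<omega>")
    case True
    have "norm (1/(z-\<omega>)^2 - 1/(0-\<omega>)^2) \<le> 96 * R / norm \<omega> ^ 3"
      by (rule norm_inverse_square_diff_le) (use True zR[OF that(2)] R in auto)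
    then show ?thesis using True by (simp add: M_def)
  next
    case False
    have "norm (1/(z-\<omega>)^2 - 1/\<omega>^2) \<le> 1 / norm (z-\<omega>)^2 + 1 / norm \<omega>^2"
      using norm_triangle_ineq4[of "1/(z-\<omega>)^2" "1/\<omega>^2"] by (simp add: norm_divide norm_power)
    moreover have "1 / norm (z-\<omega>)^2 \<le> 1/r^2"
      using far[OF that(2,1)] r by (intro divide_left_mono power_mono mult_pos_pos zero_less_power) auto
    ultimately show ?thesis using False by (simp add: M_def)
  qed
  have Ms: "M summable_on S"
  proof -
    have "M summable_on \<Lambda>"
    proof (rule summable_lattice_cubic_decay[of "2*R" _ "96*R"])
      fix \<omega> assume "\<omega> \<in> \<Lambda>" "2*R \<le> norm \<omega>"
      then show "norm (M \<omega>) \<le> 96*R / norm \<omega>^3" using R by (simp add: M_def)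
    qed (use R in auto)
    then show ?thesis using S by (rule summable_on_subset)
  qed
  show ?thesis by (rule that[OF r far Weierstrass_m_test_general[OF Mb Ms]])
qed

lemma has_field_derivative_lattice_sum:
  assumes S: "S \<subseteq> \<Lambda>" and z0: "z0 \<notin> S"
  shows "((\<lambda>z. \<Sum>\<^sub>\<infinity>\<omega>\<in>S. 1/(z-\<omega>)^2 - 1/\<omega>^2) has_field_derivative (\<Sum>\<^sub>\<infinity>\<omega>\<in>S. -2/(z0-\<omega>)^3)) (at z0)"
proof -
  obtain r where r: "r > 0" and far: "\<And>z \<omega>. z \<in> cball z0 r \<Longrightarrow> \<omega> \<in> S \<Longrightarrow> r \<le> norm (z - \<omega>)"
    and ulim: "uniform_limit (cball z0 r) (\<lambda>X z. \<Sum>\<omega>\<in>X. 1/(z-\<omega>)^2 - 1/\<omega>^2)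
       (\<lambda>z. \<Sum>\<^sub>\<infinity>\<omega>\<in>S. 1/(z-\<omega>)^2 - 1/\<omega>^2) (finite_subsets_at_top S)"
    using uniform_limit_wp_sum[OF S z0] by blast
  have ev: "eventually (\<lambda>X. continuous_on (cball z0 r) (\<lambda>z. \<Sum>\<omega>\<in>X. 1/(z-\<omega>)^2 - 1/\<omega>^2) \<and>
        (\<forall>w \<in> ball z0 r. ((\<lambda>z. \<Sum>\<omega>\<in>X. 1/(z-\<omega>)^2 - 1/\<omega>^2)
           has_field_derivative (\<Sum>\<omega>\<in>X. -2/(w-\<omega>)^3)) (at w)))
        (finite_subsets_at_top S)"
  proof (rule eventually_finite_subsets_at_top_weakI, intro conjI ballI)
    fix X assume X: "finite X" "X \<subseteq> S"
    have nz: "z - \<omega> \<noteq> 0" if "z \<in> cball z0 r" "\<omega> \<in> X" for z \<omega>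
      using far[OF that(1)] X that r by force
    show "continuous_on (cball z0 r) (\<lambda>z. \<Sum>\<omega>\<in>X. 1/(z-\<omega>)^2 - 1/\<omega>^2)"
      using nz by (intro continuous_intros) auto
    fix w assume "w \<in> ball z0 r"
    then show "((\<lambda>z. \<Sum>\<omega>\<in>X. 1/(z-\<omega>)^2 - 1/\<omega>^2) has_field_derivative (\<Sum>\<omega>\<in>X. -2/(w-\<omega>)^3)) (at w)"
      using nz by (intro DERIV_sum has_field_derivative_inverse_square) auto
  qed
  obtain g' where g': "\<And>w. w \<in> ball z0 r \<Longrightarrow>
      ((\<lambda>z. \<Sum>\<^sub>\<infinity>\<omega>\<in>S. 1/(z-\<omega>)^2 - 1/\<omega>^2) has_field_derivative (g' w)) (at w) \<and>
      ((\<lambda>X. \<Sum>\<omega>\<in>X. -2/(w-\<omega>)^3) \<longlongrightarrow> g' w) (finite_subsets_at_top S)"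
    using has_complex_derivative_uniform_limit[OF ev ulim _ r] by auto
  have z0b: "z0 \<in> ball z0 r" using r by simp
  have "((\<lambda>\<omega>. -2/(z0-\<omega>)^3) has_sum g' z0) S"
    using g'[OF z0b] by (simp add: has_sum_def)
  then have "g' z0 = (\<Sum>\<^sub>\<infinity>\<omega>\<in>S. -2/(z0-\<omega>)^3)" by (simp add: infsumI)
  with g'[OF z0b] show ?thesis by simp
qed

section \<open>The Weierstrass function\<close>

definition wp_reg :: "complex \<Rightarrow> complex" where "wp_reg z = (\<Sum>\<^sub>\<infinity>\<omega>\<in>\<Lambda>-{0}. 1/(z-\<omega>)^2 - 1/\<omega>^2)"
definition wp'_reg :: "complex \<Rightarrow> complex" where "wp'_reg z = (\<Sum>\<^sub>\<infinity>\<omega>\<in>\<Lambda>-{0}. -2/(z-\<omega>)^3)"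
definition wp' :: "complex \<Rightarrow> complex" where "wp' z = (\<Sum>\<^sub>\<infinity>\<omega>\<in>\<Lambda>. -2/(z-\<omega>)^3)"

lemma wp_eq_reg: "wp \<Lambda> z = 1/z^2 + wp_reg z" by (simp add: wp_def wp_reg_def)

lemma wp_eq_lattice_sum: "wp \<Lambda> z = (\<Sum>\<^sub>\<infinity>\<omega>\<in>\<Lambda>. 1/(z-\<omega>)^2 - 1/\<omega>^2)"
proof -
  have s: "(\<lambda>\<omega>. 1/(z-\<omega>)^2 - 1/\<omega>^2) summable_on (\<Lambda> - {0})"
    using summable_wp_terms by (rule summable_on_subset) auto
  have "(\<Sum>\<^sub>\<infinity>\<omega>\<in>insert 0 (\<Lambda> - {0}). 1/(z-\<omega>)^2 - 1/\<omega>^2) = (1/(z-0)^2 - 1/0^2) + wp_reg z"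
    unfolding wp_reg_def by (rule infsum_insert[OF s]) auto
  then show ?thesis by (simp add: wp_eq_reg insert_absorb)
qed

lemma wp'_eq_reg: "wp' z = -2/z^3 + wp'_reg z"
proof -
  have s: "(\<lambda>\<omega>. -2/(z-\<omega>)^3) summable_on (\<Lambda> - {0})" by (rule summable_wp'_terms) auto
  have "(\<Sum>\<^sub>\<infinity>\<omega>\<in>insert 0 (\<Lambda> - {0}). -2/(z-\<omega>)^3) = -2/(z-0)^3 + wp'_reg z"
    unfolding wp'_reg_def by (rule infsum_insert[OF s]) auto
  then show ?thesis by (simp add: wp'_def insert_absorb)
qed

lemma has_field_derivative_wp_reg: "z \<notin> \<Lambda> - {0} \<Longrightarrow> (wp_reg has_field_derivative wp'_reg z) (at z)"
  using has_field_derivative_lattice_sum[of "\<Lambda> - {0}" z] by (simp add: wp_reg_def[abs_def] wp'_reg_def)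

lemma has_field_derivative_wp: "z \<notin> \<Lambda> \<Longrightarrow> (wp \<Lambda> has_field_derivative wp' z) (at z)"
proof -
  assume z: "z \<notin> \<Lambda>"
  then have z0: "z - 0 \<noteq> 0" by auto
  have "((\<lambda>z. 1/(z-0)^2 - 0 + wp_reg z) has_field_derivative (-2/(z-0)^3 + wp'_reg z)) (at z)"
    by (rule DERIV_add[OF has_field_derivative_inverse_square[OF z0] has_field_derivative_wp_reg]) (use z in auto)
  then show ?thesis by (simp add: wp_eq_reg[abs_def] wp'_eq_reg)
qed

lemma open_lattice_compl: "open (- \<Lambda>)" using closed_lattice_subset[of \<Lambda>] by auto

lemma open_punctured_lattice_compl: "open (- (\<Lambda> - {0}))" by (rule open_Compl[OF closed_lattice_subset]) auto

lemma connected_lattice_compl: "connected (- \<Lambda>)"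
proof -
  have "connected (UNIV - \<Lambda>)"
    by (rule connected_open_diff_countable) (auto simp: countable_lattice)
  then show ?thesis by (simp add: Compl_eq_Diff_UNIV)
qed

lemma holomorphic_wp: "wp \<Lambda> holomorphic_on (- \<Lambda>)"
  using has_field_derivative_wp open_lattice_compl by (auto simp: holomorphic_on_open)

lemma deriv_wp: "z \<notin> \<Lambda> \<Longrightarrow> deriv (wp \<Lambda>) z = wp' z"
  by (rule DERIV_imp_deriv[OF has_field_derivative_wp])

lemma holomorphic_wp': "wp' holomorphic_on (- \<Lambda>)"
proof -
  have "deriv (wp \<Lambda>) holomorphic_on (- \<Lambda>)" by (rule holomorphic_deriv[OF holomorphic_wp open_lattice_compl])
  then show ?thesis by (rule holomorphic_transform) (simp add: deriv_wp)
qed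

lemma bij_betw_uminus_lattice: "bij_betw uminus \<Lambda> \<Lambda>"
  by (rule bij_betwI[of _ _ _ uminus]) auto

lemma bij_betw_shift_lattice: "p \<in> \<Lambda> \<Longrightarrow> bij_betw (\<lambda>\<omega>. \<omega> - p) \<Lambda> \<Lambda>"
  by (rule bij_betwI[of _ _ _ "\<lambda>\<omega>. \<omega> + p"]) (auto simp: lattice_diff lattice_add)

lemma wp_minus: "wp \<Lambda> (-z) = wp \<Lambda> z"
proof -
  define h where "h = (\<lambda>u. 1/(z-u)^2 - 1/u^2)"
  have "(\<lambda>\<omega>. 1/(-z-\<omega>)^2 - 1/\<omega>^2) = (\<lambda>\<omega>. h (-\<omega>))"
    by (simp add: fun_eq_iff h_def power2_eq_square algebra_simps)
  then have "wp \<Lambda> (-z) = (\<Sum>\<^sub>\<infinity>\<omega>\<in>\<Lambda>. h (-\<omega>))" by (simp add: wp_eq_lattice_sum)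
  also have "\<dots> = (\<Sum>\<^sub>\<infinity>\<omega>\<in>\<Lambda>. h \<omega>)" by (rule infsum_reindex_bij_betw[OF bij_betw_uminus_lattice])
  also have "\<dots> = wp \<Lambda> z" by (simp add: wp_eq_lattice_sum h_def)
  finally show ?thesis .
qed

lemma wp'_periodic: "p \<in> \<Lambda> \<Longrightarrow> wp' (z + p) = wp' z"
proof -
  assume p: "p \<in> \<Lambda>"
  define k where "k = (\<lambda>u. -2/(z-u)^3)"
  have "wp' (z + p) = (\<Sum>\<^sub>\<infinity>\<omega>\<in>\<Lambda>. k (\<omega> - p))" by (simp add: wp'_def k_def algebra_simps)
  also have "\<dots> = (\<Sum>\<^sub>\<infinity>\<omega>\<in>\<Lambda>. k \<omega>)" by (rule infsum_reindex_bij_betw[OF bij_betw_shift_lattice[OF p]])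
  also have "\<dots> = wp' z" by (simp add: wp'_def k_def)
  finally show ?thesis .
qed

lemma half_notin_lattice: "1/2 \<notin> \<Lambda>"
proof
  assume "1/2 \<in> \<Lambda>"
  then have "coord1 (1/2) \<in> \<int>" by (simp add: in_lattice_iff_coords)
  moreover have "coord1 (1/2) = 1/2" by (simp add: coord1_def coord2_def)
  ultimately show False using half_not_in_Ints by simp
qed

lemma half_tau_notin_lattice: "\<tau>/2 \<notin> \<Lambda>"
proof
  assume "\<tau>/2 \<in> \<Lambda>"
  then have "coord2 (\<tau>/2) \<in> \<int>" by (simp add: in_lattice_iff_coords)
  moreover have "coord2 (\<tau>/2) = 1/2" using Im_tau_pos by (simp add: coord2_def)
  ultimately show False using half_not_in_Ints by simp
qed

lemma wp_periodic_generator: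
  assumes p: "p \<in> \<Lambda>" "p/2 \<notin> \<Lambda>"
  shows "\<forall>z\<in>-\<Lambda>. wp \<Lambda> (z + p) = wp \<Lambda> z"
proof -
  define h where "h = (\<lambda>z. wp \<Lambda> (z + p) - wp \<Lambda> z)"
  have dh: "(h has_field_derivative 0) (at z)" if "z \<in> -\<Lambda>" for z
  proof -
    have zp: "z + p \<notin> \<Lambda>" using that p lattice_add_iff by auto
    have "((\<lambda>z. wp \<Lambda> (z + p)) has_field_derivative wp' (z + p)) (at z)"
      using has_field_derivative_wp[OF zp] by (simp add: DERIV_shift)
    then have "(h has_field_derivative wp' (z + p) - wp' z) (at z)"
      unfolding h_def by (rule DERIV_diff) (use has_field_derivative_wp that in auto)
    then show ?thesis using wp'_periodic[OF p(1)] by simp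
  qed
  have cont: "continuous_on (-\<Lambda>) h"
    using dh by (intro continuous_at_imp_continuous_on ballI DERIV_isCont) auto
  obtain c where c: "\<And>x. x \<in> -\<Lambda> \<Longrightarrow> h x = c"
    using DERIV_zero_connected_constant[OF connected_lattice_compl open_lattice_compl _ cont, of "{}"] dh by auto
  have m: "- (p/2) \<in> -\<Lambda>" using p(2) by simp
  have "h (-(p/2)) = 0" unfolding h_def using wp_minus[of "p/2"] by simp
  then have "c = 0" using c[OF m] by simp
  then show ?thesis using c by (simp add: h_def)
qed

definition wp_periods :: "complex set" where "wp_periods = {p\<in>\<Lambda>. \<forall>z\<in>-\<Lambda>. wp \<Lambda> (z + p) = wp \<Lambda> z}"

lemma zero_in_wp_periods: "0 \<in> wp_periods" by (simp add: wp_periods_def)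

lemma wp_periods_add: "p \<in> wp_periods \<Longrightarrow> q \<in> wp_periods \<Longrightarrow> p + q \<in> wp_periods"
proof -
  assume P: "p \<in> wp_periods" "q \<in> wp_periods"
  then have p: "p \<in> \<Lambda>" "\<forall>z\<in>-\<Lambda>. wp \<Lambda> (z + p) = wp \<Lambda> z"
    and q: "q \<in> \<Lambda>" "\<forall>z\<in>-\<Lambda>. wp \<Lambda> (z + q) = wp \<Lambda> z" by (auto simp: wp_periods_def)
  have "p + q \<in> \<Lambda>" using p q lattice_add by auto
  moreover have "\<forall>z\<in>-\<Lambda>. wp \<Lambda> (z + (p + q)) = wp \<Lambda> z"
  proof
    fix z assume z: "z \<in> -\<Lambda>"
    have zp: "z + p \<in> -\<Lambda>" using z p lattice_add_iff by auto
    have "wp \<Lambda> (z + (p + q)) = wp \<Lambda> ((z + p) + q)" by (simp add: add.assoc)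
    also have "\<dots> = wp \<Lambda> (z + p)" using q zp by blast
    also have "\<dots> = wp \<Lambda> z" using p z by blast
    finally show "wp \<Lambda> (z + (p + q)) = wp \<Lambda> z" .
  qed
  ultimately show ?thesis by (simp add: wp_periods_def)
qed

lemma wp_periods_uminus: "p \<in> wp_periods \<Longrightarrow> -p \<in> wp_periods"
proof -
  assume P: "p \<in> wp_periods"
  then have p: "p \<in> \<Lambda>" "\<forall>z\<in>-\<Lambda>. wp \<Lambda> (z + p) = wp \<Lambda> z" by (auto simp: wp_periods_def)
  have "\<forall>z\<in>-\<Lambda>. wp \<Lambda> (z + - p) = wp \<Lambda> z"
  proof
    fix z assume z: "z \<in> -\<Lambda>"
    have zp: "z + - p \<in> -\<Lambda>" using z p lattice_add_iff[of "-p" z] by auto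
    have "wp \<Lambda> z = wp \<Lambda> ((z + - p) + p)" by simp
    also have "\<dots> = wp \<Lambda> (z + - p)" using p zp by blast
    finally show "wp \<Lambda> (z + - p) = wp \<Lambda> z" by simp
  qed
  then show ?thesis using p by (simp add: wp_periods_def)
qed

lemma wp_periods_of_nat_mult: "p \<in> wp_periods \<Longrightarrow> of_nat n * p \<in> wp_periods"
  by (induction n) (auto simp: zero_in_wp_periods distrib_right intro: wp_periods_add)

lemma wp_periods_of_int_mult: "p \<in> wp_periods \<Longrightarrow> of_int k * p \<in> wp_periods"
proof (cases "k \<ge> 0")
  case True
  assume p: "p \<in> wp_periods"
  obtain n where "k = int n" using True nonneg_int_cases by blast
  then show ?thesis using wp_periods_of_nat_mult[OF p, of n] by simp
next
  case False
  assume p: "p \<in> wp_periods"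
  obtain n where "k = - int n" using False by (intro that[of "nat (-k)"]) simp
  then show ?thesis using wp_periods_uminus[OF wp_periods_of_nat_mult[OF p, of n]] by simp
qed

lemma wp_periods_eq_lattice: "wp_periods = \<Lambda>"
proof
  show "wp_periods \<subseteq> \<Lambda>" by (auto simp: wp_periods_def)
  have 1: "1 \<in> wp_periods" using wp_periodic_generator[of 1] half_notin_lattice by (simp add: wp_periods_def)
  have t: "\<tau> \<in> wp_periods" using wp_periodic_generator[of \<tau>] half_tau_notin_lattice by (simp add: wp_periods_def)
  show "\<Lambda> \<subseteq> wp_periods"
  proof
    fix \<omega> assume "\<omega> \<in> \<Lambda>"
    then obtain m n :: int where w: "\<omega> = of_int m + of_int n * \<tau>" by (auto simp: in_lattice_iff)
    have "of_int m * 1 + of_int n * \<tau> \<in> wp_periods" by (intro wp_periods_add wp_periods_of_int_mult 1 t)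
    then show "\<omega> \<in> wp_periods" using w by simp
  qed
qed

lemma wp_periodic: "p \<in> \<Lambda> \<Longrightarrow> z \<notin> \<Lambda> \<Longrightarrow> wp \<Lambda> (z + p) = wp \<Lambda> z"
  using wp_periods_eq_lattice by (auto simp: wp_periods_def)

lemma tendsto_wp_double_pole: "((\<lambda>z. z^2 * wp \<Lambda> z) \<longlongrightarrow> 1) (at 0)"
proof -
  have "isCont wp_reg 0" by (rule DERIV_isCont[OF has_field_derivative_wp_reg]) auto
  then have F: "(wp_reg \<longlongrightarrow> wp_reg 0) (at 0)" by (simp add: isCont_def)
  have "((\<lambda>z. 1 + z^2 * wp_reg z) \<longlongrightarrow> 1 + 0^2 * wp_reg 0) (at 0)"
    by (intro tendsto_intros F)
  then have "((\<lambda>z. 1 + z^2 * wp_reg z) \<longlongrightarrow> 1) (at 0)" by simp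
  moreover have "\<forall>\<^sub>F z in at 0. 1 + z^2 * wp_reg z = z^2 * wp \<Lambda> z"
    using eventually_neq_at_within[of 0 0 UNIV] by eventually_elim (simp add: wp_eq_reg field_simps)
  ultimately show ?thesis by (rule Lim_transform_eventually)
qed

lemma isCont_wp'_reg_0: "isCont wp'_reg 0"
proof -
  have h: "wp_reg holomorphic_on (- (\<Lambda> - {0}))"
    using has_field_derivative_wp_reg open_punctured_lattice_compl by (auto simp: holomorphic_on_open)
  have "deriv wp_reg holomorphic_on (- (\<Lambda> - {0}))" by (rule holomorphic_deriv[OF h open_punctured_lattice_compl])
  then have "wp'_reg holomorphic_on (- (\<Lambda> - {0}))"
    by (rule holomorphic_transform) (use has_field_derivative_wp_reg DERIV_imp_deriv in auto)
  then have "continuous_on (- (\<Lambda> - {0})) wp'_reg" by (rule holomorphic_on_imp_continuous_on)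
  then show ?thesis using open_punctured_lattice_compl continuous_on_eq_continuous_at by blast
qed

lemma tendsto_wp'_triple_pole: "((\<lambda>z. z^3 * wp' z) \<longlongrightarrow> -2) (at 0)"
proof -
  have G: "(wp'_reg \<longlongrightarrow> wp'_reg 0) (at 0)" using isCont_wp'_reg_0 by (simp add: isCont_def)
  have "((\<lambda>z. -2 + z^3 * wp'_reg z) \<longlongrightarrow> -2 + 0^3 * wp'_reg 0) (at 0)"
    by (intro tendsto_intros G)
  then have "((\<lambda>z. -2 + z^3 * wp'_reg z) \<longlongrightarrow> -2) (at 0)" by simp
  moreover have "\<forall>\<^sub>F z in at 0. -2 + z^3 * wp'_reg z = z^3 * wp' z"
    using eventually_neq_at_within[of 0 0 UNIV] by eventually_elim (simp add: wp'_eq_reg field_simps)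
  ultimately show ?thesis by (rule Lim_transform_eventually)
qed

section \<open>Elliptic functions\<close>

lemma contour_integral_period_rectangle:
  fixes f :: "complex \<Rightarrow> complex"
  assumes U: "open U" and holo: "f holomorphic_on U"
    and per: "\<And>z. z \<in> U \<Longrightarrow> z + 1 \<in> U \<and> z + \<tau> \<in> U \<and> f (z + 1) = f z \<and> f (z + \<tau>) = f z"
    and L1: "\<And>z. Im z = ay \<Longrightarrow> z \<in> U" and L2: "\<And>z. Im z = ay + Im \<tau> \<Longrightarrow> z \<in> U"
    and L3: "\<And>z. Re z = ax \<Longrightarrow> z \<in> U" and L4: "\<And>z. Re z = ax + 1 \<Longrightarrow> z \<in> U"
  shows "contour_integral (rectpath (Complex ax ay) (Complex (ax + 1) (ay + Im \<tau>))) f = 0"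
proof -
  define a1 a4 where "a1 = Complex ax ay" and "a4 = Complex ax (ay + Im \<tau>)"
  define b where "b = a1 + of_real (- Re \<tau>)"
  have corners: "Complex (ax + 1) ay = a1 + 1" "Complex (ax + 1) (ay + Im \<tau>) = a4 + 1"
    "a4 = b + \<tau>"
    by (simp_all add: a1_def a4_def b_def complex_eq_iff)
  have cU: "continuous_on U f" by (rule holomorphic_on_imp_continuous_on[OF holo])
  have le: "Re a1 \<le> Re (a4 + 1)" "Im a1 \<le> Im (a4 + 1)" using Im_tau_pos by (auto simp: a1_def a4_def)
  have "path_image (rectpath a1 (a4 + 1)) \<subseteq> U"
    using L1 L2 L3 L4 unfolding path_image_rectpath[OF le] by (auto simp: a1_def a4_def)
  then have sides: "contour_integral (rectpath a1 (a4 + 1)) f = contour_integral (linepath a1 (a1 + 1)) f +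
      contour_integral (linepath (a1 + 1) (a4 + 1)) f + contour_integral (linepath (a4 + 1) a4) f +
      contour_integral (linepath a4 a1) f"
    using contour_integral_rectpath[OF continuous_on_subset[OF cU]]
    by (simp add: a1_def a4_def corners(1) flip: corners(2))
  \<comment> \<open>The vertical sides cancel by 1-periodicity, the horizontal ones by \<open>\<tau>\<close>-periodicity after
      shifting the top side by \<open>-Re \<tau>\<close> along the line \<open>Im z = ay\<close>.\<close>
  have vertical: "contour_integral (linepath (a1 + 1) (a4 + 1)) f + contour_integral (linepath a4 a1) f = 0"
  proof (rule contour_integral_linepath_translate_cancel)
    have "closed_segment a1 a4 \<subseteq> U" using L3 by (subst closed_segment_same_Re) (auto simp: a1_def a4_def)
    then show "\<And>z. z \<in> closed_segment a1 a4 \<Longrightarrow> f (z + 1) = f z" using per by auto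
  qed
  have "contour_integral (linepath ((b + 1) + \<tau>) (b + \<tau>)) f + contour_integral (linepath b (b + 1)) f = 0"
  proof (rule contour_integral_linepath_translate_cancel)
    have "closed_segment (b + 1) b \<subseteq> {z. Im z = ay}"
      by (subst closed_segment_same_Im) (auto simp: b_def a1_def)
    then show "\<And>z. z \<in> closed_segment (b + 1) b \<Longrightarrow> f (z + \<tau>) = f z" using per L1 by auto
  qed
  moreover have "contour_integral (linepath b (b + 1)) f = contour_integral (linepath a1 (a1 + 1)) f"
    unfolding b_def
  proof (rule contour_integral_horizontal_period)
    show "continuous_on {z. Im z = Im a1} f"
      by (rule continuous_on_subset[OF cU]) (use L1 in \<open>auto simp: a1_def\<close>)
    show "\<And>z. Im z = Im a1 \<Longrightarrow> f (z + 1) = f z" using per L1 by (auto simp: a1_def)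
  qed
  ultimately have horizontal:
    "contour_integral (linepath (a4 + 1) a4) f + contour_integral (linepath a1 (a1 + 1)) f = 0"
    by (simp add: corners(3) add_ac)
  from sides vertical horizontal have "contour_integral (rectpath a1 (a4 + 1)) f = 0" by algebra
  then show ?thesis by (simp only: a1_def corners(2))
qed

definition discrete_periodic :: "complex set \<Rightarrow> bool" where
  "discrete_periodic B \<longleftrightarrow> (\<forall>z. \<not> z islimpt B) \<and> countable B \<and> (\<forall>z\<in>B. \<forall>p\<in>\<Lambda>. z + p \<in> B)"

lemma discrete_periodic_closed: "discrete_periodic B \<Longrightarrow> closed B"
  unfolding discrete_periodic_def closed_limpt by blast

lemma discrete_periodic_open_compl: "discrete_periodic B \<Longrightarrow> open (- B)"
  using discrete_periodic_closed by auto

lemma discrete_periodic_shift_iff: "discrete_periodic B \<Longrightarrow> p \<in> \<Lambda> \<Longrightarrow> z + p \<in> B \<longleftrightarrow> z \<in> B"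
proof -
  assume g: "discrete_periodic B" and p: "p \<in> \<Lambda>"
  show ?thesis
  proof
    assume "z + p \<in> B"
    then have "(z + p) + - p \<in> B" using g lattice_uminus[OF p] unfolding discrete_periodic_def by blast
    then show "z \<in> B" by simp
  next
    assume "z \<in> B"
    then show "z + p \<in> B" using g p unfolding discrete_periodic_def by blast
  qed
qed

lemma discrete_periodic_eventually_notin: "discrete_periodic B \<Longrightarrow> \<forall>\<^sub>F w in at z. w \<notin> B"
  unfolding discrete_periodic_def using islimpt_iff_eventually by blast

lemma discrete_periodic_punctured_ball: "discrete_periodic B \<Longrightarrow> \<exists>r>0. \<forall>w\<in>ball z r. w \<noteq> z \<longrightarrow> w \<notin> B"
proof -
  assume "discrete_periodic B"
  then have "\<forall>\<^sub>F w in at z. w \<notin> B" by (rule discrete_periodic_eventually_notin)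
  then obtain d where "d > 0" "\<forall>w. w \<noteq> z \<and> dist w z < d \<longrightarrow> w \<notin> B"
    unfolding eventually_at by auto
  then show ?thesis by (intro exI[of _ d]) (auto simp: dist_commute)
qed

definition fund_rep :: "complex \<Rightarrow> complex" where
  "fund_rep z = z - (of_int \<lfloor>coord1 z\<rfloor> + of_int \<lfloor>coord2 z\<rfloor> * \<tau>)"

definition fund_cell_closure :: "complex set" where
  "fund_cell_closure = (\<lambda>(x,y). of_real x + of_real y * \<tau>) ` ({0..1} \<times> {0..1})"

lemma fund_rep_diff_in_lattice: "z - fund_rep z \<in> \<Lambda>"
  by (auto simp: fund_rep_def in_lattice_iff)

lemma fund_rep_in_closure: "fund_rep z \<in> fund_cell_closure"
proof -
  have e: "of_int \<lfloor>coord1 z\<rfloor> + of_int \<lfloor>coord2 z\<rfloor> * \<tau> = of_real (of_int \<lfloor>coord1 z\<rfloor>) + of_real (of_int \<lfloor>coord2 z\<rfloor>) * \<tau>"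
    by simp
  have cxr: "coord1 (fund_rep z) = coord1 z - of_int \<lfloor>coord1 z\<rfloor>"
    unfolding fund_rep_def coord1_diff e coord1_lin ..
  have cyr: "coord2 (fund_rep z) = coord2 z - of_int \<lfloor>coord2 z\<rfloor>"
    unfolding fund_rep_def coord2_diff e coord2_lin ..
  have "coord1 (fund_rep z) \<in> {0..1}" "coord2 (fund_rep z) \<in> {0..1}"
    unfolding cxr cyr by (auto, linarith+)
  then show ?thesis unfolding fund_cell_closure_def using coords_decomp[of "fund_rep z"]
    by (intro image_eqI[of _ _ "(coord1 (fund_rep z), coord2 (fund_rep z))"]) auto
qed

lemma compact_fund_cell_closure: "compact fund_cell_closure"
  unfolding fund_cell_closure_def
  by (intro compact_continuous_image compact_Times compact_Icc)
     (auto intro!: continuous_intros simp: case_prod_unfold)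

lemma elliptic_liouville:
  assumes B: "discrete_periodic B" and h: "f holomorphic_on -B"
    and per: "\<And>z p. z \<notin> B \<Longrightarrow> p \<in> \<Lambda> \<Longrightarrow> f (z + p) = f z"
    and lim: "\<And>b. b \<in> B \<Longrightarrow> \<exists>c. (f \<longlongrightarrow> c) (at b)"
  shows "\<exists>c. \<forall>z. z \<notin> B \<longrightarrow> f z = c"
proof -
  obtain g where holg: "g holomorphic_on UNIV" and gf: "\<And>z. z \<notin> B \<Longrightarrow> g z = f z"
    using removable_singularities_extend[OF _ h lim] B by (auto simp: discrete_periodic_def)
  have contg: "isCont g z" for z
    by (meson UNIV_I holg holomorphic_on_imp_differentiable_at open_UNIV
        field_differentiable_imp_continuous_at)
  have gper: "g (z + p) = g z" if p: "p \<in> \<Lambda>" for z p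
  proof -
    have "((\<lambda>w. g (w + p)) \<longlongrightarrow> g (z + p)) (at z)"
      by (rule isCont_tendsto_compose[OF contg]) (auto intro!: tendsto_eq_intros)
    moreover have "\<forall>\<^sub>F w in at z. g (w + p) = g w"
      using discrete_periodic_eventually_notin[OF B, of z]
      by eventually_elim (use per p discrete_periodic_shift_iff[OF B p] gf in simp)
    ultimately have "(g \<longlongrightarrow> g (z + p)) (at z)" by (rule Lim_transform_eventually)
    then show ?thesis using contg[of z] by (intro tendsto_unique[of "at z" g]) (auto simp: isCont_def)
  qed
  have "range g \<subseteq> g ` fund_cell_closure"
  proof
    fix y assume "y \<in> range g"
    then obtain z where z: "y = g z" by auto
    have "g z = g (fund_rep z + (z - fund_rep z))" by simp
    also have "\<dots> = g (fund_rep z)" by (rule gper[OF fund_rep_diff_in_lattice])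
    finally show "y \<in> g ` fund_cell_closure" using z fund_rep_in_closure by auto
  qed
  moreover have "compact (g ` fund_cell_closure)"
    by (rule compact_continuous_image[OF _ compact_fund_cell_closure])
       (use contg in \<open>auto intro!: continuous_at_imp_continuous_on\<close>)
  ultimately have "bounded (range g)" using compact_imp_bounded bounded_subset by blast
  then obtain c where "\<And>x. g x = c"
    using Liouville_theorem[OF holg] by (auto simp: constant_on_def)
  then show ?thesis using gf by metis
qed

lemma period_rectangle_unique:
  assumes w: "Re w \<in> {ax..<ax+1}" "Im w \<in> {ay..<ay + Im \<tau>}"
    and w': "Re w' \<in> {ax..<ax+1}" "Im w' \<in> {ay..<ay + Im \<tau>}"
    and d: "w - w' \<in> \<Lambda>"
  shows "w = w'"
proof -
  obtain m n :: int where mn: "w - w' = of_int m + of_int n * \<tau>" using d by (auto simp: in_lattice_iff)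
  have "Im (w - w') = of_int n * Im \<tau>" using mn by simp
  then have i: "Im w - Im w' = of_int n * Im \<tau>" by simp
  have "n < 1"
  proof (rule ccontr)
    assume "\<not> n < 1"
    then have "(1::real) \<le> of_int n" by simp
    then have "1 * Im \<tau> \<le> of_int n * Im \<tau>" using Im_tau_pos by (intro mult_right_mono) auto
    then show False using i w w' by simp
  qed
  moreover have "n > -1"
  proof (rule ccontr)
    assume "\<not> n > -1"
    then have "of_int n \<le> (-1::real)" by simp
    then have "of_int n * Im \<tau> \<le> -1 * Im \<tau>" using Im_tau_pos by (intro mult_right_mono) auto
    then show False using i w w' by simp
  qed
  ultimately have n0: "n = 0" by simp
  have "Re (w - w') = of_int m" using mn n0 by simp
  then have "of_int m < (1::real)" "-1 < (of_int m :: real)" using w w' by auto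
  then have m0: "m = 0" by linarith
  show ?thesis using mn n0 m0 by simp
qed

lemma period_rectangle_rep:
  "\<exists>w. z - w \<in> \<Lambda> \<and> Re w \<in> {ax..<ax+1} \<and> Im w \<in> {ay..<ay + Im \<tau>}"
proof -
  define H where "H = Im \<tau>"
  have H: "H > 0" using Im_tau_pos by (simp add: H_def)
  define n where "n = \<lfloor>(Im z - ay) / H\<rfloor>"
  have n1: "of_int n * H \<le> Im z - ay" using H unfolding n_def
    by (metis floor_divide_lower)
  have n2: "Im z - ay < (of_int n + 1) * H" using H unfolding n_def
    by (metis floor_divide_upper)
  define w1 where "w1 = z - of_int n * \<tau>"
  define m where "m = \<lfloor>Re w1 - ax\<rfloor>"
  have m1: "of_int m \<le> Re w1 - ax" "Re w1 - ax < of_int m + 1" unfolding m_def by linarith+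
  define p where "p = of_int m + of_int n * \<tau>"
  have p: "p \<in> \<Lambda>" by (auto simp: p_def in_lattice_iff)
  have "Im (z - p) = Im z - of_int n * H" by (simp add: p_def H_def)
  moreover have "Re (z - p) = Re w1 - of_int m" by (simp add: p_def w1_def)
  ultimately show ?thesis using n1 n2 m1 p by (intro exI[of _ "z - p"]) (auto simp: H_def algebra_simps)
qed

lemma period_rectangle_avoiding:
  assumes B: "discrete_periodic B"
  obtains ax ay where
    "\<And>z. z \<in> B \<Longrightarrow> Re z \<noteq> ax \<and> Re z \<noteq> ax + 1 \<and> Im z \<noteq> ay \<and> Im z \<noteq> ay + Im \<tau>"
proof -
  have cB: "countable B" using B by (simp add: discrete_periodic_def)
  obtain ax where ax: "ax \<notin> Re ` B" using countable_real_avoid[of "Re ` B"] cB by blast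
  obtain ay where ay: "ay \<notin> Im ` B" using countable_real_avoid[of "Im ` B"] cB by blast
  have far: "Re z \<noteq> ax + 1" "Im z \<noteq> ay + Im \<tau>" if "z \<in> B" for z
  proof -
    have "z + (-1) \<in> B" "z + (-\<tau>) \<in> B"
      using B that lattice_uminus[OF one_in_lattice] lattice_uminus[OF tau_in_lattice]
      unfolding discrete_periodic_def by blast+
    then show "Re z \<noteq> ax + 1" "Im z \<noteq> ay + Im \<tau>" using ax ay by force+
  qed
  show ?thesis
    by (rule that[of ax ay]) (use ax ay far in force)
qed

lemma tendsto_pole_lattice_shift:
  assumes g: "discrete_periodic B" and per: "\<And>z p. z \<notin> B \<Longrightarrow> p \<in> \<Lambda> \<Longrightarrow> f (z + p) = f z"
    and d: "d \<in> \<Lambda>" and l: "((\<lambda>w. (w - q)^n * f w) \<longlongrightarrow> c) (at q)"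
  shows "((\<lambda>w. (w - (q + d))^n * f w) \<longlongrightarrow> c) (at (q + d))"
proof -
  have ev: "\<forall>\<^sub>F x in at q. (x - q)^n * f x = (x + d - (q + d))^n * f (x + d)"
    using discrete_periodic_eventually_notin[OF g, of q] by eventually_elim (use per d in simp)
  have "((\<lambda>x. (x + d - (q + d))^n * f (x + d)) \<longlongrightarrow> c) (at q)"
    by (rule Lim_transform_eventually[OF l ev])
  then have "((\<lambda>w. (w - (q + d))^n * f w) \<longlongrightarrow> c) (filtermap (\<lambda>x. x - (-d)) (at q))"
    by (simp add: filterlim_filtermap)
  then show ?thesis unfolding filtermap_at_shift by simp
qed

lemma residue_lattice_translate:
  assumes B: "discrete_periodic B" and h: "f holomorphic_on -B"
    and per: "\<And>z p. z \<notin> B \<Longrightarrow> p \<in> \<Lambda> \<Longrightarrow> f (z + p) = f z"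
    and d: "d \<in> \<Lambda>" and lim: "((\<lambda>z. (z - q) * f z) \<longlongrightarrow> r) (at q)"
  shows "residue f (q + d) = r"
proof -
  obtain e where e: "e > 0" "\<forall>w\<in>ball (q + d) e. w \<noteq> q + d \<longrightarrow> w \<notin> B"
    using discrete_periodic_punctured_ball[OF B] by blast
  have hol: "f holomorphic_on ball (q + d) e - {q + d}"
    by (rule holomorphic_on_subset[OF h]) (use e in auto)
  have "((\<lambda>w. (w - q)^1 * f w) \<longlongrightarrow> r) (at q)" using lim by simp
  from tendsto_pole_lattice_shift[OF B per d this]
  have "((\<lambda>w. f w * (w - (q + d))) \<longlongrightarrow> r) (at (q + d))" by (simp add: mult.commute)
  from residue_simple'[OF open_ball _ hol this] e(1) show ?thesis by simp
qed

lemma period_rectangle_reps: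
  assumes B: "discrete_periodic B" and Q: "Q \<subseteq> B"
    and reps: "\<And>b. b \<in> B \<Longrightarrow> \<exists>!q. q \<in> Q \<and> b - q \<in> \<Lambda>"
    and nB: "\<And>z. z \<in> B \<Longrightarrow> Re z \<noteq> ax \<and> Im z \<noteq> ay"
  obtains rep where "inj_on rep Q" "\<And>q. rep q - q \<in> \<Lambda>"
    "B \<inter> box (Complex ax ay) (Complex (ax + 1) (ay + Im \<tau>)) = rep ` Q"
proof -
  define a1 a3 where "a1 = Complex ax ay" and "a3 = Complex (ax + 1) (ay + Im \<tau>)"
  define rep where "rep = (\<lambda>z. SOME w. z - w \<in> \<Lambda> \<and> Re w \<in> {ax..<ax+1} \<and> Im w \<in> {ay..<ay + Im \<tau>})"
  have rep: "z - rep z \<in> \<Lambda> \<and> Re (rep z) \<in> {ax..<ax+1} \<and> Im (rep z) \<in> {ay..<ay + Im \<tau>}" for z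
    unfolding rep_def by (rule someI_ex[OF period_rectangle_rep])
  have repB: "rep z \<in> B" if "z \<in> B" for z
    using that rep[of z] discrete_periodic_shift_iff[OF B, of "z - rep z" "rep z"] by simp
  have repbox: "rep z \<in> box a1 a3" if "z \<in> B" for z
    using rep[of z] nB[OF repB[OF that]] by (auto simp: in_box_complex_iff a1_def a3_def)
  have "inj_on rep Q"
  proof
    fix q q' assume qq: "q \<in> Q" "q' \<in> Q" "rep q = rep q'"
    have "q - q' = (q - rep q) - (q' - rep q')" using qq(3) by simp
    then have "q - q' \<in> \<Lambda>" using rep[of q] rep[of q'] lattice_diff by metis
    moreover have "q \<in> B" using qq Q by auto
    ultimately show "q = q'" using reps[of q] qq by auto
  qed
  moreover have "rep q - q \<in> \<Lambda>" for q using rep[of q] lattice_uminus by (metis minus_diff_eq)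
  moreover have "B \<inter> box a1 a3 = rep ` Q"
  proof
    show "rep ` Q \<subseteq> B \<inter> box a1 a3" using repB repbox Q by auto
    show "B \<inter> box a1 a3 \<subseteq> rep ` Q"
    proof
      fix p assume p: "p \<in> B \<inter> box a1 a3"
      then obtain q where q: "q \<in> Q" "p - q \<in> \<Lambda>" using reps[of p] by auto
      have "rep q - p = - ((q - rep q) + (p - q))" by simp
      then have "rep q - p \<in> \<Lambda>" using rep[of q] q lattice_add lattice_uminus by metis
      then have "rep q = p"
        using period_rectangle_unique[of "rep q" ax ay p] rep[of q] p
        by (auto simp: in_box_complex_iff a1_def a3_def)
      then show "p \<in> rep ` Q" using q by auto
    qed
  qed
  ultimately show ?thesis using that by (simp add: a1_def a3_def)
qed

lemma elliptic_residue_sum_zero: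
  assumes B: "discrete_periodic B" and Q: "finite Q" "Q \<subseteq> B"
    and reps: "\<And>b. b \<in> B \<Longrightarrow> \<exists>!q. q \<in> Q \<and> b - q \<in> \<Lambda>"
    and h: "f holomorphic_on -B"
    and per: "\<And>z p. z \<notin> B \<Longrightarrow> p \<in> \<Lambda> \<Longrightarrow> f (z + p) = f z"
    and lim: "\<And>q. q \<in> Q \<Longrightarrow> ((\<lambda>z. (z - q) * f z) \<longlongrightarrow> r q) (at q)"
  shows "(\<Sum>q\<in>Q. r q) = 0"
proof -
  obtain ax ay where nB:
    "\<And>z. z \<in> B \<Longrightarrow> Re z \<noteq> ax \<and> Re z \<noteq> ax + 1 \<and> Im z \<noteq> ay \<and> Im z \<noteq> ay + Im \<tau>"
    by (erule period_rectangle_avoiding[OF B])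
  define a1 a3 where "a1 = Complex ax ay" and "a3 = Complex (ax + 1) (ay + Im \<tau>)"
  obtain rep where inj: "inj_on rep Q" and rep: "\<And>q. rep q - q \<in> \<Lambda>"
    and pts: "B \<inter> box a1 a3 = rep ` Q"
    using period_rectangle_reps[OF B Q(2) reps] nB unfolding a1_def a3_def by blast
  have le: "Re a1 \<le> Re a3" "Im a1 \<le> Im a3" using Im_tau_pos by (auto simp: a1_def a3_def)
  have pim: "path_image (rectpath a1 a3) \<subseteq> - B"
  proof
    fix z assume "z \<in> path_image (rectpath a1 a3)"
    then have "Re z = ax \<or> Re z = ax + 1 \<or> Im z = ay \<or> Im z = ay + Im \<tau>"
      unfolding path_image_rectpath[OF le] by (auto simp: a1_def a3_def)
    then show "z \<in> - B" using nB by auto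
  qed
  have "contour_integral (rectpath a1 a3) f = 2 * pi * \<i> * (\<Sum>p\<in>B \<inter> box a1 a3. residue f p)"
    by (rule rectpath_residue_theorem[OF discrete_periodic_closed[OF B] _ h le _ pim])
       (use B Q(1) pts in \<open>auto simp: discrete_periodic_def\<close>)
  moreover have "contour_integral (rectpath a1 a3) f = 0"
    unfolding a1_def a3_def
  proof (rule contour_integral_period_rectangle[OF discrete_periodic_open_compl[OF B] h])
    fix z assume "z \<in> - B"
    then show "z + 1 \<in> - B \<and> z + \<tau> \<in> - B \<and> f (z + 1) = f z \<and> f (z + \<tau>) = f z"
      using discrete_periodic_shift_iff[OF B, of 1 z] discrete_periodic_shift_iff[OF B, of \<tau> z]
        per[of z 1] per[of z \<tau>] by auto
  qed (use nB in auto)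
  moreover have "residue f (rep q) = r q" if "q \<in> Q" for q
    using residue_lattice_translate[OF B h per rep[of q] lim[OF that]] by simp
  ultimately show ?thesis unfolding pts by (simp add: sum.reindex[OF inj])
qed

definition fund_cell :: "complex set" where "fund_cell = {z. coord1 z \<in> {0..<1} \<and> coord2 z \<in> {0..<1}}"

lemma fund_rep_in_cell: "fund_rep z \<in> fund_cell"
proof -
  have e: "of_int \<lfloor>coord1 z\<rfloor> + of_int \<lfloor>coord2 z\<rfloor> * \<tau> = of_real (of_int \<lfloor>coord1 z\<rfloor>) + of_real (of_int \<lfloor>coord2 z\<rfloor>) * \<tau>"
    by simp
  have cxr: "coord1 (fund_rep z) = coord1 z - of_int \<lfloor>coord1 z\<rfloor>"
    unfolding fund_rep_def coord1_diff e coord1_lin ..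
  have cyr: "coord2 (fund_rep z) = coord2 z - of_int \<lfloor>coord2 z\<rfloor>"
    unfolding fund_rep_def coord2_diff e coord2_lin ..
  have "coord1 (fund_rep z) \<in> {0..<1}" "coord2 (fund_rep z) \<in> {0..<1}" unfolding cxr cyr by (auto; linarith)+
  then show ?thesis by (simp add: fund_cell_def)
qed

lemma zero_in_fund_cell: "0 \<in> fund_cell" by (simp add: fund_cell_def coord1_def coord2_def)

lemma fund_cell_subset_closure: "fund_cell \<subseteq> fund_cell_closure"
proof
  fix z assume "z \<in> fund_cell"
  then show "z \<in> fund_cell_closure" unfolding fund_cell_def fund_cell_closure_def using coords_decomp[of z]
    by (intro image_eqI[of _ _ "(coord1 z, coord2 z)"]) auto
qed

lemma fund_cell_unique: "w \<in> fund_cell \<Longrightarrow> w' \<in> fund_cell \<Longrightarrow> w - w' \<in> \<Lambda> \<Longrightarrow> w = w'"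
proof -
  assume w: "w \<in> fund_cell" "w' \<in> fund_cell" "w - w' \<in> \<Lambda>"
  then obtain m n where mn: "coord1 (w - w') = of_int m" "coord2 (w - w') = of_int n"
    by (auto simp: in_lattice_iff_coords elim!: Ints_cases)
  have "of_int m < (1::real)" "-1 < (of_int m::real)" "of_int n < (1::real)" "-1 < (of_int n::real)"
    using w mn by (auto simp: fund_cell_def coord1_diff coord2_diff)
  then have "m = 0" "n = 0" by linarith+
  then have "w - w' = 0" using coords_decomp[of "w - w'"] mn by simp
  then show "w = w'" by simp
qed

lemma fund_rep_lattice: "z \<in> \<Lambda> \<Longrightarrow> fund_rep z = 0"
proof -
  assume z: "z \<in> \<Lambda>"
  have "fund_rep z - 0 \<in> \<Lambda>" using z fund_rep_diff_in_lattice[of z] lattice_diff[of z "z - fund_rep z"] by simp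
  then show ?thesis using fund_cell_unique[OF fund_rep_in_cell zero_in_fund_cell] by simp
qed

end

section \<open>The zeros of \<open>\<wp> - \<wp>(\<alpha>)\<close>\<close>

locale non_2_torsion_point = complex_lattice +
  fixes \<alpha> :: complex
  assumes alpha_notin_lattice: "\<alpha> \<notin> \<Lambda>" and two_alpha_notin_lattice: "2 * \<alpha> \<notin> \<Lambda>"
begin

definition wp_tilde :: "complex \<Rightarrow> complex" where "wp_tilde w = wp \<Lambda> w - wp \<Lambda> \<alpha>"
definition dlog_wp_tilde :: "complex \<Rightarrow> complex" where "dlog_wp_tilde w = wp' w / wp_tilde w"

lemma holomorphic_wp_tilde: "wp_tilde holomorphic_on - \<Lambda>"
  unfolding wp_tilde_def[abs_def] by (intro holomorphic_intros holomorphic_wp)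

lemma has_field_derivative_wp_tilde: "w \<notin> \<Lambda> \<Longrightarrow> (wp_tilde has_field_derivative wp' w) (at w)"
  unfolding wp_tilde_def[abs_def] using DERIV_diff[OF has_field_derivative_wp DERIV_const, of w "wp \<Lambda> \<alpha>"] by simp

lemma wp_tilde_periodic: "w \<notin> \<Lambda> \<Longrightarrow> p \<in> \<Lambda> \<Longrightarrow> wp_tilde (w + p) = wp_tilde w"
  by (simp add: wp_tilde_def wp_periodic)

lemma tendsto_wp_tilde_double_pole: "((\<lambda>z. z^2 * wp_tilde z) \<longlongrightarrow> 1) (at 0)"
proof -
  have "((\<lambda>z. z^2 * wp \<Lambda> z - z^2 * wp \<Lambda> \<alpha>) \<longlongrightarrow> 1 - 0^2 * wp \<Lambda> \<alpha>) (at 0)"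
    by (intro tendsto_intros tendsto_wp_double_pole)
  then show ?thesis by (simp add: wp_tilde_def algebra_simps)
qed

lemma eventually_wp_tilde_nonzero_0: "\<forall>\<^sub>F w in at 0. wp_tilde w \<noteq> 0"
proof -
  have "\<forall>\<^sub>F w in at 0. w^2 * wp_tilde w \<noteq> 0"
    using tendsto_imp_eventually_ne[OF tendsto_wp_tilde_double_pole, of 0] by simp
  then show ?thesis by eventually_elim auto
qed

lemma eventually_wp_tilde_nonzero_lattice: "p \<in> \<Lambda> \<Longrightarrow> \<forall>\<^sub>F w in at p. wp_tilde w \<noteq> 0 \<and> w \<notin> \<Lambda>"
proof -
  assume p: "p \<in> \<Lambda>"
  have "\<forall>\<^sub>F x in at 0. wp_tilde (x + p) \<noteq> 0 \<and> x + p \<notin> \<Lambda>"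
    using eventually_wp_tilde_nonzero_0 eventually_notin_lattice[of 0]
  proof eventually_elim
    case (elim x)
    then show ?case using wp_tilde_periodic[of x p] p lattice_add_iff by auto
  qed
  then have "\<forall>\<^sub>F w in filtermap (\<lambda>x. x - (-p)) (at 0). wp_tilde w \<noteq> 0 \<and> w \<notin> \<Lambda>"
    by (simp add: eventually_filtermap)
  then show ?thesis unfolding filtermap_at_shift by simp
qed

lemma wp_tilde_not_constant: "\<not> wp_tilde constant_on - \<Lambda>"
proof
  assume "wp_tilde constant_on - \<Lambda>"
  then obtain c where c: "\<And>w. w \<in> - \<Lambda> \<Longrightarrow> wp_tilde w = c" by (auto simp: constant_on_def)
  have "\<forall>\<^sub>F w in at 0. w^2 * c = w^2 * wp_tilde w"
    using eventually_notin_lattice[of 0] by eventually_elim (use c in auto)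
  moreover have "((\<lambda>w. w^2 * c) \<longlongrightarrow> 0^2 * c) (at 0)" by (intro tendsto_intros)
  ultimately have "((\<lambda>w. w^2 * wp_tilde w) \<longlongrightarrow> 0) (at 0)" using Lim_transform_eventually by fastforce
  with tendsto_wp_tilde_double_pole show False using tendsto_unique[of "at (0::complex)"] by fastforce
qed

definition wp_tilde_zeros :: "complex set" where "wp_tilde_zeros = {w. w \<notin> \<Lambda> \<and> wp_tilde w = 0}"
definition dlog_sing :: "complex set" where "dlog_sing = \<Lambda> \<union> wp_tilde_zeros"

lemma wp_tilde_zero_factor:
  assumes "w0 \<in> wp_tilde_zeros"
  obtains h r n where "0 < n" "0 < r" "ball w0 r \<subseteq> - \<Lambda>" "h holomorphic_on ball w0 r"
    "\<And>w. w \<in> ball w0 r \<Longrightarrow> wp_tilde w = (w - w0)^n * h w" "\<And>w. w \<in> ball w0 r \<Longrightarrow> h w \<noteq> 0"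
proof -
  from assms have w: "w0 \<in> - \<Lambda>" "wp_tilde w0 = 0" by (auto simp: wp_tilde_zeros_def)
  obtain g r n where "0 < n" "0 < r" "ball w0 r \<subseteq> - \<Lambda>" "g holomorphic_on ball w0 r"
      "\<And>w. w \<in> ball w0 r \<Longrightarrow> wp_tilde w = (w - w0)^n * g w" "\<And>w. w \<in> ball w0 r \<Longrightarrow> g w \<noteq> 0"
    by (rule holomorphic_factor_zero_nonconstant[OF holomorphic_wp_tilde open_lattice_compl connected_lattice_compl w wp_tilde_not_constant]) blast
  then show ?thesis by (rule that)
qed

lemma eventually_notin_dlog_sing: "\<forall>\<^sub>F w in at z. w \<notin> dlog_sing"
proof (cases "z \<in> \<Lambda>")
  case True
  show ?thesis using eventually_wp_tilde_nonzero_lattice[OF True] by eventually_elim (auto simp: dlog_sing_def wp_tilde_zeros_def)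
next
  case False
  show ?thesis
  proof (cases "wp_tilde z = 0")
    case True
    then have "z \<in> wp_tilde_zeros" using False by (simp add: wp_tilde_zeros_def)
    then obtain h r n where hr: "0 < n" "0 < r" "ball z r \<subseteq> - \<Lambda>" "h holomorphic_on ball z r"
      "\<And>w. w \<in> ball z r \<Longrightarrow> wp_tilde w = (w - z)^n * h w" "\<And>w. w \<in> ball z r \<Longrightarrow> h w \<noteq> 0"
      by (rule wp_tilde_zero_factor) blast
    show ?thesis using eventually_at_ball'[OF hr(2), of z UNIV]
      by eventually_elim (use hr in \<open>auto simp: dlog_sing_def wp_tilde_zeros_def\<close>)
  next
    case nz: False
    have "isCont wp_tilde z" using holomorphic_wp_tilde open_lattice_compl False
      by (meson ComplI continuous_on_eq_continuous_at holomorphic_on_imp_continuous_on)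
    then have "\<forall>\<^sub>F w in at z. wp_tilde w \<noteq> 0"
      using nz by (metis isCont_def tendsto_imp_eventually_ne)
    then show ?thesis using eventually_notin_lattice[of z] by eventually_elim (auto simp: dlog_sing_def wp_tilde_zeros_def)
  qed
qed

lemma dlog_sing_shift: "z \<in> dlog_sing \<Longrightarrow> p \<in> \<Lambda> \<Longrightarrow> z + p \<in> dlog_sing"
  using lattice_add wp_tilde_periodic lattice_add_iff by (auto simp: dlog_sing_def wp_tilde_zeros_def)

lemma finite_dlog_sing_cell: "finite (fund_cell_closure \<inter> dlog_sing)"
  by (rule finite_not_islimpt_in_compact[OF compact_fund_cell_closure]) (use eventually_notin_dlog_sing islimpt_iff_eventually in blast)

lemma discrete_periodic_dlog_sing: "discrete_periodic dlog_sing"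
proof -
  have "dlog_sing \<subseteq> (\<lambda>(a, p). a + p) ` ((fund_cell_closure \<inter> dlog_sing) \<times> \<Lambda>)"
  proof
    fix b assume b: "b \<in> dlog_sing"
    have "- (b - fund_rep b) \<in> \<Lambda>" using fund_rep_diff_in_lattice[of b] by (rule lattice_uminus)
    then have "b + - (b - fund_rep b) \<in> dlog_sing" by (rule dlog_sing_shift[OF b])
    then have "fund_rep b \<in> dlog_sing" by simp
    then show "b \<in> (\<lambda>(a, p). a + p) ` ((fund_cell_closure \<inter> dlog_sing) \<times> \<Lambda>)"
      using fund_rep_in_closure[of b] fund_rep_diff_in_lattice[of b] by (intro image_eqI[of _ _ "(fund_rep b, b - fund_rep b)"]) auto
  qed
  moreover have "countable ((\<lambda>(a, p). a + p) ` ((fund_cell_closure \<inter> dlog_sing) \<times> \<Lambda>))"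
    using finite_dlog_sing_cell countable_lattice by (intro countable_image countable_SIGMA) (auto intro: countable_finite)
  ultimately have "countable dlog_sing" by (rule countable_subset)
  then show ?thesis unfolding discrete_periodic_def using eventually_notin_dlog_sing dlog_sing_shift islimpt_iff_eventually by blast
qed

definition dlog_sing_reps :: "complex set" where "dlog_sing_reps = insert 0 (wp_tilde_zeros \<inter> fund_cell)"

lemma finite_dlog_sing_reps: "finite dlog_sing_reps"
proof -
  have "wp_tilde_zeros \<inter> fund_cell \<subseteq> fund_cell_closure \<inter> dlog_sing" using fund_cell_subset_closure by (auto simp: dlog_sing_def)
  then have "finite (wp_tilde_zeros \<inter> fund_cell)" by (rule finite_subset[OF _ finite_dlog_sing_cell])
  then show ?thesis by (simp add: dlog_sing_reps_def)
qed

lemma dlog_sing_reps_subset: "dlog_sing_reps \<subseteq> dlog_sing" by (auto simp: dlog_sing_reps_def dlog_sing_def)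

lemma dlog_sing_reps_unique: "b \<in> dlog_sing \<Longrightarrow> \<exists>!q. q \<in> dlog_sing_reps \<and> b - q \<in> \<Lambda>"
proof -
  assume b: "b \<in> dlog_sing"
  have ex: "fund_rep b \<in> dlog_sing_reps"
  proof (cases "b \<in> \<Lambda>")
    case True then show ?thesis by (simp add: fund_rep_lattice dlog_sing_reps_def)
  next
    case False
    then have bZ: "b \<in> wp_tilde_zeros" using b by (simp add: dlog_sing_def)
    have d: "- (b - fund_rep b) \<in> \<Lambda>" using fund_rep_diff_in_lattice by (rule lattice_uminus)
    have e: "b + - (b - fund_rep b) = fund_rep b" by simp
    have "fund_rep b \<notin> \<Lambda>" using lattice_add_iff[OF d, of b] bZ unfolding e by (simp add: wp_tilde_zeros_def)
    moreover have "wp_tilde (fund_rep b) = 0" using wp_tilde_periodic[OF _ d, of b] bZ unfolding e by (simp add: wp_tilde_zeros_def)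
    ultimately have "fund_rep b \<in> wp_tilde_zeros" by (simp add: wp_tilde_zeros_def)
    then show ?thesis using fund_rep_in_cell by (simp add: dlog_sing_reps_def)
  qed
  have QF: "dlog_sing_reps \<subseteq> fund_cell" using zero_in_fund_cell by (auto simp: dlog_sing_reps_def)
  show ?thesis
  proof (rule ex1I[of _ "fund_rep b"])
    show "fund_rep b \<in> dlog_sing_reps \<and> b - fund_rep b \<in> \<Lambda>" using ex fund_rep_diff_in_lattice by simp
    fix q assume q: "q \<in> dlog_sing_reps \<and> b - q \<in> \<Lambda>"
    have "q - fund_rep b = (b - fund_rep b) - (b - q)" by simp
    then have "q - fund_rep b \<in> \<Lambda>" using q fund_rep_diff_in_lattice[of b] lattice_diff by metis
    then show "q = fund_rep b" using fund_cell_unique[of q "fund_rep b"] q QF fund_rep_in_cell by auto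
  qed
qed

lemma holomorphic_dlog_wp_tilde: "dlog_wp_tilde holomorphic_on - dlog_sing"
proof -
  have "(\<lambda>w. wp' w / wp_tilde w) holomorphic_on - dlog_sing"
    by (intro holomorphic_on_divide holomorphic_on_subset[OF holomorphic_wp'] holomorphic_on_subset[OF holomorphic_wp_tilde])
       (auto simp: dlog_sing_def wp_tilde_zeros_def)
  then show ?thesis by (simp add: dlog_wp_tilde_def[abs_def])
qed

lemma dlog_wp_tilde_periodic: "z \<notin> dlog_sing \<Longrightarrow> p \<in> \<Lambda> \<Longrightarrow> dlog_wp_tilde (z + p) = dlog_wp_tilde z"
  by (simp add: dlog_wp_tilde_def wp'_periodic wp_tilde_periodic dlog_sing_def)

lemma tendsto_dlog_wp_tilde_0: "((\<lambda>w. (w - 0) * dlog_wp_tilde w) \<longlongrightarrow> -2) (at 0)"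
proof -
  have "((\<lambda>w. (w^3 * wp' w) / (w^2 * wp_tilde w)) \<longlongrightarrow> -2 / 1) (at 0)"
    by (intro tendsto_intros tendsto_wp'_triple_pole tendsto_wp_tilde_double_pole) simp
  moreover have "\<forall>\<^sub>F w in at 0. (w^3 * wp' w) / (w^2 * wp_tilde w) = (w - 0) * dlog_wp_tilde w"
    using eventually_neq_at_within[of 0 0 UNIV] by eventually_elim (simp add: dlog_wp_tilde_def power2_eq_square power3_eq_cube field_simps)
  ultimately show ?thesis using Lim_transform_eventually by fastforce
qed

lemma tendsto_dlog_wp_tilde_zero:
  assumes q: "q \<in> wp_tilde_zeros"
  shows "\<exists>n>0. ((\<lambda>w. (w - q) * dlog_wp_tilde w) \<longlongrightarrow> of_nat n) (at q)"
proof -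
  obtain h r n where hr: "0 < n" "0 < r" "ball q r \<subseteq> - \<Lambda>" "h holomorphic_on ball q r"
      "\<And>w. w \<in> ball q r \<Longrightarrow> wp_tilde w = (w - q)^n * h w" "\<And>w. w \<in> ball q r \<Longrightarrow> h w \<noteq> 0"
    by (rule wp_tilde_zero_factor[OF q]) blast
  have "((\<lambda>w. (w - q) * (wp' w / wp_tilde w)) \<longlongrightarrow> of_nat n) (at q)"
    by (rule tendsto_log_deriv_zero[OF hr(2,1,4,6,5)]) (use hr(3) has_field_derivative_wp_tilde in auto)
  then show ?thesis using hr(1) by (auto simp: dlog_wp_tilde_def)
qed

lemma fund_rep_wp_tilde_zero: "z \<in> wp_tilde_zeros \<Longrightarrow> fund_rep z \<in> wp_tilde_zeros"
proof -
  assume bZ: "z \<in> wp_tilde_zeros"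
  have d: "- (z - fund_rep z) \<in> \<Lambda>" using fund_rep_diff_in_lattice by (rule lattice_uminus)
  have e: "z + - (z - fund_rep z) = fund_rep z" by simp
  have "fund_rep z \<notin> \<Lambda>" using lattice_add_iff[OF d, of z] bZ unfolding e by (simp add: wp_tilde_zeros_def)
  moreover have "wp_tilde (fund_rep z) = 0" using wp_tilde_periodic[OF _ d, of z] bZ unfolding e by (simp add: wp_tilde_zeros_def)
  ultimately show "fund_rep z \<in> wp_tilde_zeros" by (simp add: wp_tilde_zeros_def)
qed

definition zero_mult :: "complex \<Rightarrow> nat" where
  "zero_mult q = (SOME n. n > 0 \<and> ((\<lambda>w. (w - q) * dlog_wp_tilde w) \<longlongrightarrow> of_nat n) (at q))"

lemma zero_mult_residue: "q \<in> wp_tilde_zeros \<Longrightarrow> zero_mult q > 0 \<and> ((\<lambda>w. (w - q) * dlog_wp_tilde w) \<longlongrightarrow> of_nat (zero_mult q)) (at q)"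
  unfolding zero_mult_def by (rule someI_ex) (rule tendsto_dlog_wp_tilde_zero)

lemma alpha_wp_tilde_zero: "\<alpha> \<in> wp_tilde_zeros" using alpha_notin_lattice by (simp add: wp_tilde_zeros_def wp_tilde_def)
lemma minus_alpha_wp_tilde_zero: "- \<alpha> \<in> wp_tilde_zeros" using alpha_notin_lattice by (simp add: wp_tilde_zeros_def wp_tilde_def wp_minus)

lemma wp_tilde_zeros_cell: "wp_tilde_zeros \<inter> fund_cell = {fund_rep \<alpha>, fund_rep (-\<alpha>)} \<and> zero_mult (fund_rep \<alpha>) = 1 \<and> zero_mult (fund_rep (-\<alpha>)) = 1"
proof -
  \<comment> \<open>The residues of \<open>\<wp>'/\<wp>\<^sup>~\<close> in a period cell are \<open>-2\<close> at \<open>0\<close> and the zero multiplicities;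
      they sum to zero, so the distinct zeros \<open>\<plusminus>\<alpha>\<close> are simple and are the only ones.\<close>
  define rr where "rr q = (if q = 0 then -2 else of_nat (zero_mult q) :: complex)" for q
  have z0: "0 \<notin> wp_tilde_zeros" by (simp add: wp_tilde_zeros_def)
  have RS: "(\<Sum>q\<in>dlog_sing_reps. rr q) = 0"
  proof (rule elliptic_residue_sum_zero[OF discrete_periodic_dlog_sing finite_dlog_sing_reps dlog_sing_reps_subset dlog_sing_reps_unique holomorphic_dlog_wp_tilde dlog_wp_tilde_periodic])
    fix q assume q: "q \<in> dlog_sing_reps"
    show "((\<lambda>z. (z - q) * dlog_wp_tilde z) \<longlongrightarrow> rr q) (at q)"
    proof (cases "q = 0")
      case True then show ?thesis using tendsto_dlog_wp_tilde_0 by (simp add: rr_def)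
    next
      case False
      then have "q \<in> wp_tilde_zeros" using q by (simp add: dlog_sing_reps_def)
      then show ?thesis using zero_mult_residue[of q] False by (simp add: rr_def)
    qed
  qed
  have fin: "finite (wp_tilde_zeros \<inter> fund_cell)" using finite_dlog_sing_reps by (simp add: dlog_sing_reps_def)
  have "(\<Sum>q\<in>dlog_sing_reps. rr q) = rr 0 + (\<Sum>q\<in>wp_tilde_zeros \<inter> fund_cell. rr q)"
    unfolding dlog_sing_reps_def using fin z0 by (subst sum.insert) auto
  also have "(\<Sum>q\<in>wp_tilde_zeros \<inter> fund_cell. rr q) = (\<Sum>q\<in>wp_tilde_zeros \<inter> fund_cell. of_nat (zero_mult q))"
    using z0 by (intro sum.cong) (auto simp: rr_def)
  also have "\<dots> = of_nat (\<Sum>q\<in>wp_tilde_zeros \<inter> fund_cell. zero_mult q)" by simp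
  finally have "-2 + (of_nat (\<Sum>q\<in>wp_tilde_zeros \<inter> fund_cell. zero_mult q) :: complex) = 0" using RS by (simp add: rr_def)
  then have "(of_nat (\<Sum>q\<in>wp_tilde_zeros \<inter> fund_cell. zero_mult q) :: complex) = of_nat 2" by (simp add: algebra_simps)
  then have s2: "(\<Sum>q\<in>wp_tilde_zeros \<inter> fund_cell. zero_mult q) = 2" by (simp only: of_nat_eq_iff)
  have aZ: "fund_rep \<alpha> \<in> wp_tilde_zeros \<inter> fund_cell" using fund_rep_wp_tilde_zero[OF alpha_wp_tilde_zero] fund_rep_in_cell by simp
  have bZ: "fund_rep (-\<alpha>) \<in> wp_tilde_zeros \<inter> fund_cell" using fund_rep_wp_tilde_zero[OF minus_alpha_wp_tilde_zero] fund_rep_in_cell by simp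
  have ne: "fund_rep \<alpha> \<noteq> fund_rep (-\<alpha>)"
  proof
    assume eq: "fund_rep \<alpha> = fund_rep (-\<alpha>)"
    have "2 * \<alpha> = (\<alpha> - fund_rep \<alpha>) - (- \<alpha> - fund_rep (-\<alpha>))" using eq by simp
    then have "2 * \<alpha> \<in> \<Lambda>" using fund_rep_diff_in_lattice[of \<alpha>] fund_rep_diff_in_lattice[of "-\<alpha>"] lattice_diff by metis
    then show False using two_alpha_notin_lattice by simp
  qed
  have pos: "\<And>x. x \<in> wp_tilde_zeros \<inter> fund_cell \<Longrightarrow> zero_mult x \<ge> 1" using zero_mult_residue by (simp add: Suc_le_eq)
  from sum_eq_two_weights[OF fin aZ bZ ne pos s2] show ?thesis by simp
qed

lemma wp_tilde_zero_cases: "w \<notin> \<Lambda> \<Longrightarrow> wp_tilde w = 0 \<Longrightarrow> w - \<alpha> \<in> \<Lambda> \<or> w + \<alpha> \<in> \<Lambda>"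
proof -
  assume w: "w \<notin> \<Lambda>" "wp_tilde w = 0"
  then have "w \<in> wp_tilde_zeros" by (simp add: wp_tilde_zeros_def)
  then have "fund_rep w \<in> wp_tilde_zeros \<inter> fund_cell" using fund_rep_wp_tilde_zero fund_rep_in_cell by simp
  then have "fund_rep w = fund_rep \<alpha> \<or> fund_rep w = fund_rep (-\<alpha>)" using wp_tilde_zeros_cell by blast
  then show ?thesis
  proof
    assume "fund_rep w = fund_rep \<alpha>"
    then have "w - \<alpha> = (w - fund_rep w) - (\<alpha> - fund_rep \<alpha>)" by simp
    then show ?thesis using fund_rep_diff_in_lattice[of w] fund_rep_diff_in_lattice[of \<alpha>] lattice_diff by metis
  next
    assume "fund_rep w = fund_rep (-\<alpha>)"
    then have "w + \<alpha> = (w - fund_rep w) - (-\<alpha> - fund_rep (-\<alpha>))" by simp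
    then show ?thesis using fund_rep_diff_in_lattice[of w] fund_rep_diff_in_lattice[of "-\<alpha>"] lattice_diff by metis
  qed
qed

lemma dlog_sing_iff: "z \<in> dlog_sing \<longleftrightarrow> z \<in> \<Lambda> \<or> z - \<alpha> \<in> \<Lambda> \<or> z + \<alpha> \<in> \<Lambda>"
proof
  assume "z \<in> dlog_sing"
  then show "z \<in> \<Lambda> \<or> z - \<alpha> \<in> \<Lambda> \<or> z + \<alpha> \<in> \<Lambda>" using wp_tilde_zero_cases by (auto simp: dlog_sing_def wp_tilde_zeros_def)
next
  assume z: "z \<in> \<Lambda> \<or> z - \<alpha> \<in> \<Lambda> \<or> z + \<alpha> \<in> \<Lambda>"
  show "z \<in> dlog_sing"
  proof (cases "z \<in> \<Lambda>")
    case True then show ?thesis by (simp add: dlog_sing_def)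
  next
    case False
    then have c: "z - \<alpha> \<in> \<Lambda> \<or> z + \<alpha> \<in> \<Lambda>" using z by simp
    then show ?thesis
    proof
      assume d: "z - \<alpha> \<in> \<Lambda>"
      have "wp_tilde (\<alpha> + (z - \<alpha>)) = wp_tilde \<alpha>" by (rule wp_tilde_periodic[OF alpha_notin_lattice d])
      then have "wp_tilde z = 0" by (simp add: wp_tilde_def)
      then show ?thesis using False by (simp add: dlog_sing_def wp_tilde_zeros_def)
    next
      assume d: "z + \<alpha> \<in> \<Lambda>"
      have "wp_tilde (- \<alpha> + (z + \<alpha>)) = wp_tilde (-\<alpha>)" by (rule wp_tilde_periodic[OF _ d]) (use alpha_notin_lattice in simp)
      then have "wp_tilde z = 0" by (simp add: wp_tilde_def wp_minus)
      then show ?thesis using False by (simp add: dlog_sing_def wp_tilde_zeros_def)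
    qed
  qed
qed

definition res_dlog :: "complex \<Rightarrow> complex" where
  "res_dlog p = (if p \<in> \<Lambda> then -2 else if p - \<alpha> \<in> \<Lambda> then 1 else if p + \<alpha> \<in> \<Lambda> then 1 else 0)"

lemma tendsto_res_dlog: "((\<lambda>w. (w - p) * dlog_wp_tilde w) \<longlongrightarrow> res_dlog p) (at p)"
proof -
  have shift: "((\<lambda>w. (w - p) * dlog_wp_tilde w) \<longlongrightarrow> L) (at p)"
    if d: "p - q \<in> \<Lambda>" and L: "((\<lambda>w. (w - q) * dlog_wp_tilde w) \<longlongrightarrow> L) (at q)" for q L
  proof -
    have "((\<lambda>w. (w - q)^1 * dlog_wp_tilde w) \<longlongrightarrow> L) (at q)" using L by simp
    from tendsto_pole_lattice_shift[OF discrete_periodic_dlog_sing dlog_wp_tilde_periodic d this]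
    show ?thesis by simp
  qed
  have rep: "p - fund_rep a \<in> \<Lambda>" if "p - a \<in> \<Lambda>" for a
  proof -
    have "p - fund_rep a = (p - a) + (a - fund_rep a)" by simp
    then show ?thesis using that fund_rep_diff_in_lattice[of a] lattice_add by metis
  qed
  have simple: "((\<lambda>w. (w - fund_rep a) * dlog_wp_tilde w) \<longlongrightarrow> 1) (at (fund_rep a))"
    if "a \<in> {\<alpha>, -\<alpha>}" for a
    using that zero_mult_residue[of "fund_rep a"] wp_tilde_zeros_cell
      fund_rep_wp_tilde_zero[OF alpha_wp_tilde_zero] fund_rep_wp_tilde_zero[OF minus_alpha_wp_tilde_zero]
    by auto
  consider "p \<in> \<Lambda>" | "p \<notin> \<Lambda>" "p - \<alpha> \<in> \<Lambda>" | "p \<notin> \<Lambda>" "p - \<alpha> \<notin> \<Lambda>" "p - (-\<alpha>) \<in> \<Lambda>"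
    | "p \<notin> dlog_sing" "p \<notin> \<Lambda>" "p - \<alpha> \<notin> \<Lambda>" "p + \<alpha> \<notin> \<Lambda>"
    using dlog_sing_iff by force
  then show ?thesis
  proof cases
    case 1
    then show ?thesis using shift[of 0] tendsto_dlog_wp_tilde_0 by (simp add: res_dlog_def)
  next
    case 2
    then show ?thesis using shift[OF rep simple] by (simp add: res_dlog_def)
  next
    case 3
    then show ?thesis using shift[OF rep[of "-\<alpha>"] simple[of "-\<alpha>"]] by (simp add: res_dlog_def)
  next
    case 4
    have "isCont dlog_wp_tilde p"
      using holomorphic_dlog_wp_tilde discrete_periodic_open_compl[OF discrete_periodic_dlog_sing] 4(1)
      by (meson ComplI continuous_on_eq_continuous_at holomorphic_on_imp_continuous_on)
    then have "((\<lambda>w. (w - p) * dlog_wp_tilde w) \<longlongrightarrow> (p - p) * dlog_wp_tilde p) (at p)"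
      by (intro tendsto_intros) (auto simp: isCont_def)
    then show ?thesis using 4 by (simp add: res_dlog_def)
  qed
qed

end

section \<open>Torsion points and the functions \<open>P\<^sub>j\<close>\<close>

locale torsion_point = complex_lattice +
  fixes \<alpha> :: complex and N :: nat
  assumes alpha_exact_order: "exact_order \<tau> \<alpha> N" and N_ge_3: "N \<ge> 3"
begin

lemma N_pos: "N > 0" using N_ge_3 by simp

lemma N_alpha_in_lattice: "of_nat N * \<alpha> \<in> \<Lambda>" using alpha_exact_order by (simp add: exact_order_def)

lemma multiple_alpha_notin_lattice: "0 < k \<Longrightarrow> k < N \<Longrightarrow> of_nat k * \<alpha> \<notin> \<Lambda>"
  using alpha_exact_order by (simp add: exact_order_def)

sublocale non_2_torsion_point \<tau> \<alpha>
  using multiple_alpha_notin_lattice[of 1] multiple_alpha_notin_lattice[of 2] N_ge_3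
  by unfold_locales simp_all

lemma of_nat_mult_alpha_in_lattice_iff: "of_nat k * \<alpha> \<in> \<Lambda> \<longleftrightarrow> N dvd k"
proof -
  have e: "of_nat k * \<alpha> = of_nat (k div N) * (of_nat N * \<alpha>) + of_nat (k mod N) * \<alpha>"
  proof -
    have "k = (k div N) * N + k mod N" by simp
    then have "(of_nat k :: complex) = of_nat (k div N) * of_nat N + of_nat (k mod N)"
      by (metis of_nat_add of_nat_mult)
    then show ?thesis by (simp add: algebra_simps)
  qed
  have l: "of_nat (k div N) * (of_nat N * \<alpha>) \<in> \<Lambda>" by (rule lattice_of_nat_mult[OF N_alpha_in_lattice])
  have "of_nat k * \<alpha> \<in> \<Lambda> \<longleftrightarrow> of_nat (k mod N) * \<alpha> \<in> \<Lambda>"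
    unfolding e using lattice_add_iff[of "of_nat (k div N) * (of_nat N * \<alpha>)" "of_nat (k mod N) * \<alpha>"] l
    by (simp add: add.commute)
  also have "\<dots> \<longleftrightarrow> k mod N = 0"
  proof
    assume "of_nat (k mod N) * \<alpha> \<in> \<Lambda>"
    then show "k mod N = 0" using multiple_alpha_notin_lattice[of "k mod N"] N_pos by (metis mod_less_divisor neq0_conv)
  qed simp
  finally show ?thesis by (simp add: dvd_eq_mod_eq_0)
qed

lemma of_int_mult_alpha_in_lattice_iff: "of_int k * \<alpha> \<in> \<Lambda> \<longleftrightarrow> int N dvd k"
proof (cases "k \<ge> 0")
  case True
  then obtain n where "k = int n" using nonneg_int_cases by blast
  then show ?thesis using of_nat_mult_alpha_in_lattice_iff[of n] by simp
next
  case False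
  then obtain n where k: "k = - int n" by (intro that[of "nat (-k)"]) simp
  have "of_int k * \<alpha> = - (of_nat n * \<alpha>)" by (simp add: k)
  then show ?thesis using of_nat_mult_alpha_in_lattice_iff[of n] by (simp add: k)
qed

definition punctures :: "complex set" where "punctures = {z. \<exists>k<N. z - of_nat k * \<alpha> \<in> \<Lambda>}"

lemma punctures_eq_compl: "punctures = - punctured \<tau> \<alpha> N" by (auto simp: punctures_def punctured_def)

lemma punctures_iff: "z \<in> punctures \<longleftrightarrow> (\<exists>k::int. z - of_int k * \<alpha> \<in> \<Lambda>)"
proof
  assume "z \<in> punctures"
  then obtain k where "k < N" "z - of_nat k * \<alpha> \<in> \<Lambda>" by (auto simp: punctures_def)
  then show "\<exists>k::int. z - of_int k * \<alpha> \<in> \<Lambda>" by (intro exI[of _ "int k"]) simp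
next
  assume "\<exists>k::int. z - of_int k * \<alpha> \<in> \<Lambda>"
  then obtain k :: int where k: "z - of_int k * \<alpha> \<in> \<Lambda>" by blast
  define r where "r = k mod int N"
  have r: "0 \<le> r" "r < int N" using N_pos by (auto simp: r_def)
  have "of_int (k - r) * \<alpha> \<in> \<Lambda>" by (subst of_int_mult_alpha_in_lattice_iff) (simp add: r_def mod_eq_dvd_iff)
  then have "(z - of_int k * \<alpha>) + of_int (k - r) * \<alpha> \<in> \<Lambda>" using k lattice_add by blast
  then have "z - of_nat (nat r) * \<alpha> \<in> \<Lambda>" using r by (simp add: algebra_simps)
  then show "z \<in> punctures" using r unfolding punctures_def by (intro CollectI exI[of _ "nat r"]) auto
qed

lemma punctures_shift_alpha_iff: "z \<in> punctures \<longleftrightarrow> z - of_int k * \<alpha> \<in> punctures"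
proof
  assume "z \<in> punctures"
  then obtain m :: int where "z - of_int m * \<alpha> \<in> \<Lambda>" by (auto simp: punctures_iff)
  then have "(z - of_int k * \<alpha>) - of_int (m - k) * \<alpha> \<in> \<Lambda>" by (simp add: algebra_simps)
  then show "z - of_int k * \<alpha> \<in> punctures" unfolding punctures_iff by blast
next
  assume "z - of_int k * \<alpha> \<in> punctures"
  then obtain m :: int where "z - of_int k * \<alpha> - of_int m * \<alpha> \<in> \<Lambda>" by (auto simp: punctures_iff)
  then have "z - of_int (k + m) * \<alpha> \<in> \<Lambda>" by (simp add: algebra_simps)
  then show "z \<in> punctures" unfolding punctures_iff by blast
qed

lemma punctures_shift_lattice_iff: "p \<in> \<Lambda> \<Longrightarrow> z + p \<in> punctures \<longleftrightarrow> z \<in> punctures"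
proof -
  assume p: "p \<in> \<Lambda>"
  have "(z + p) - of_nat k * \<alpha> \<in> \<Lambda> \<longleftrightarrow> z - of_nat k * \<alpha> \<in> \<Lambda>" for k
    using lattice_add_iff[OF p, of "z - of_nat k * \<alpha>"] by (simp add: algebra_simps)
  then show ?thesis by (simp add: punctures_def)
qed

lemma punctures_times_N: "z \<in> punctures \<Longrightarrow> of_nat N * z \<in> \<Lambda>"
proof -
  assume "z \<in> punctures"
  then obtain k where k: "z - of_nat k * \<alpha> \<in> \<Lambda>" by (auto simp: punctures_def)
  have "of_nat N * z = of_nat N * (z - of_nat k * \<alpha>) + of_nat k * (of_nat N * \<alpha>)"
    by (simp add: algebra_simps)
  then show ?thesis using lattice_of_nat_mult[OF k, of N] lattice_of_nat_mult[OF N_alpha_in_lattice, of k] lattice_add by metis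
qed

lemma discrete_periodic_punctures: "discrete_periodic punctures"
proof -
  have nl: "\<not> z islimpt punctures" for z
  proof
    assume "z islimpt punctures"
    then have inf: "infinite (punctures \<inter> cball z 1)" by (auto simp: islimpt_eq_infinite_cball)
    have inj: "inj_on (\<lambda>w. of_nat N * w) (punctures \<inter> cball z 1)" using N_pos by (auto simp: inj_on_def)
    have sub: "(\<lambda>w. of_nat N * w) ` (punctures \<inter> cball z 1) \<subseteq> {\<omega>\<in>\<Lambda>. norm \<omega> \<le> real N * (norm z + 1)}"
    proof
      fix y assume "y \<in> (\<lambda>w. of_nat N * w) ` (punctures \<inter> cball z 1)"
      then obtain w where w: "w \<in> punctures" "dist z w \<le> 1" "y = of_nat N * w" by auto
      have "norm w \<le> norm z + 1" using w(2) norm_triangle_ineq2[of w z] by (simp add: dist_norm norm_minus_commute)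
      then have "norm y \<le> real N * (norm z + 1)" using w(3) by (simp add: norm_mult mult_left_mono)
      then show "y \<in> {\<omega>\<in>\<Lambda>. norm \<omega> \<le> real N * (norm z + 1)}" using punctures_times_N[OF w(1)] w(3) by simp
    qed
    have "finite ((\<lambda>w. of_nat N * w) ` (punctures \<inter> cball z 1))" by (rule finite_subset[OF sub finite_lattice_norm_le])
    then have "finite (punctures \<inter> cball z 1)" using inj by (rule finite_imageD)
    then show False using inf by simp
  qed
  have "punctures \<subseteq> (\<lambda>(p, k). p + of_nat k * \<alpha>) ` (\<Lambda> \<times> (UNIV::nat set))"
  proof
    fix x assume "x \<in> punctures"
    then obtain k where "x - of_nat k * \<alpha> \<in> \<Lambda>" by (auto simp: punctures_def)
    then show "x \<in> (\<lambda>(p, k). p + of_nat k * \<alpha>) ` (\<Lambda> \<times> (UNIV::nat set))"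
      by (intro image_eqI[of _ _ "(x - of_nat k * \<alpha>, k)"]) auto
  qed
  moreover have "countable ((\<lambda>(p, k). p + of_nat k * \<alpha>) ` (\<Lambda> \<times> (UNIV::nat set)))"
    using countable_lattice by (intro countable_image countable_SIGMA) auto
  ultimately have "countable punctures" by (rule countable_subset)
  moreover have "\<forall>z\<in>punctures. \<forall>p\<in>\<Lambda>. z + p \<in> punctures" using punctures_shift_lattice_iff by blast
  ultimately show ?thesis using nl by (simp add: discrete_periodic_def)
qed

definition tpt :: "nat \<Rightarrow> complex" where "tpt k = of_nat k * \<alpha>"

lemma tpt_in_punctures: "tpt k \<in> punctures" if "k < N" for k
  using that by (auto simp: punctures_def tpt_def intro!: exI[of _ k])

lemma tpt_diff_in_lattice: "k < N \<Longrightarrow> k' < N \<Longrightarrow> tpt k - tpt k' \<in> \<Lambda> \<Longrightarrow> k = k'"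
proof -
  assume k: "k < N" "k' < N" "tpt k - tpt k' \<in> \<Lambda>"
  then have "of_int (int k - int k') * \<alpha> \<in> \<Lambda>" by (simp add: tpt_def algebra_simps)
  then have d: "int N dvd (int k - int k')" using of_int_mult_alpha_in_lattice_iff by blast
  have lt: "\<bar>int k - int k'\<bar> < int N" using k by auto
  show "k = k'"
  proof (rule ccontr)
    assume "k \<noteq> k'"
    then have "int k - int k' \<noteq> 0" by simp
    from dvd_imp_le_int[OF this d] have "\<bar>int N\<bar> \<le> \<bar>int k - int k'\<bar>" .
    then show False using lt by simp
  qed
qed

lemma inj_on_tpt: "inj_on tpt {..<N}"
proof
  fix k k' assume k: "k \<in> {..<N}" "k' \<in> {..<N}" "tpt k = tpt k'"
  then show "k = k'" using tpt_diff_in_lattice[of k k'] by simp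
qed

lemma punctures_reps_unique: "b \<in> punctures \<Longrightarrow> \<exists>!q. q \<in> tpt ` {..<N} \<and> b - q \<in> \<Lambda>"
proof -
  assume "b \<in> punctures"
  then obtain k where k: "k < N" "b - tpt k \<in> \<Lambda>" by (auto simp: punctures_def tpt_def)
  show ?thesis
  proof (rule ex1I[of _ "tpt k"])
    show "tpt k \<in> tpt ` {..<N} \<and> b - tpt k \<in> \<Lambda>" using k by auto
    fix q assume q: "q \<in> tpt ` {..<N} \<and> b - q \<in> \<Lambda>"
    then obtain k' where k': "k' < N" "q = tpt k'" by auto
    have "tpt k - tpt k' = (b - tpt k') - (b - tpt k)" by simp
    then have "tpt k - tpt k' \<in> \<Lambda>" using q k k' lattice_diff by metis
    then have "k = k'" using tpt_diff_in_lattice k k' by blast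
    then show "q = tpt k" using k' by simp
  qed
qed

lemma torsion_residue_sum_zero:
  assumes h: "f holomorphic_on - punctures" and per: "\<And>z p. z \<notin> punctures \<Longrightarrow> p \<in> \<Lambda> \<Longrightarrow> f (z + p) = f z"
    and lim: "\<And>m. m < N \<Longrightarrow> ((\<lambda>z. (z - tpt m) * f z) \<longlongrightarrow> v m) (at (tpt m))"
  shows "(\<Sum>m<N. v m) = 0"
proof -
  define r where "r = (\<lambda>q. v (the_inv_into {..<N} tpt q))"
  have rq: "r (tpt m) = v m" if "m < N" for m
    using that inj_on_tpt by (simp add: r_def the_inv_into_f_f)
  have "(\<Sum>q\<in>tpt ` {..<N}. r q) = 0"
  proof (rule elliptic_residue_sum_zero[OF discrete_periodic_punctures _ _ punctures_reps_unique h per])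
    show "finite (tpt ` {..<N})" by simp
    show "tpt ` {..<N} \<subseteq> punctures" using tpt_in_punctures by auto
    fix q assume "q \<in> tpt ` {..<N}"
    then obtain m where m: "m < N" "q = tpt m" by auto
    then show "((\<lambda>z. (z - q) * f z) \<longlongrightarrow> r q) (at q)" using lim[OF m(1)] rq[OF m(1)] by simp
  qed (auto)
  then show ?thesis using inj_on_tpt by (simp add: sum.reindex rq)
qed

abbreviation "\<zeta> \<equiv> root_unity N"

lemma zeta_powi: "\<zeta> powi a = exp (of_int a * (2 * of_real pi * \<i> / of_nat N))"
  by (simp add: root_unity_def exp_power_int)

lemma zeta_powi_nonzero: "\<zeta> powi a \<noteq> 0" by (simp add: zeta_powi)

lemma zeta_nonzero: "\<zeta> \<noteq> 0" by (simp add: root_unity_def)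

lemma zeta_powi_eq_1_iff: "\<zeta> powi a = 1 \<longleftrightarrow> int N dvd a"
proof -
  have "\<zeta> powi a = 1 \<longleftrightarrow> (\<exists>n::int. real_of_int a * (2 * pi) / real N = 2 * real_of_int n * pi)"
    unfolding zeta_powi exp_eq_1 by simp
  also have "\<dots> \<longleftrightarrow> (\<exists>n::int. (of_int a :: real) = of_int (n * int N))"
  proof -
    have "real_of_int a * (2 * pi) / real N = 2 * real_of_int n * pi \<longleftrightarrow> (of_int a :: real) = of_int (n * int N)" for n
    proof -
      have "real_of_int a * (2 * pi) / real N = 2 * real_of_int n * pi \<longleftrightarrow>
          real_of_int a * (2 * pi) = (real_of_int n * real N) * (2 * pi)"
        using N_pos by (simp add: divide_eq_eq algebra_simps)
      also have "\<dots> \<longleftrightarrow> real_of_int a = real_of_int n * real N" using pi_gt_zero by simp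
      finally show ?thesis by simp
    qed
    then show ?thesis by simp
  qed
  also have "\<dots> \<longleftrightarrow> int N dvd a" by (auto simp: dvd_def mult.commute simp del: of_int_mult)
  finally show ?thesis .
qed

lemma zeta_powi_add: "\<zeta> powi (a + b) = \<zeta> powi a * \<zeta> powi b"
  using zeta_nonzero by (simp add: power_int_add)

lemma zeta_powi_cong: "a mod int N = b mod int N \<Longrightarrow> \<zeta> powi a = \<zeta> powi b"
proof -
  assume e: "a mod int N = b mod int N"
  have "int N dvd (a - b)" using e by (simp add: mod_eq_dvd_iff)
  then have "\<zeta> powi (a - b) = 1" by (simp add: zeta_powi_eq_1_iff)
  have "\<zeta> powi a = \<zeta> powi ((a - b) + b)" by simp
  also have "\<dots> = \<zeta> powi (a - b) * \<zeta> powi b" by (rule zeta_powi_add)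
  finally show ?thesis using \<open>\<zeta> powi (a - b) = 1\<close> by simp
qed

lemma zeta_powi_minus: "\<zeta> powi (- a) = inverse (\<zeta> powi a)" by (rule power_int_minus)

lemma zeta_orthogonality: "(\<Sum>s<N. \<zeta> powi (int s * a)) = (if int N dvd a then of_nat N else 0)"
proof (cases "int N dvd a")
  case True
  then have "\<zeta> powi (int s * a) = 1" for s by (simp add: zeta_powi_eq_1_iff)
  then show ?thesis using True by simp
next
  case False
  define x where "x = \<zeta> powi a"
  have x1: "x \<noteq> 1" using False by (simp add: x_def zeta_powi_eq_1_iff)
  have "\<zeta> powi (int s * a) = x ^ s" for s
    by (simp add: x_def power_int_mult mult.commute[of "int s"] power_int_of_nat[symmetric] zeta_nonzero del: power_int_of_nat)
  then have "(\<Sum>s<N. \<zeta> powi (int s * a)) = (\<Sum>s<N. x ^ s)" by simp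
  also have "\<dots> = (x ^ N - 1) / (x - 1)" by (rule geometric_sum[OF x1])
  also have "x ^ N = \<zeta> powi (a * int N)"
    by (simp add: x_def power_int_mult power_int_of_nat[symmetric] zeta_nonzero del: power_int_of_nat)
  also have "\<dots> = 1" by (simp add: zeta_powi_eq_1_iff)
  finally show ?thesis using False by simp
qed

definition pole_coeff :: "int \<Rightarrow> complex" where "pole_coeff j = \<zeta> powi j + \<zeta> powi (- j) - 2"

lemma pole_coeff_minus: "pole_coeff (- j) = pole_coeff j" by (simp add: pole_coeff_def)

lemma pole_coeff_nonzero: "\<not> int N dvd j \<Longrightarrow> pole_coeff j \<noteq> 0"
proof -
  assume nd: "\<not> int N dvd j"
  define x where "x = \<zeta> powi j"
  have x0: "x \<noteq> 0" unfolding x_def by (rule zeta_powi_nonzero)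
  have x1: "x \<noteq> 1" using nd by (simp add: x_def zeta_powi_eq_1_iff)
  have "pole_coeff j = (x - 1)^2 / x" using x0 by (simp add: pole_coeff_def x_def[symmetric] zeta_powi_minus field_simps power2_eq_square)
  then show ?thesis using x0 x1 by simp
qed

lemma torsion_shift_notin_dlog_sing: "z \<notin> punctures \<Longrightarrow> z - of_nat k * \<alpha> \<notin> dlog_sing"
proof
  assume z: "z \<notin> punctures" and b: "z - of_nat k * \<alpha> \<in> dlog_sing"
  have "z - of_int (int k) * \<alpha> \<in> \<Lambda> \<or> z - of_int (int k + 1) * \<alpha> \<in> \<Lambda> \<or> z - of_int (int k - 1) * \<alpha> \<in> \<Lambda>"
    using b unfolding dlog_sing_iff by (simp add: algebra_simps)
  then show False using z punctures_iff by blast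
qed

lemma torsion_shift_notin_lattice: "z \<notin> punctures \<Longrightarrow> z - of_nat k * \<alpha> \<notin> \<Lambda>"
  using torsion_shift_notin_dlog_sing dlog_sing_def by blast

definition P_dlog :: "int \<Rightarrow> complex \<Rightarrow> complex" where
  "P_dlog j z = (\<Sum>k<N. \<zeta> powi (- (int k * j)) * dlog_wp_tilde (z - of_nat k * \<alpha>))"

lemma P_eq_P_dlog: "z \<notin> punctures \<Longrightarrow> P \<tau> \<alpha> N j z = P_dlog j z"
proof -
  assume z: "z \<notin> punctures"
  have "deriv (wp \<Lambda>) (z - of_nat k * \<alpha>) / (\<zeta> powi (int k * j) * (wp \<Lambda> (z - of_nat k * \<alpha>) - wp \<Lambda> \<alpha>))
      = \<zeta> powi (- (int k * j)) * dlog_wp_tilde (z - of_nat k * \<alpha>)" for k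
    using torsion_shift_notin_lattice[OF z, of k]
    by (simp add: deriv_wp dlog_wp_tilde_def wp_tilde_def zeta_powi_minus divide_inverse inverse_mult_distrib mult_ac)
  then show ?thesis by (simp add: P_def P_dlog_def)
qed

lemma holomorphic_dlog_wp_tilde_translate: "(\<lambda>z. dlog_wp_tilde (z - c)) holomorphic_on S" if "\<And>z. z \<in> S \<Longrightarrow> z - c \<notin> dlog_sing" for c S
proof -
  have "(dlog_wp_tilde \<circ> (\<lambda>z. z - c)) holomorphic_on S"
    by (rule holomorphic_on_compose_gen[OF _ holomorphic_dlog_wp_tilde]) (use that in \<open>auto intro!: holomorphic_intros\<close>)
  then show ?thesis by (simp add: o_def)
qed

lemma holomorphic_P_dlog: "P_dlog j holomorphic_on - punctures"
  unfolding P_dlog_def[abs_def]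
  by (intro holomorphic_intros holomorphic_dlog_wp_tilde_translate) (use torsion_shift_notin_dlog_sing in auto)

lemma P_dlog_periodic: "z \<notin> punctures \<Longrightarrow> p \<in> \<Lambda> \<Longrightarrow> P_dlog j (z + p) = P_dlog j z"
proof -
  assume z: "z \<notin> punctures" and p: "p \<in> \<Lambda>"
  have "dlog_wp_tilde (z + p - of_nat k * \<alpha>) = dlog_wp_tilde (z - of_nat k * \<alpha>)" for k
    using dlog_wp_tilde_periodic[OF torsion_shift_notin_dlog_sing[OF z, of k] p] by (simp add: algebra_simps)
  then show ?thesis by (simp add: P_dlog_def)
qed

lemma zeta_powi_shift:
  assumes "int k mod int N = (int m + d) mod int N"
  shows "\<zeta> powi (- (int k * j)) = \<zeta> powi (- (int m * j)) * \<zeta> powi (- (d * j))"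
proof -
  have "(- (int k * j)) mod int N = (- ((int m + d) * j)) mod int N"
    by (intro mod_minus_cong mod_mult_cong assms refl)
  then have "\<zeta> powi (- (int k * j)) = \<zeta> powi (- ((int m + d) * j))" by (rule zeta_powi_cong)
  also have "- ((int m + d) * j) = - (int m * j) + - (d * j)" by (simp add: algebra_simps)
  finally show ?thesis using zeta_powi_add[of "- (int m * j)" "- (d * j)"] by simp
qed

lemma sum_three_points:
  fixes f :: "nat \<Rightarrow> complex"
  assumes "a < N" "b < N" "c < N" "a \<noteq> b" "a \<noteq> c" "b \<noteq> c"
  shows "(\<Sum>k<N. f k * (if k = a then A else if k = b then B' else if k = c then C else 0))
       = f a * A + f b * B' + f c * C"
proof -
  have "(\<Sum>k<N. f k * (if k = a then A else if k = b then B' else if k = c then C else 0))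
      = (\<Sum>k<N. (if k = a then f k * A else 0) + (if k = b then f k * B' else 0) + (if k = c then f k * C else 0))"
    using assms by (intro sum.cong) auto
  also have "\<dots> = f a * A + f b * B' + f c * C"
    using assms by (simp add: sum.distrib)
  finally show ?thesis .
qed

lemma pred_mod_int: "int ((m + N - 1) mod N) = (int m - 1) mod int N"
proof -
  have "int ((m + N - 1) mod N) = int (m + N - 1) mod int N" by (rule zmod_int)
  also have "int (m + N - 1) = (int m - 1) + int N" using N_pos by simp
  also have "((int m - 1) + int N) mod int N = (int m - 1) mod int N" by simp
  finally show ?thesis .
qed

lemma res_dlog_torsion:
  assumes m: "m < N" and k: "k < N"
  shows "res_dlog (tpt m - of_nat k * \<alpha>) =
    (if k = m then -2 else if k = (m + N - 1) mod N then 1 else if k = (m + 1) mod N then 1 else 0)"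
proof -
  have iff: "of_int (int m - int k + d) * \<alpha> \<in> \<Lambda> \<longleftrightarrow> int k = (int m + d) mod int N" for d
  proof -
    have "(int m + d) mod int N = int k mod int N \<longleftrightarrow> int N dvd (int m - int k + d)"
      unfolding diff_add_eq by (rule mod_eq_dvd_iff)
    moreover have "int k mod int N = int k" using k by simp
    ultimately show ?thesis unfolding of_int_mult_alpha_in_lattice_iff by auto
  qed
  define x where "x = tpt m - of_nat k * \<alpha>"
  have "x = of_int (int m - int k + 0) * \<alpha>" "x - \<alpha> = of_int (int m - int k + (-1)) * \<alpha>"
    "x + \<alpha> = of_int (int m - int k + 1) * \<alpha>"
    by (simp_all add: x_def tpt_def algebra_simps)
  moreover have "int k = int m mod int N \<longleftrightarrow> k = m" using m by auto
  moreover have "(int m + -1) mod int N = int ((m + N - 1) mod N)"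
    using pred_mod_int[of m] by simp
  then have "int k = (int m + -1) mod int N \<longleftrightarrow> k = (m + N - 1) mod N" by simp
  moreover have "(int m + 1) mod int N = int ((m + 1) mod N)" by (simp add: zmod_int add.commute)
  then have "int k = (int m + 1) mod int N \<longleftrightarrow> k = (m + 1) mod N" by simp
  ultimately show ?thesis unfolding x_def[symmetric] res_dlog_def by (simp only: iff) simp
qed

lemma tendsto_P_dlog_residue:
  assumes m: "m < N"
  shows "((\<lambda>z. (z - tpt m) * P_dlog j z) \<longlongrightarrow> \<zeta> powi (- (int m * j)) * pole_coeff j) (at (tpt m))"
proof -
  define km where "km = (m + N - 1) mod N"
  define kp where "kp = (m + 1) mod N"
  have kmN: "km < N" "kp < N" using N_pos by (auto simp: km_def kp_def)
  have dist: "m \<noteq> km" "m \<noteq> kp" "km \<noteq> kp"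
    using pred_succ_mod_distinct[OF N_ge_3 m] by (simp_all add: km_def kp_def)
  have lim_k: "((\<lambda>z. (z - tpt m) * dlog_wp_tilde (z - of_nat k * \<alpha>)) \<longlongrightarrow> res_dlog (tpt m - of_nat k * \<alpha>)) (at (tpt m))" for k
    using tendsto_simple_pole_translate[OF tendsto_res_dlog, of "tpt m - of_nat k * \<alpha>" "of_nat k * \<alpha>"] by simp
  have "((\<lambda>z. \<Sum>k<N. \<zeta> powi (- (int k * j)) * ((z - tpt m) * dlog_wp_tilde (z - of_nat k * \<alpha>)))
      \<longlongrightarrow> (\<Sum>k<N. \<zeta> powi (- (int k * j)) * res_dlog (tpt m - of_nat k * \<alpha>))) (at (tpt m))"
    by (intro tendsto_sum tendsto_mult tendsto_const lim_k)
  moreover have "(\<lambda>z. \<Sum>k<N. \<zeta> powi (- (int k * j)) * ((z - tpt m) * dlog_wp_tilde (z - of_nat k * \<alpha>)))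
      = (\<lambda>z. (z - tpt m) * P_dlog j z)"
    by (simp add: P_dlog_def sum_distrib_left mult_ac)
  moreover have "(\<Sum>k<N. \<zeta> powi (- (int k * j)) * res_dlog (tpt m - of_nat k * \<alpha>)) = \<zeta> powi (- (int m * j)) * pole_coeff j"
  proof -
    have "(\<Sum>k<N. \<zeta> powi (- (int k * j)) * res_dlog (tpt m - of_nat k * \<alpha>))
        = (\<Sum>k<N. \<zeta> powi (- (int k * j)) * (if k = m then -2 else if k = km then 1 else if k = kp then 1 else 0))"
      using m by (intro sum.cong refl) (simp add: res_dlog_torsion km_def kp_def)
    also have "\<dots> = \<zeta> powi (- (int m * j)) * (-2) + \<zeta> powi (- (int km * j)) * 1 + \<zeta> powi (- (int kp * j)) * 1"
      by (rule sum_three_points) (use m kmN dist in auto)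
    also have "\<zeta> powi (- (int km * j)) = \<zeta> powi (- (int m * j)) * \<zeta> powi (- ((-1) * j))"
    proof (rule zeta_powi_shift)
      show "int km mod int N = (int m + -1) mod int N" using pred_mod_int by (simp add: km_def)
    qed
    also have "\<zeta> powi (- (int kp * j)) = \<zeta> powi (- (int m * j)) * \<zeta> powi (- (1 * j))"
      by (rule zeta_powi_shift) (simp add: kp_def zmod_int add.commute)
    finally show ?thesis by (simp add: pole_coeff_def algebra_simps)
  qed
  ultimately show ?thesis by simp
qed

lemma P_dlog_shift_alpha: "z \<notin> punctures \<Longrightarrow> P_dlog j z = \<zeta> powi (- j) * P_dlog j (z - \<alpha>)"
proof -
  assume z: "z \<notin> punctures"
  define \<phi> where "\<phi> = (\<lambda>k. \<zeta> powi (- (int k * j)) * dlog_wp_tilde (z - of_nat k * \<alpha>))"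
  have "\<phi> N = \<phi> 0"
  proof -
    have "\<zeta> powi (- (int N * j)) = 1" by (simp add: zeta_powi_eq_1_iff)
    moreover have "dlog_wp_tilde (z - of_nat N * \<alpha>) = dlog_wp_tilde z"
      using dlog_wp_tilde_periodic[OF torsion_shift_notin_dlog_sing[OF z, of N] N_alpha_in_lattice] by simp
    ultimately show ?thesis by (simp add: \<phi>_def)
  qed
  then have "(\<Sum>k<N. \<phi> (Suc k)) = (\<Sum>k<N. \<phi> k)" by (rule sum_lessThan_shift_periodic)
  moreover have "\<phi> (Suc k) = \<zeta> powi (- j) * (\<zeta> powi (- (int k * j)) * dlog_wp_tilde ((z - \<alpha>) - of_nat k * \<alpha>))" for k
  proof -
    have "\<zeta> powi (- (int (Suc k) * j)) = \<zeta> powi (- j) * \<zeta> powi (- (int k * j))"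
      by (simp add: zeta_powi_add[symmetric] algebra_simps)
    then show ?thesis by (simp add: \<phi>_def algebra_simps)
  qed
  ultimately show ?thesis by (simp add: P_dlog_def \<phi>_def sum_distrib_left)
qed

lemma pole_le_lattice_shift: "(\<And>z p. z \<notin> punctures \<Longrightarrow> p \<in> \<Lambda> \<Longrightarrow> f (z + p) = f z) \<Longrightarrow> d \<in> \<Lambda> \<Longrightarrow>
    pole_le f q n c \<Longrightarrow> pole_le f (q + d) n c"
  unfolding pole_le_def by (rule tendsto_pole_lattice_shift[OF discrete_periodic_punctures])

lemma pole_le_punctures:
  assumes per: "\<And>z p. z \<notin> punctures \<Longrightarrow> p \<in> \<Lambda> \<Longrightarrow> f (z + p) = f z"
    and ord: "\<And>m. m < N \<Longrightarrow> \<exists>c. pole_le f (tpt m) n c" and b: "b \<in> punctures"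
  shows "\<exists>c. pole_le f b n c"
proof -
  obtain m where m: "m < N" "b - tpt m \<in> \<Lambda>" using b by (auto simp: punctures_def tpt_def)
  obtain c where c: "pole_le f (tpt m) n c" using ord[OF m(1)] by blast
  have "pole_le f (tpt m + (b - tpt m)) n c"
    by (rule pole_le_lattice_shift[OF _ m(2) c]) (rule per)
  then show ?thesis by auto
qed

lemma holomorphic_punctured_ball: "f holomorphic_on - punctures \<Longrightarrow> \<exists>r>0. f holomorphic_on ball b r - {b}"
proof -
  assume h: "f holomorphic_on - punctures"
  obtain r where r: "r > 0" "\<forall>w\<in>ball b r. w \<noteq> b \<longrightarrow> w \<notin> punctures" using discrete_periodic_punctured_ball[OF discrete_periodic_punctures] by blast
  have "f holomorphic_on ball b r - {b}" by (rule holomorphic_on_subset[OF h]) (use r in auto)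
  then show ?thesis using r by blast
qed

section \<open>The functions \<open>P\<^sub>j\<close> generate \<open>\<O>\<^sub>\<T>\<close>\<close>

definition elliptic_off_punctures :: "(complex \<Rightarrow> complex) set" where
  "elliptic_off_punctures = {f. f holomorphic_on - punctures \<and> (\<forall>z p. z \<notin> punctures \<longrightarrow> p \<in> \<Lambda> \<longrightarrow> f (z + p) = f z) \<and>
          (\<forall>b\<in>punctures. \<exists>n c. pole_le f b n c)}"

lemma elliptic_off_punctures_const: "(\<lambda>_. a) \<in> elliptic_off_punctures"
  by (auto simp: elliptic_off_punctures_def intro!: pole_le_const)

lemma elliptic_off_punctures_add: "f \<in> elliptic_off_punctures \<Longrightarrow> g \<in> elliptic_off_punctures \<Longrightarrow> (\<lambda>z. f z + g z) \<in> elliptic_off_punctures"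
proof -
  assume f: "f \<in> elliptic_off_punctures" and g: "g \<in> elliptic_off_punctures"
  have "\<exists>n c. pole_le (\<lambda>z. f z + g z) b n c" if b: "b \<in> punctures" for b
  proof -
    have "\<exists>n c. pole_le f b n c" "\<exists>n c. pole_le g b n c" using f g b by (simp_all add: elliptic_off_punctures_def)
    then obtain n c m d where o: "pole_le f b n c" "pole_le g b m d" by blast
    obtain c' where c': "pole_le f b (n + m) c'" using pole_le_mono[OF o(1), of "n + m"] by auto
    obtain d' where d': "pole_le g b (n + m) d'" using pole_le_mono[OF o(2), of "n + m"] by auto
    show ?thesis using pole_le_add[OF c' d'] by blast
  qed
  then show ?thesis using f g by (auto simp: elliptic_off_punctures_def intro!: holomorphic_intros)
qed

lemma elliptic_off_punctures_mult: "f \<in> elliptic_off_punctures \<Longrightarrow> g \<in> elliptic_off_punctures \<Longrightarrow> (\<lambda>z. f z * g z) \<in> elliptic_off_punctures"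
proof -
  assume f: "f \<in> elliptic_off_punctures" and g: "g \<in> elliptic_off_punctures"
  have "\<exists>n c. pole_le (\<lambda>z. f z * g z) b n c" if b: "b \<in> punctures" for b
  proof -
    have "\<exists>n c. pole_le f b n c" "\<exists>n c. pole_le g b n c" using f g b by (simp_all add: elliptic_off_punctures_def)
    then obtain n c m d where o: "pole_le f b n c" "pole_le g b m d" by blast
    show ?thesis using pole_le_mult[OF o] by blast
  qed
  then show ?thesis using f g by (auto simp: elliptic_off_punctures_def intro!: holomorphic_intros)
qed

lemma elliptic_off_punctures_meromorphic: "f \<in> elliptic_off_punctures \<Longrightarrow> f meromorphic_on UNIV"
proof -
  assume f: "f \<in> elliptic_off_punctures"
  have "isolated_singularity_at f z \<and> not_essential f z" for z
  proof (cases "z \<in> punctures")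
    case True
    have "\<exists>n c. pole_le f z n c" using f True by (simp add: elliptic_off_punctures_def)
    then obtain n c where o: "pole_le f z n c" by blast
    have hf: "f holomorphic_on - punctures" using f by (simp add: elliptic_off_punctures_def)
    obtain r where r: "r > 0" "f holomorphic_on ball z r - {z}" using holomorphic_punctured_ball[OF hf] by blast
    show ?thesis by (rule pole_le_imp_not_essential[OF r o])
  next
    case False
    have h: "f holomorphic_on - punctures" using f by (simp add: elliptic_off_punctures_def)
    have o: "open (- punctures)" by (rule discrete_periodic_open_compl[OF discrete_periodic_punctures])
    show ?thesis
    proof
      show "isolated_singularity_at f z"
        by (rule isolated_singularity_at_holomorphic[OF holomorphic_on_subset[OF h] o]) (use False in auto)
      show "not_essential f z" by (rule not_essential_holomorphic[OF h]) (use False o in auto)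
    qed
  qed
  then show ?thesis by (simp add: meromorphic_on_altdef)
qed

lemma P_dlog_pole_le: "m < N \<Longrightarrow> pole_le (P_dlog j) (tpt m) 1 (\<zeta> powi (- (int m * j)) * pole_coeff j)"
  using tendsto_P_dlog_residue by (simp add: pole_le_def)

lemma eventually_P_dlog_eq: "\<forall>\<^sub>F w in at b. P_dlog j w = P \<tau> \<alpha> N j w"
  using discrete_periodic_eventually_notin[OF discrete_periodic_punctures, of b] by eventually_elim (simp add: P_eq_P_dlog)

lemma P_pole_le: "m < N \<Longrightarrow> pole_le (P \<tau> \<alpha> N j) (tpt m) 1 (\<zeta> powi (- (int m * j)) * pole_coeff j)"
  by (rule pole_le_cong[OF eventually_P_dlog_eq P_dlog_pole_le])

lemma holomorphic_P: "P \<tau> \<alpha> N j holomorphic_on - punctures"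
  by (rule holomorphic_transform[OF holomorphic_P_dlog]) (simp add: P_eq_P_dlog)

lemma P_periodic: "z \<notin> punctures \<Longrightarrow> p \<in> \<Lambda> \<Longrightarrow> P \<tau> \<alpha> N j (z + p) = P \<tau> \<alpha> N j z"
  using P_dlog_periodic P_eq_P_dlog punctures_shift_lattice_iff by simp

lemma P_elliptic_off_punctures: "P \<tau> \<alpha> N j \<in> elliptic_off_punctures"
proof -
  have "\<exists>c. pole_le (P \<tau> \<alpha> N j) b 1 c" if "b \<in> punctures" for b
    by (rule pole_le_punctures[OF _ _ that]) (use P_periodic P_pole_le in blast)+
  then show ?thesis using holomorphic_P P_periodic unfolding elliptic_off_punctures_def by blast
qed

lemma gen_alg_elliptic_off_punctures: "f \<in> gen_alg G \<Longrightarrow> G \<subseteq> elliptic_off_punctures \<Longrightarrow> f \<in> elliptic_off_punctures"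
  by (induction rule: gen_alg.induct) (auto intro: elliptic_off_punctures_const elliptic_off_punctures_add elliptic_off_punctures_mult)

lemma elliptic_off_punctures_O_T: "f \<in> elliptic_off_punctures \<Longrightarrow> f \<in> O_T \<tau> \<alpha> N"
  using elliptic_off_punctures_meromorphic by (auto simp: elliptic_off_punctures_def O_T_def punctures_eq_compl)

lemma O_T_pole_le: "f \<in> O_T \<tau> \<alpha> N \<Longrightarrow> b \<in> punctures \<Longrightarrow> \<exists>n c. pole_le f b n c"
proof -
  assume f: "f \<in> O_T \<tau> \<alpha> N" and b: "b \<in> punctures"
  have h: "f holomorphic_on - punctures" using f by (simp add: O_T_def punctures_eq_compl)
  obtain r where r: "r > 0" "f holomorphic_on ball b r - {b}" using holomorphic_punctured_ball[OF h] by auto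
  have "not_essential f b" using f by (auto simp: O_T_def meromorphic_on_altdef)
  then show ?thesis by (rule not_essential_imp_pole_le[OF r])
qed

abbreviation "P_gens \<equiv> {P \<tau> \<alpha> N j | j. 1 \<le> j \<and> j \<le> int N - 1}"
abbreviation "P_alg \<equiv> gen_alg P_gens"

lemma P_alg_sum: "finite T \<Longrightarrow> (\<And>t. t \<in> T \<Longrightarrow> f t \<in> P_alg) \<Longrightarrow> (\<lambda>z. \<Sum>t\<in>T. f t z) \<in> P_alg"
proof (induction T rule: finite_induct)
  case empty
  then show ?case using gen_alg.const[of 0] by simp
next
  case (insert x F)
  then have "(\<lambda>z. f x z + (\<Sum>t\<in>F. f t z)) \<in> P_alg" by (intro gen_alg.add) auto
  then show ?case using insert by simp
qed

lemma P_alg_cmult: "f \<in> P_alg \<Longrightarrow> (\<lambda>z. a * f z) \<in> P_alg"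
  by (rule gen_alg.mult[OF gen_alg.const])

lemma P_alg_power: "f \<in> P_alg \<Longrightarrow> (\<lambda>z. f z ^ k) \<in> P_alg"
proof (induction k)
  case 0 then show ?case using gen_alg.const[of 1] by simp
next
  case (Suc k)
  then show ?case using gen_alg.mult[OF Suc.prems Suc.IH[OF Suc.prems]] by simp
qed

lemma P_in_P_alg: "1 \<le> j \<Longrightarrow> j \<le> int N - 1 \<Longrightarrow> P \<tau> \<alpha> N j \<in> P_alg"
  by (rule gen_alg.gen) blast

lemma P_alg_elliptic_off_punctures: "f \<in> P_alg \<Longrightarrow> f \<in> elliptic_off_punctures"
  by (rule gen_alg_elliptic_off_punctures) (auto intro: P_elliptic_off_punctures)

lemma dvd_diff_less_iff: "m < N \<Longrightarrow> m' < N \<Longrightarrow> int N dvd (int m' - int m) \<longleftrightarrow> m' = m"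
proof
  assume m: "m < N" "m' < N" and d: "int N dvd (int m' - int m)"
  have lt: "\<bar>int m' - int m\<bar> < int N" using m by auto
  show "m' = m"
  proof (rule ccontr)
    assume "m' \<noteq> m"
    then have "int m' - int m \<noteq> 0" by simp
    from dvd_imp_le_int[OF this d] have "\<bar>int N\<bar> \<le> \<bar>int m' - int m\<bar>" .
    then show False using lt by simp
  qed
qed simp

lemma dft_inversion:
  assumes m: "m < N"
  shows "(\<Sum>t<N. (\<Sum>m'<N. v m' * \<zeta> powi (int m' * int t)) * \<zeta> powi (- (int m * int t))) = of_nat N * v m"
proof -
  have "(\<Sum>t<N. (\<Sum>m'<N. v m' * \<zeta> powi (int m' * int t)) * \<zeta> powi (- (int m * int t)))
      = (\<Sum>t<N. \<Sum>m'<N. v m' * \<zeta> powi (int t * (int m' - int m)))"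
  proof (intro sum.cong refl)
    fix t
    have "\<zeta> powi (int m' * int t) * \<zeta> powi (- (int m * int t)) = \<zeta> powi (int t * (int m' - int m))" for m'
      by (simp add: zeta_powi_add[symmetric] algebra_simps)
    then show "(\<Sum>m'<N. v m' * \<zeta> powi (int m' * int t)) * \<zeta> powi (- (int m * int t))
        = (\<Sum>m'<N. v m' * \<zeta> powi (int t * (int m' - int m)))"
      by (simp add: sum_distrib_right mult.assoc)
  qed
  also have "\<dots> = (\<Sum>m'<N. v m' * (\<Sum>t<N. \<zeta> powi (int t * (int m' - int m))))"
    by (subst sum.swap) (simp add: sum_distrib_left)
  also have "\<dots> = (\<Sum>m'<N. v m' * (if m' = m then of_nat N else 0))"
    by (intro sum.cong refl) (simp add: zeta_orthogonality dvd_diff_less_iff[OF m])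
  also have "\<dots> = (\<Sum>m'<N. if m' = m then v m' * of_nat N else 0)" by (intro sum.cong) auto
  also have "\<dots> = of_nat N * v m" using m by (simp add: mult.commute)
  finally show ?thesis .
qed

lemma P_alg_interpolate:
  assumes M: "\<And>t. t < N \<Longrightarrow> M t \<in> P_alg"
    and ord: "\<And>t m. t < N \<Longrightarrow> m < N \<Longrightarrow> pole_le (M t) (tpt m) n (C t * \<zeta> powi (- (int m * int t)))"
    and zero: "\<And>t. t < N \<Longrightarrow> C t = 0 \<Longrightarrow> (\<Sum>m<N. v m * \<zeta> powi (int m * int t)) = 0"
  shows "\<exists>G\<in>P_alg. \<forall>m<N. pole_le G (tpt m) n (v m)"
proof -
  define S where "S = (\<lambda>t. \<Sum>m'<N. v m' * \<zeta> powi (int m' * int t))"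
  define a where "a = (\<lambda>t. S t / (of_nat N * C t))"
  define G where "G = (\<lambda>z. \<Sum>t<N. a t * M t z)"
  have P_alg: "G \<in> P_alg" unfolding G_def by (intro P_alg_sum P_alg_cmult M) auto
  have "pole_le G (tpt m) n (v m)" if m: "m < N" for m
  proof -
    have "pole_le G (tpt m) n (\<Sum>t<N. a t * (C t * \<zeta> powi (- (int m * int t))))"
      unfolding G_def by (intro pole_le_sum pole_le_cmult ord m) auto
    also have "(\<Sum>t<N. a t * (C t * \<zeta> powi (- (int m * int t))))
        = (\<Sum>t<N. S t * \<zeta> powi (- (int m * int t))) / of_nat N"
    proof -
      have "a t * (C t * \<zeta> powi (- (int m * int t))) = S t * \<zeta> powi (- (int m * int t)) / of_nat N" if t: "t < N" for t
      proof (cases "C t = 0")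
        case True then show ?thesis using zero[OF t] by (simp add: a_def S_def)
      next
        case False then show ?thesis using N_pos by (simp add: a_def field_simps)
      qed
      then show ?thesis by (simp add: sum_divide_distrib)
    qed
    also have "\<dots> = v m" using dft_inversion[OF m, of v] N_pos by (simp add: S_def)
    finally show ?thesis .
  qed
  then show ?thesis using P_alg by blast
qed

lemma zeta_powi_power: "(\<zeta> powi a) ^ k = \<zeta> powi (a * int k)"
  by (simp add: power_int_mult power_int_of_nat[symmetric] del: power_int_of_nat)

lemma P_alg_simple_poles:
  assumes "(\<Sum>m<N. v m) = 0"
  shows "\<exists>G\<in>P_alg. \<forall>m<N. pole_le G (tpt m) 1 (v m)"
proof -
  define M where "M = (\<lambda>t::nat. if t = 0 then (\<lambda>_. 0) else P \<tau> \<alpha> N (int t))"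
  define C where "C = (\<lambda>t::nat. if t = 0 then 0 else pole_coeff (int t))"
  show ?thesis
  proof (rule P_alg_interpolate[where M=M and C=C])
    fix t assume t: "t < N"
    show "M t \<in> P_alg"
      using t gen_alg.const[of 0] P_in_P_alg[of "int t"] by (auto simp: M_def)
  next
    fix t m assume t: "t < N" and m: "m < N"
    show "pole_le (M t) (tpt m) 1 (C t * \<zeta> powi (- (int m * int t)))"
      using pole_le_Suc[OF pole_le_const[of 0 "tpt m"]] P_pole_le[OF m, of "int t"]
      by (auto simp: M_def C_def mult.commute)
  next
    fix t assume t: "t < N" and C0: "C t = 0"
    have "t = 0"
    proof (rule ccontr)
      assume "t \<noteq> 0"
      then have "pole_coeff (int t) \<noteq> 0"
        using t by (intro pole_coeff_nonzero) (auto dest: zdvd_imp_le)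
      then show False using C0 \<open>t \<noteq> 0\<close> by (simp add: C_def)
    qed
    then show "(\<Sum>m<N. v m * \<zeta> powi (int m * int t)) = 0" using assms by simp
  qed
qed

lemma P_alg_higher_poles: "\<exists>G\<in>P_alg. \<forall>m<N. pole_le G (tpt m) (Suc (Suc k)) (v m)"
proof -
  have "\<forall>t::nat. \<exists>a b. 1 \<le> a \<and> a \<le> int N - 1 \<and> 1 \<le> b \<and> b \<le> int N - 1 \<and>
      (a + b) mod int N = (int t - int k) mod int N"
    using sum_of_two_nonzero_residues[OF N_ge_3] by blast
  from choice[OF this] obtain i1 where "\<forall>t::nat. \<exists>b. 1 \<le> i1 t \<and> i1 t \<le> int N - 1 \<and>
      1 \<le> b \<and> b \<le> int N - 1 \<and> (i1 t + b) mod int N = (int t - int k) mod int N"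
    by (elim exE)
  from choice[OF this] obtain i2 where "\<forall>t. 1 \<le> i1 t \<and> i1 t \<le> int N - 1 \<and>
      1 \<le> i2 t \<and> i2 t \<le> int N - 1 \<and> (i1 t + i2 t) mod int N = (int t - int k) mod int N"
    by (elim exE)
  then have i1: "1 \<le> i1 t" "i1 t \<le> int N - 1" and i2: "1 \<le> i2 t" "i2 t \<le> int N - 1"
    and i12: "(i1 t + i2 t) mod int N = (int t - int k) mod int N" for t
    by auto
  have cong: "(i1 t + i2 t + int k) mod int N = int t mod int N" for t
  proof -
    have "(i1 t + i2 t + int k) mod int N = ((i1 t + i2 t) mod int N + int k) mod int N"
      by (simp add: mod_add_left_eq)
    also have "\<dots> = (int t - int k + int k) mod int N" by (simp add: i12 mod_add_left_eq)
    finally show ?thesis by simp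
  qed
  define M where "M = (\<lambda>t z. P \<tau> \<alpha> N (i1 t) z * P \<tau> \<alpha> N (i2 t) z * P \<tau> \<alpha> N 1 z ^ k)"
  define C where "C = (\<lambda>t. pole_coeff (i1 t) * pole_coeff (i2 t) * pole_coeff 1 ^ k)"
  show ?thesis
  proof (rule P_alg_interpolate[where M=M and C=C])
    fix t assume t: "t < N"
    show "M t \<in> P_alg" unfolding M_def
      using i1[of t] i2[of t] N_ge_3 by (intro gen_alg.mult P_alg_power P_in_P_alg) auto
  next
    fix t m assume t: "t < N" and m: "m < N"
    have "pole_le (M t) (tpt m) ((1 + 1) + 1 * k)
        (((\<zeta> powi (- (int m * i1 t)) * pole_coeff (i1 t)) * (\<zeta> powi (- (int m * i2 t)) * pole_coeff (i2 t))) *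
         (\<zeta> powi (- (int m * 1)) * pole_coeff 1) ^ k)"
      unfolding M_def by (intro pole_le_mult pole_le_power P_pole_le m)
    also have "(1 + 1) + 1 * k = Suc (Suc k)" by simp
    also have "((\<zeta> powi (- (int m * i1 t)) * pole_coeff (i1 t)) * (\<zeta> powi (- (int m * i2 t)) * pole_coeff (i2 t))) *
         (\<zeta> powi (- (int m * 1)) * pole_coeff 1) ^ k
        = C t * (\<zeta> powi (- (int m * i1 t)) * \<zeta> powi (- (int m * i2 t)) * (\<zeta> powi (- (int m * 1))) ^ k)"
      by (simp add: C_def power_mult_distrib mult_ac)
    also have "\<zeta> powi (- (int m * i1 t)) * \<zeta> powi (- (int m * i2 t)) * (\<zeta> powi (- (int m * 1))) ^ k
        = \<zeta> powi (- (int m * (i1 t + i2 t + int k)))"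
      by (simp add: zeta_powi_power zeta_powi_add[symmetric] algebra_simps)
    also have "\<dots> = \<zeta> powi (- (int m * int t))"
      by (intro zeta_powi_cong mod_minus_cong mod_mult_cong refl cong)
    finally show "pole_le (M t) (tpt m) (Suc (Suc k)) (C t * \<zeta> powi (- (int m * int t)))" .
  next
    fix t assume t: "t < N" and C0: "C t = 0"
    have "\<not> int N dvd i1 t" "\<not> int N dvd i2 t" "\<not> int N dvd 1"
      using i1[of t] i2[of t] N_ge_3 by (auto dest: zdvd_imp_le)
    then have "C t \<noteq> 0" by (simp add: C_def pole_coeff_nonzero)
    then show "(\<Sum>m<N. v m * \<zeta> powi (int m * int t)) = 0" using C0 by simp
  qed
qed

lemma P_alg_lower_pole_order:
  assumes hol: "f holomorphic_on - punctures"
    and per: "\<And>z p. z \<notin> punctures \<Longrightarrow> p \<in> \<Lambda> \<Longrightarrow> f (z + p) = f z"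
    and ord: "\<And>m. m < N \<Longrightarrow> \<exists>c. pole_le f (tpt m) (Suc n) c"
  obtains G where "G \<in> P_alg" "\<And>m. m < N \<Longrightarrow> \<exists>c. pole_le (\<lambda>z. f z - G z) (tpt m) n c"
proof -
  obtain v where v: "\<And>m. m < N \<Longrightarrow> pole_le f (tpt m) (Suc n) (v m)"
    using ord by metis
  have "\<exists>G\<in>P_alg. \<forall>m<N. pole_le G (tpt m) (Suc n) (v m)"
  proof (cases n)
    case 0
    have "(\<Sum>m<N. v m) = 0"
    proof (rule torsion_residue_sum_zero[OF hol])
      show "f (z + p) = f z" if "z \<notin> punctures" "p \<in> \<Lambda>" for z p by (rule per[OF that])
      fix m assume "m < N"
      then show "((\<lambda>z. (z - tpt m) * f z) \<longlongrightarrow> v m) (at (tpt m))"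
        using v 0 by (simp add: pole_le_def)
    qed
    from P_alg_simple_poles[OF this] show ?thesis using 0 by simp
  next
    case (Suc k)
    then show ?thesis using P_alg_higher_poles[of k v] by simp
  qed
  then obtain G where G: "G \<in> P_alg" "\<And>m. m < N \<Longrightarrow> pole_le G (tpt m) (Suc n) (v m)"
    by blast
  have "G holomorphic_on - punctures"
    using P_alg_elliptic_off_punctures[OF G(1)] by (simp add: elliptic_off_punctures_def)
  then have hol1: "(\<lambda>z. f z - G z) holomorphic_on - punctures"
    using hol by (intro holomorphic_intros)
  have "\<exists>c. pole_le (\<lambda>z. f z - G z) (tpt m) n c" if m: "m < N" for m
  proof -
    have z: "pole_le (\<lambda>z. f z - G z) (tpt m) (Suc n) 0"
      using pole_le_diff[OF v[OF m] G(2)[OF m]] by simp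
    obtain r where "r > 0" "(\<lambda>z. f z - G z) holomorphic_on ball (tpt m) r - {tpt m}"
      using holomorphic_punctured_ball[OF hol1] by blast
    from pole_le_lower[OF this z] show ?thesis .
  qed
  with G(1) show ?thesis by (rule that)
qed

lemma periodic_in_P_alg:
  assumes "f holomorphic_on - punctures"
    and "\<And>z p. z \<notin> punctures \<Longrightarrow> p \<in> \<Lambda> \<Longrightarrow> f (z + p) = f z"
    and "\<And>m. m < N \<Longrightarrow> \<exists>c. pole_le f (tpt m) n c"
  shows "\<exists>h\<in>P_alg. \<forall>z. z \<notin> punctures \<longrightarrow> f z = h z"
  using assms
proof (induction n arbitrary: f)
  case 0
  note hol = "0.prems"(1) and per = "0.prems"(2) and ord = "0.prems"(3)
  have "\<exists>c. \<forall>z. z \<notin> punctures \<longrightarrow> f z = c"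
  proof (rule elliptic_liouville[OF discrete_periodic_punctures hol])
    show "f (z + p) = f z" if "z \<notin> punctures" "p \<in> \<Lambda>" for z p by (rule per[OF that])
    fix b assume "b \<in> punctures"
    then have "\<exists>c. pole_le f b 0 c" using pole_le_punctures[of f 0 b] per ord by blast
    then show "\<exists>c. (f \<longlongrightarrow> c) (at b)" by (simp add: pole_le_def)
  qed
  then obtain c where "\<forall>z. z \<notin> punctures \<longrightarrow> f z = c" by blast
  then show ?case by (intro bexI[of _ "\<lambda>_. c"] gen_alg.const) auto
next
  case (Suc n)
  note hol = Suc.prems(1) and per = Suc.prems(2)
  obtain G where G: "G \<in> P_alg" and ord1: "\<And>m. m < N \<Longrightarrow> \<exists>c. pole_le (\<lambda>z. f z - G z) (tpt m) n c"
  proof (rule P_alg_lower_pole_order[OF hol])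
    show "f (z + p) = f z" if "z \<notin> punctures" "p \<in> \<Lambda>" for z p by (rule per[OF that])
    show "\<exists>c. pole_le f (tpt m) (Suc n) c" if "m < N" for m by (rule Suc.prems(3)[OF that])
  qed (rule that)
  have "G \<in> elliptic_off_punctures" by (rule P_alg_elliptic_off_punctures[OF G])
  then have "G holomorphic_on - punctures"
    and G_per: "\<And>z p. z \<notin> punctures \<Longrightarrow> p \<in> \<Lambda> \<Longrightarrow> G (z + p) = G z"
    by (auto simp: elliptic_off_punctures_def)
  then have hol1: "(\<lambda>z. f z - G z) holomorphic_on - punctures"
    using hol by (intro holomorphic_intros)
  have per1: "f (z + p) - G (z + p) = f z - G z" if "z \<notin> punctures" "p \<in> \<Lambda>" for z p
    using per[OF that] G_per[OF that] by simp
  have "\<exists>h\<in>P_alg. \<forall>z. z \<notin> punctures \<longrightarrow> f z - G z = h z"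
    by (rule Suc.IH[OF hol1]) (use per1 ord1 in auto)
  then obtain h where h: "h \<in> P_alg" "\<forall>z. z \<notin> punctures \<longrightarrow> f z - G z = h z" by blast
  show ?case
  proof (intro bexI[of _ "\<lambda>z. h z + G z"] allI impI)
    fix z assume "z \<notin> punctures"
    then show "f z = h z + G z" using h(2) by (simp add: algebra_simps)
  qed (rule gen_alg.add[OF h(1) G])
qed

theorem O_T_eq_P_alg: "eq_on_sets (punctured \<tau> \<alpha> N) (O_T \<tau> \<alpha> N) P_alg"
  unfolding eq_on_sets_def
proof (intro conjI ballI)
  fix f assume f: "f \<in> O_T \<tau> \<alpha> N"
  have h: "f holomorphic_on - punctures" using f by (simp add: O_T_def punctures_eq_compl)
  have per: "\<And>z p. z \<notin> punctures \<Longrightarrow> p \<in> \<Lambda> \<Longrightarrow> f (z + p) = f z"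
    using f by (auto simp: O_T_def punctures_eq_compl)
  have "\<forall>m<N. \<exists>n c. pole_le f (tpt m) n c" using O_T_pole_le[OF f] tpt_in_punctures by blast
  then obtain nn cc where nc: "\<And>m. m < N \<Longrightarrow> pole_le f (tpt m) (nn m) (cc m)" by metis
  define n0 where "n0 = (\<Sum>m<N. nn m)"
  have ord: "\<exists>c. pole_le f (tpt m) n0 c" if m: "m < N" for m
  proof -
    have "nn m \<le> n0" unfolding n0_def using m by (intro member_le_sum) auto
    then show ?thesis using pole_le_mono[OF nc[OF m]] by blast
  qed
  have "\<exists>g\<in>P_alg. \<forall>z. z \<notin> punctures \<longrightarrow> f z = g z"
    by (intro periodic_in_P_alg[where n = n0] h per ord)
  then obtain g where "g \<in> P_alg" "\<forall>z. z \<notin> punctures \<longrightarrow> f z = g z" by blast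
  then show "\<exists>g\<in>P_alg. \<forall>z\<in>punctured \<tau> \<alpha> N. f z = g z" by (auto simp: punctures_eq_compl)
next
  fix g assume "g \<in> P_alg"
  then have "g \<in> O_T \<tau> \<alpha> N" by (intro elliptic_off_punctures_O_T P_alg_elliptic_off_punctures)
  then show "\<exists>f\<in>O_T \<tau> \<alpha> N. \<forall>z\<in>punctured \<tau> \<alpha> N. f z = g z" by blast
qed

section \<open>The Weierstrass function of \<open>\<Lambda>\<^sub>\<alpha>\<close>\<close>

abbreviation "\<Lambda>\<^sub>\<alpha> \<equiv> lattice_alpha \<tau> \<alpha>"

definition coset :: "nat \<Rightarrow> complex set" where "coset k = (\<lambda>p. p + of_nat k * \<alpha>) ` \<Lambda>"

lemma lattice_alpha_eq_cosets: "\<Lambda>\<^sub>\<alpha> = (\<Union>k\<in>{..<N}. coset k)"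
proof
  show "\<Lambda>\<^sub>\<alpha> \<subseteq> (\<Union>k\<in>{..<N}. coset k)"
  proof
    fix w assume "w \<in> \<Lambda>\<^sub>\<alpha>"
    then obtain m n k :: int where w: "w = of_int m + of_int n * \<alpha> + of_int k * \<tau>"
      by (auto simp: lattice_alpha_def)
    define r where "r = n mod int N"
    define q where "q = n div int N"
    have r: "0 \<le> r" "r < int N" using N_pos by (auto simp: r_def)
    have nq: "n = q * int N + r" by (simp add: q_def r_def)
    have "w = (of_int m + of_int k * \<tau> + of_int q * (of_nat N * \<alpha>)) + of_nat (nat r) * \<alpha>"
      using r by (simp add: w nq algebra_simps)
    moreover have "of_int m + of_int k * \<tau> + of_int q * (of_nat N * \<alpha>) \<in> \<Lambda>"
    proof -
      have "of_int m + of_int k * \<tau> \<in> \<Lambda>" unfolding in_lattice_iff by blast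
      then show ?thesis using lattice_of_int_mult[OF N_alpha_in_lattice, of q] lattice_add by blast
    qed
    ultimately show "w \<in> (\<Union>k\<in>{..<N}. coset k)" using r unfolding coset_def
      by (intro UN_I[of "nat r"]) auto
  qed
  show "(\<Union>k\<in>{..<N}. coset k) \<subseteq> \<Lambda>\<^sub>\<alpha>"
  proof
    fix w assume "w \<in> (\<Union>k\<in>{..<N}. coset k)"
    then obtain k p where "w = p + of_nat k * \<alpha>" "p \<in> \<Lambda>" by (auto simp: coset_def)
    then obtain m n :: int where "w = of_int m + of_int n * \<tau> + of_nat k * \<alpha>" by (auto simp: in_lattice_iff)
    then have "w = of_int m + of_int (int k) * \<alpha> + of_int n * \<tau>" by simp
    then show "w \<in> \<Lambda>\<^sub>\<alpha>" unfolding lattice_alpha_def by blast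
  qed
qed

lemma cosets_disjoint: "k < N \<Longrightarrow> k' < N \<Longrightarrow> k \<noteq> k' \<Longrightarrow> coset k \<inter> coset k' = {}"
proof (rule ccontr)
  assume k: "k < N" "k' < N" "k \<noteq> k'" and "coset k \<inter> coset k' \<noteq> {}"
  then obtain p p' where "p \<in> \<Lambda>" "p' \<in> \<Lambda>" "p + of_nat k * \<alpha> = p' + of_nat k' * \<alpha>"
    by (auto simp: coset_def)
  then have "tpt k - tpt k' = p' - p" by (simp add: tpt_def algebra_simps)
  then have "tpt k - tpt k' \<in> \<Lambda>" using \<open>p \<in> \<Lambda>\<close> \<open>p' \<in> \<Lambda>\<close> lattice_diff by metis
  then show False using tpt_diff_in_lattice k by blast
qed

lemma coset_term_eq: fixes z c :: complex shows "(\<lambda>p. 1/(z - (p + c))^2 - 1/(p + c)^2) = (\<lambda>p. 1/((z - c) - p)^2 - 1/((- c) - p)^2)"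
proof (rule ext)
  fix p :: complex
  have e1: "z - (p + c) = (z - c) - p" by simp
  have e2: "(p + c)^2 = ((- c) - p)^2" by (simp add: power2_eq_square algebra_simps)
  show "1/(z - (p + c))^2 - 1/(p + c)^2 = 1/((z - c) - p)^2 - 1/((- c) - p)^2" by (simp only: e1 e2)
qed

lemma summable_wp_terms_coset: "(\<lambda>w. 1/(z-w)^2 - 1/w^2) summable_on coset k"
proof -
  have "((\<lambda>w. 1/(z-w)^2 - 1/w^2) \<circ> (\<lambda>p. p + of_nat k * \<alpha>)) summable_on \<Lambda>"
    unfolding o_def coset_term_eq by (rule summable_lattice_inverse_square_diff)
  then show ?thesis unfolding coset_def by (subst summable_on_reindex) (auto simp: inj_on_def)
qed

lemma infsum_wp_terms_coset: "(\<Sum>\<^sub>\<infinity>w\<in>coset k. 1/(z-w)^2 - 1/w^2) = wp \<Lambda> (z - of_nat k * \<alpha>) - wp \<Lambda> (- (of_nat k * \<alpha>))"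
proof -
  have "(\<Sum>\<^sub>\<infinity>w\<in>coset k. 1/(z-w)^2 - 1/w^2) = (\<Sum>\<^sub>\<infinity>p\<in>\<Lambda>. 1/((z - of_nat k * \<alpha>) - p)^2 - 1/((- (of_nat k * \<alpha>)) - p)^2)"
    unfolding coset_def by (subst infsum_reindex) (auto simp: inj_on_def o_def coset_term_eq)
  also have "\<dots> = (\<Sum>\<^sub>\<infinity>p\<in>\<Lambda>. (1/((z - of_nat k * \<alpha>) - p)^2 - 1/p^2) - (1/((- (of_nat k * \<alpha>)) - p)^2 - 1/p^2))"
    by simp
  also have "\<dots> = wp \<Lambda> (z - of_nat k * \<alpha>) - wp \<Lambda> (- (of_nat k * \<alpha>))"
    by (subst infsum_diff[OF summable_wp_terms summable_wp_terms]) (simp add: wp_eq_lattice_sum)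
  finally show ?thesis .
qed

lemma wp_lattice_alpha_eq: "wp \<Lambda>\<^sub>\<alpha> z = (\<Sum>k<N. wp \<Lambda> (z - of_nat k * \<alpha>) - wp \<Lambda> (- (of_nat k * \<alpha>)))"
proof -
  define T where "T = (\<lambda>w. 1/(z-w)^2 - 1/w^2)"
  have sLA: "T summable_on \<Lambda>\<^sub>\<alpha>" unfolding lattice_alpha_eq_cosets T_def
  proof (rule summable_on_finite_union_disjoint)
    show "\<And>a. a \<in> {..<N} \<Longrightarrow> (\<lambda>w. 1 / (z - w)\<^sup>2 - 1 / w\<^sup>2) summable_on coset a" by (rule summable_wp_terms_coset)
    show "\<And>a a'. a \<in> {..<N} \<Longrightarrow> a' \<in> {..<N} \<Longrightarrow> a \<noteq> a' \<Longrightarrow> coset a \<inter> coset a' = {}"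
      by (rule cosets_disjoint) auto
  qed simp
  have z0: "0 \<in> \<Lambda>\<^sub>\<alpha>" unfolding lattice_alpha_def by (auto intro!: exI[of _ 0])
  have s0: "T summable_on (\<Lambda>\<^sub>\<alpha> - {0})" using sLA by (rule summable_on_subset) auto
  have "wp \<Lambda>\<^sub>\<alpha> z = T 0 + infsum T (\<Lambda>\<^sub>\<alpha> - {0})" by (simp add: wp_def T_def)
  also have "\<dots> = infsum T (insert 0 (\<Lambda>\<^sub>\<alpha> - {0}))" by (rule infsum_insert[OF s0, symmetric]) auto
  also have "insert 0 (\<Lambda>\<^sub>\<alpha> - {0}) = \<Lambda>\<^sub>\<alpha>" using z0 by auto
  also have "infsum T \<Lambda>\<^sub>\<alpha> = (\<Sum>k<N. infsum T (coset k))" unfolding lattice_alpha_eq_cosets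
  proof (rule sum_infsum[symmetric])
    show "\<And>a. a \<in> {..<N} \<Longrightarrow> T summable_on coset a" unfolding T_def by (rule summable_wp_terms_coset)
    show "\<And>a a'. a \<in> {..<N} \<Longrightarrow> a' \<in> {..<N} \<Longrightarrow> a \<noteq> a' \<Longrightarrow> coset a \<inter> coset a' = {}"
      by (rule cosets_disjoint) auto
  qed simp
  finally show ?thesis by (simp add: T_def infsum_wp_terms_coset)
qed

definition wp_trace :: "complex \<Rightarrow> complex" where "wp_trace z = (\<Sum>k<N. wp \<Lambda> (z - of_nat k * \<alpha>))"

lemma holomorphic_wp_trace: "wp_trace holomorphic_on - punctures"
proof -
  have "(\<lambda>z. wp \<Lambda> (z - of_nat k * \<alpha>)) holomorphic_on - punctures" for k
  proof -
    have "(wp \<Lambda> \<circ> (\<lambda>z. z - of_nat k * \<alpha>)) holomorphic_on - punctures"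
      by (rule holomorphic_on_compose_gen[OF _ holomorphic_wp]) (use torsion_shift_notin_lattice in \<open>auto intro!: holomorphic_intros\<close>)
    then show ?thesis by (simp add: o_def)
  qed
  then show ?thesis unfolding wp_trace_def[abs_def] by (intro holomorphic_intros)
qed

lemma wp_trace_periodic: "z \<notin> punctures \<Longrightarrow> p \<in> \<Lambda> \<Longrightarrow> wp_trace (z + p) = wp_trace z"
proof -
  assume z: "z \<notin> punctures" and p: "p \<in> \<Lambda>"
  have "wp \<Lambda> (z + p - of_nat k * \<alpha>) = wp \<Lambda> (z - of_nat k * \<alpha>)" for k
    using wp_periodic[OF p torsion_shift_notin_lattice[OF z, of k]] by (simp add: algebra_simps)
  then show ?thesis by (simp add: wp_trace_def)
qed

lemma wp_trace_shift_alpha: "z \<notin> punctures \<Longrightarrow> wp_trace (z - \<alpha>) = wp_trace z"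
proof -
  assume z: "z \<notin> punctures"
  define \<phi> where "\<phi> = (\<lambda>k. wp \<Lambda> (z - of_nat k * \<alpha>))"
  have "\<phi> N = \<phi> 0"
    using wp_periodic[OF N_alpha_in_lattice torsion_shift_notin_lattice[OF z, of N]] by (simp add: \<phi>_def)
  then have "(\<Sum>k<N. \<phi> (Suc k)) = (\<Sum>k<N. \<phi> k)" by (rule sum_lessThan_shift_periodic)
  then show ?thesis by (simp add: \<phi>_def wp_trace_def algebra_simps)
qed

lemma wp_trace_pole_le: "pole_le wp_trace 0 2 1"
proof -
  define R where "R = (\<lambda>z. \<Sum>k\<in>{1..<N}. wp \<Lambda> (z - of_nat k * \<alpha>))"
  have SR: "wp_trace z = wp \<Lambda> z + R z" for z
  proof -
    have "{..<N} = insert 0 {1..<N}" using N_pos by auto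
    then show ?thesis by (simp add: wp_trace_def R_def)
  qed
  have "isCont R 0"
  proof -
    have "isCont (\<lambda>z. wp \<Lambda> (z - of_nat k * \<alpha>)) 0" if k: "k \<in> {1..<N}" for k
    proof -
      have nl: "0 - of_nat k * \<alpha> \<notin> \<Lambda>" using multiple_alpha_notin_lattice[of k] k by auto
      have cw: "isCont (wp \<Lambda>) (0 - of_nat k * \<alpha>)"
        using holomorphic_wp open_lattice_compl nl by (meson ComplI continuous_on_eq_continuous_at holomorphic_on_imp_continuous_on)
      have "isCont (\<lambda>z. z - of_nat k * \<alpha>) 0" by simp
      from continuous_at_compose[OF this] cw have "isCont (wp \<Lambda> \<circ> (\<lambda>z. z - of_nat k * \<alpha>)) 0" by simp
      then show ?thesis by (simp add: o_def)
    qed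
    then show ?thesis unfolding R_def by (intro isCont_sum) auto
  qed
  then have "(R \<longlongrightarrow> R 0) (at 0)" by (simp add: isCont_def)
  then have "((\<lambda>z. z^2 * wp \<Lambda> z + z^2 * R z) \<longlongrightarrow> 1 + 0^2 * R 0) (at 0)"
    by (intro tendsto_intros tendsto_wp_double_pole)
  then show ?thesis by (simp add: pole_le_def SR algebra_simps)
qed

definition P_prod :: "int \<Rightarrow> complex \<Rightarrow> complex" where "P_prod j z = P_dlog (- j) z * P_dlog j z"

lemma P_prod_shift_alpha: "z \<notin> punctures \<Longrightarrow> P_prod j (z - \<alpha>) = P_prod j z"
proof -
  assume z: "z \<notin> punctures"
  have "P_prod j z = (\<zeta> powi (- (- j)) * \<zeta> powi (- j)) * P_prod j (z - \<alpha>)"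
    using P_dlog_shift_alpha[OF z, of j] P_dlog_shift_alpha[OF z, of "-j"] by (simp add: P_prod_def mult_ac)
  also have "\<zeta> powi (- (- j)) * \<zeta> powi (- j) = 1" by (simp add: zeta_powi_add[symmetric])
  finally show ?thesis by simp
qed

lemma alpha_invariant_elliptic_const:
  assumes hE: "E holomorphic_on - punctures"
    and perE: "\<And>z p. z \<notin> punctures \<Longrightarrow> p \<in> \<Lambda> \<Longrightarrow> E (z + p) = E z"
    and alE: "\<And>q. \<forall>\<^sub>F x in at q. E (x + \<alpha>) = E x"
    and ord: "pole_le E 0 (Suc (Suc 0)) 0"
  shows "\<exists>e. \<forall>z. z \<notin> punctures \<longrightarrow> E z = e"
proof -
  obtain r where r: "r > 0" "E holomorphic_on ball 0 r - {0}"
    using holomorphic_punctured_ball[OF hE] by blast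
  obtain c1 where oE1: "pole_le E 0 (Suc 0) c1" using pole_le_lower[OF r ord] by blast
  have at_tpt: "pole_le E (tpt m) n c'" if "pole_le E 0 n c'" for m n c'
  proof (induction m)
    case 0 then show ?case using that by (simp add: tpt_def)
  next
    case (Suc m)
    have "pole_le E (tpt m + \<alpha>) n c'" by (rule pole_le_translate[OF alE Suc.IH])
    then show ?case by (simp add: tpt_def algebra_simps)
  qed
  \<comment> \<open>By \<open>\<alpha>\<close>-invariance all \<open>N\<close> residues of \<open>E\<close> equal \<open>c1\<close>, and they sum to zero.\<close>
  have "(\<Sum>m<N. c1) = 0"
  proof (rule torsion_residue_sum_zero[OF hE perE])
    fix m assume "m < N"
    show "((\<lambda>z. (z - tpt m) * E z) \<longlongrightarrow> c1) (at (tpt m))"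
      using at_tpt[OF oE1, of m] unfolding pole_le_def by simp
  qed
  then have "c1 = 0" using N_pos by simp
  then obtain c2 where oE0: "pole_le E 0 0 c2" using pole_le_lower[OF r, of 0] oE1 by auto
  show ?thesis
  proof (rule elliptic_liouville[OF discrete_periodic_punctures hE perE])
    fix b assume "b \<in> punctures"
    then have "\<exists>c. pole_le E b 0 c"
      using pole_le_punctures[of E 0 b] perE at_tpt[OF oE0] by blast
    then show "\<exists>c. (E \<longlongrightarrow> c) (at b)" by (simp add: pole_le_def)
  qed
qed

lemma P_prod_eq_affine_wp_trace:
  "\<exists>e. \<forall>z. z \<notin> punctures \<longrightarrow> P_prod j z = pole_coeff (- j) * pole_coeff j * wp_trace z + e"
proof -
  define c where "c = pole_coeff (- j) * pole_coeff j"
  define E where "E = (\<lambda>z. P_prod j z - c * wp_trace z)"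
  have "\<exists>e. \<forall>z. z \<notin> punctures \<longrightarrow> E z = e"
  proof (rule alpha_invariant_elliptic_const)
    show "E holomorphic_on - punctures"
      unfolding E_def P_prod_def[abs_def] by (intro holomorphic_intros holomorphic_P_dlog holomorphic_wp_trace)
    show "\<And>z p. z \<notin> punctures \<Longrightarrow> p \<in> \<Lambda> \<Longrightarrow> E (z + p) = E z"
      by (simp add: E_def P_prod_def P_dlog_periodic wp_trace_periodic)
    show "\<forall>\<^sub>F x in at q. E (x + \<alpha>) = E x" for q
      using discrete_periodic_eventually_notin[OF discrete_periodic_punctures, of q]
    proof eventually_elim
      case (elim x)
      have "x + \<alpha> \<notin> punctures" using elim punctures_shift_alpha_iff[of "x + \<alpha>" 1] by simp
      then show ?case using P_prod_shift_alpha[of "x + \<alpha>" j] wp_trace_shift_alpha[of "x + \<alpha>"]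
        by (simp add: E_def)
    qed
    have "pole_le (P_prod j) 0 (1 + 1) c"
      unfolding P_prod_def c_def
      using pole_le_mult[OF P_dlog_pole_le[of 0 "-j"] P_dlog_pole_le[of 0 j]] N_pos by (simp add: tpt_def)
    then have "pole_le (P_prod j) 0 2 c" by (simp add: numeral_2_eq_2)
    from pole_le_diff[OF this pole_le_cmult[OF wp_trace_pole_le, of c]]
    show "pole_le E 0 (Suc (Suc 0)) 0" by (simp add: E_def numeral_2_eq_2)
  qed
  then show ?thesis by (auto simp: E_def c_def algebra_simps)
qed

theorem wp_lattice_alpha_alg_eq:
  assumes j: "\<not> int N dvd j"
  shows "eq_on_sets (punctured \<tau> \<alpha> N) (gen_alg {wp \<Lambda>\<^sub>\<alpha>})
           (gen_alg {\<lambda>z. P \<tau> \<alpha> N (- j) z * P \<tau> \<alpha> N j z})"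
proof -
  define c where "c = pole_coeff (- j) * pole_coeff j"
  have c0: "c \<noteq> 0" using pole_coeff_nonzero[OF j] by (simp add: c_def pole_coeff_minus)
  obtain e where e: "\<And>z. z \<notin> punctures \<Longrightarrow> P_prod j z = c * wp_trace z + e"
    using P_prod_eq_affine_wp_trace[of j] by (auto simp: c_def)
  define K where "K = (\<Sum>k<N. wp \<Lambda> (- (of_nat k * \<alpha>)))"
  have W: "wp_trace z = wp \<Lambda>\<^sub>\<alpha> z + K" for z
    by (simp add: wp_lattice_alpha_eq wp_trace_def K_def sum_subtractf)
  have "P \<tau> \<alpha> N (- j) z * P \<tau> \<alpha> N j z = c * wp \<Lambda>\<^sub>\<alpha> z + (c * K + e)"
    if "z \<in> punctured \<tau> \<alpha> N" for z
    using that e[of z] P_eq_P_dlog[of z] by (simp add: punctures_eq_compl P_prod_def W algebra_simps)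
  then show ?thesis by (rule eq_on_sets_gen_alg_affine[OF c0])
qed

end

theorem proposition5p6:
  fixes \<tau> \<alpha> :: complex and N :: nat
  assumes "Im \<tau> > 0" and "N \<ge> 3" and "exact_order \<tau> \<alpha> N"
  shows "eq_on_sets (punctured \<tau> \<alpha> N) (O_T \<tau> \<alpha> N)
           (gen_alg {P \<tau> \<alpha> N j | j. 1 \<le> j \<and> j \<le> int N - 1})
       \<and> (\<forall>j::int. \<not> (int N dvd j) \<longrightarrow>
           eq_on_sets (punctured \<tau> \<alpha> N) (gen_alg {wp (lattice_alpha \<tau> \<alpha>)})
             (gen_alg {\<lambda>z. P \<tau> \<alpha> N (- j) z * P \<tau> \<alpha> N j z}))"
proof -
  interpret torsion_point \<tau> \<alpha> N
    by unfold_locales (use assms in auto)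
  show ?thesis using O_T_eq_P_alg wp_lattice_alpha_alg_eq by blast
qed

end
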